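(* Let $n\geq1$ and $\mu\vdash 2n$. Then for every $\lambda\vdash n$, $$\hat{\phi}^{2\lambda}_{\mu}=\sum_{\tau\vdash n}m(\mu,2\tau)\,\hat{\theta}^{2\lambda}_{2\tau}.$$ Equivalently, writing $\hat{\phi}_\mu=(\hat{\phi}^{2\lambda}_\mu)_{\lambda\vdash n}$ and $m(\mu)=(m(\mu,2\tau))_{\tau\vdash n}$ as column vectors, $\hat{\phi}_\mu=\hat{\Theta}(2n)\,m(\mu)$.
   Context: Let $K_{2n}$ be the complete graph on $\{1,\ldots,2n\}$, ${\cal M}_{2n}$ its set of perfect matchings, and $[i,j]$ the edge joining $i,j$. For $A,B\in{\cal M}_{2n}$, $d(A,B)$ is the partition of $2n$ whose parts are the numbers of vertices of the connected components of the spanning subgraph with edge set $A\cup B$; it has the form $2\mu$ with $\mu\vdash n$. The group $S_{2n}$ acts on ${\cal M}_{2n}$ by relabelling vertices. For $\mu\vdash n$, $N_{2\mu}(A)=\sum_{B:\,d(A,B)=2\mu}B$ defines an element of ${\cal B}_{2n}=\mathrm{End}_{S_{2n}}({\mathbb C}[{\cal M}_{2n}])$. It is known that ${\mathbb C}[{\cal M}_{2n}]\cong\bigoplus_{\lambda\vdash n}V^{2\lambda}$ multiplicity-free, where $V^\nu$ is the irreducible $S_{2n}$-module indexed by $\nu$ and $2\lambda$ doubles the row lengths of $\lambda$. The scalar by which $N_{2\tau}$ acts on $V^{2\lambda}$ is $\hat{\theta}^{2\lambda}_{2\tau}$, and $\hat{\Theta}(2n)=(\hat{\theta}^{2\lambda}_{2\tau})_{\lambda,\tau\vdash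 n}$. For $\nu,\rho\vdash 2n$, $\hat{\phi}^\nu_\rho$ is the scalar by which the class sum of permutations of cycle type $\rho$ acts on $V^\nu$. Let $I=\{[1,n+1],[2,n+2],\ldots,[n,2n]\}$. For $\rho\vdash 2n$ and $\tau\vdash n$, $m(\rho,2\tau)$ is the number of permutations in $S_{2n}$ of cycle type $\rho$ sending $I$ to $A$, where $A\in{\cal M}_{2n}$ is any matching with $d(I,A)=2\tau$; this number does not depend on the choice of such $A$. *)

theory Defs
  imports Complex_Main "HOL-Library.Multiset" "HOL-Combinatorics.Permutations"
begin

(* Partitions are multisets of positive naturals; vertices/entries are 0-indexed: {0..<m}. *)

definition is_partition :: "nat \<Rightarrow> nat multiset \<Rightarrow> bool" where
  "is_partition m p \<longleftrightarrow> (\<forall>x\<in>#p. 0 < x) \<and> sum_mset p = m"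

definition double :: "nat multiset \<Rightarrow> nat multiset" where
  "double p = image_mset (\<lambda>x. 2 * x) p"

definition orbit_of :: "(nat \<Rightarrow> nat) \<Rightarrow> nat \<Rightarrow> nat set" where
  "orbit_of s x = {(s ^^ k) x | k. True}"

definition cycle_type :: "nat \<Rightarrow> (nat \<Rightarrow> nat) \<Rightarrow> nat multiset" where
  "cycle_type m s = image_mset card (mset_set {orbit_of s x | x. x < m})"

definition perms_of_type :: "nat \<Rightarrow> nat multiset \<Rightarrow> (nat \<Rightarrow> nat) set" where
  "perms_of_type m r = {s. s permutes {0..<m} \<and> cycle_type m s = r}"

definition rows :: "nat multiset \<Rightarrow> nat list" where
  "rows nu = rev (sorted_list_of_multiset nu)"

definition cells :: "nat multiset \<Rightarrow> (nat \<times> nat) set" where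
  "cells nu = {(i, j). i < length (rows nu) \<and> j < rows nu ! i}"

definition tableaux :: "nat multiset \<Rightarrow> (nat \<Rightarrow> nat \<times> nat) set" where
  "tableaux nu = {t. bij_betw t {0..<sum_mset nu} (cells nu)}"

definition column_group :: "nat multiset \<Rightarrow> (nat \<Rightarrow> nat \<times> nat) \<Rightarrow> (nat \<Rightarrow> nat) set" where
  "column_group nu t = {p. p permutes {0..<sum_mset nu} \<and>
      (\<forall>x < sum_mset nu. snd (t (p x)) = snd (t x))}"

(* a tabloid is represented by its row function: entry \<mapsto> row index (0 outside {0..<m}) *)
definition tabloid_of :: "nat multiset \<Rightarrow> (nat \<Rightarrow> nat \<times> nat) \<Rightarrow> (nat \<Rightarrow> nat) \<Rightarrow> (nat \<Rightarrow> nat)" where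
  "tabloid_of nu t p = (\<lambda>x. if x < sum_mset nu then fst (t (p x)) else 0)"

(* polytabloid e_t = sum over column group of sign(p) {p t}, as a function on tabloids;
   (reindexed p \<mapsto> inv p, which preserves the sign) *)
definition polytabloid :: "nat multiset \<Rightarrow> (nat \<Rightarrow> nat \<times> nat) \<Rightarrow> (nat \<Rightarrow> nat) \<Rightarrow> complex" where
  "polytabloid nu t = (\<lambda>T. \<Sum>p\<in>column_group nu t.
      of_int (sign p) * (if T = tabloid_of nu t p then 1 else 0))"

definition specht :: "nat multiset \<Rightarrow> ((nat \<Rightarrow> nat) \<Rightarrow> complex) set" where
  "specht nu = {v. \<exists>F c. finite F \<and> F \<subseteq> tableaux nu \<and>
      v = (\<lambda>T. \<Sum>t\<in>F. c t * polytabloid nu t T)}"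

(* permutation action on functions on tabloids: (s.f)(T) = f(s^{-1} T), s^{-1}T = T o s *)
definition act_tab :: "(nat \<Rightarrow> nat) \<Rightarrow> ((nat \<Rightarrow> nat) \<Rightarrow> complex) \<Rightarrow> ((nat \<Rightarrow> nat) \<Rightarrow> complex)" where
  "act_tab s f = (\<lambda>T. f (T \<circ> s))"

definition class_sum_tab :: "nat \<Rightarrow> nat multiset \<Rightarrow> ((nat \<Rightarrow> nat) \<Rightarrow> complex) \<Rightarrow> ((nat \<Rightarrow> nat) \<Rightarrow> complex)" where
  "class_sum_tab m r f = (\<lambda>T. \<Sum>s\<in>perms_of_type m r. act_tab s f T)"

(* phi_hat^nu_rho : the scalar by which the class sum of type rho acts on V^nu = S^nu *)
definition phi_hat :: "nat multiset \<Rightarrow> nat multiset \<Rightarrow> complex" where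
  "phi_hat nu rho = (THE c. \<forall>v\<in>specht nu. class_sum_tab (sum_mset nu) rho v = (\<lambda>T. c * v T))"

definition matchings :: "nat \<Rightarrow> nat set set set" where
  "matchings n = {A. (\<forall>e\<in>A. \<exists>i j. e = {i, j} \<and> i \<noteq> j \<and> i < 2 * n \<and> j < 2 * n) \<and>
                     (\<forall>x < 2 * n. \<exists>!e. e \<in> A \<and> x \<in> e)}"

definition comp_of :: "nat set set \<Rightarrow> nat \<Rightarrow> nat set" where
  "comp_of E x = {y. (x, y) \<in> {(u, v). {u, v} \<in> E}\<^sup>*}"

definition dmatch :: "nat \<Rightarrow> nat set set \<Rightarrow> nat set set \<Rightarrow> nat multiset" where
  "dmatch n A B = image_mset card (mset_set {comp_of (A \<union> B) x | x. x < 2 * n})"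

(* elements of C[M_{2n}] are functions M_{2n} \<rightarrow> C (zero outside matchings) *)
definition in_CM :: "nat \<Rightarrow> (nat set set \<Rightarrow> complex) \<Rightarrow> bool" where
  "in_CM n g \<longleftrightarrow> (\<forall>B. B \<notin> matchings n \<longrightarrow> g B = 0)"

(* relabelling action: s.delta_A = delta_{s A} *)
definition act_M :: "(nat \<Rightarrow> nat) \<Rightarrow> (nat set set \<Rightarrow> complex) \<Rightarrow> (nat set set \<Rightarrow> complex)" where
  "act_M s g = (\<lambda>B. g ((\<lambda>e. inv s ` e) ` B))"

(* N_{2tau}(A) = sum of B with d(A,B) = 2tau, extended linearly *)
definition N_op :: "nat \<Rightarrow> nat multiset \<Rightarrow> (nat set set \<Rightarrow> complex) \<Rightarrow> (nat set set \<Rightarrow> complex)" where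
  "N_op n tau g = (\<lambda>B. if B \<in> matchings n then
       (\<Sum>A\<in>{A \<in> matchings n. dmatch n A B = double tau}. g A) else 0)"

definition equivariant_into_CM :: "nat \<Rightarrow> nat multiset \<Rightarrow>
    (((nat \<Rightarrow> nat) \<Rightarrow> complex) \<Rightarrow> (nat set set \<Rightarrow> complex)) \<Rightarrow> bool" where
  "equivariant_into_CM n nu f \<longleftrightarrow>
     (\<forall>u\<in>specht nu. in_CM n (f u)) \<and>
     (\<forall>u\<in>specht nu. \<forall>v\<in>specht nu. \<forall>a b.
        f (\<lambda>T. a * u T + b * v T) = (\<lambda>B. a * f u B + b * f v B)) \<and>
     (\<forall>s u. s permutes {0..<2 * n} \<longrightarrow> u \<in> specht nu \<longrightarrow> f (act_tab s u) = act_M s (f u))"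

definition V_in_CM :: "nat \<Rightarrow> nat multiset \<Rightarrow> (nat set set \<Rightarrow> complex) set" where
  "V_in_CM n lam = {f u | f u. equivariant_into_CM n (double lam) f \<and> u \<in> specht (double lam)}"

definition theta_hat :: "nat \<Rightarrow> nat multiset \<Rightarrow> nat multiset \<Rightarrow> complex" where
  "theta_hat n lam tau = (THE c. \<forall>v\<in>V_in_CM n lam. N_op n tau v = (\<lambda>B. c * v B))"

(* I = {[1,n+1],...,[n,2n]} (0-indexed: {i, n+i}, i < n) *)
definition I_match :: "nat \<Rightarrow> nat set set" where
  "I_match n = {{i, n + i} | i. i < n}"

definition m_count :: "nat \<Rightarrow> nat multiset \<Rightarrow> nat multiset \<Rightarrow> nat" where
  "m_count n rho tau =
     (let A = (SOME A. A \<in> matchings n \<and> dmatch n (I_match n) A = double tau) in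
      card {s \<in> perms_of_type (2 * n) rho. (\<lambda>e. s ` e) ` I_match n = A})"

end

theory Submission
  imports Defs
begin

text \<open>
  Both sides are eigenvalues of the class sum of type \<open>\<mu>\<close>, compared on one nonzero vector of
  the copy of \<open>V\<^sup>2\<^sup>\<lambda>\<close> in \<open>\<complex>[M\<^sub>2\<^sub>n]\<close>. On \<open>\<complex>[M\<^sub>2\<^sub>n]\<close> the class sum equals
  \<open>\<Sum>\<^sub>\<tau> m(\<mu>, 2\<tau>) N\<^sub>2\<^sub>\<tau>\<close>: pairs of matchings with the same \<open>d\<close> form a single
  \<open>S\<^sub>2\<^sub>n\<close>-orbit (the components of \<open>A \<union> B\<close> are alternating cycles), so the number of permutations
  of type \<open>\<mu>\<close> sending \<open>A\<close> to \<open>B\<close> is \<open>m(\<mu>, d(A, B))\<close>. The vector is the image of a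
  polytabloid \<open>e\<^sub>t\<close> under an explicit equivariant map \<open>S\<^sup>2\<^sup>\<lambda> \<rightarrow> \<complex>[M\<^sub>2\<^sub>n]\<close>, where \<open>t\<close> puts
  the ends of every edge of \<open>I\<close> next to each other in a row; its coefficient at \<open>I\<close> is a
  positive count, because the column permutations involved are even. On this vector the class
  sum acts by \<open>\<phi>\<^sup>2\<^sup>\<lambda>\<^sub>\<mu>\<close> (Schur's lemma for Specht modules, via James's column
  antisymmetrizer) and \<open>N\<^sub>2\<^sub>\<tau>\<close> by \<open>\<theta>\<^sup>2\<^sup>\<lambda>\<^sub>2\<^sub>\<tau>\<close>, since \<open>V\<^sup>2\<^sup>\<lambda>\<close> occurs in
  \<open>\<complex>[M\<^sub>2\<^sub>n]\<close> only once: the invariant operators on \<open>\<complex>[M\<^sub>2\<^sub>n]\<close> commute, as every pair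
  \<open>(A, B)\<close> is conjugate to \<open>(B, A)\<close>.
\<close>

lemma permutes_less_iff: "p permutes {0..<(m::nat)} \<Longrightarrow> p x < m \<longleftrightarrow> x < m"
  using permutes_in_image[of p "{0..<m}" x] by simp

lemma permutes_less: "p permutes {0..<(m::nat)} \<Longrightarrow> x < m \<Longrightarrow> p x < m"
  by (simp add: permutes_less_iff)

lemma permutes_less_permutation: "p permutes {0..<(m::nat)} \<Longrightarrow> permutation p"
  using permutes_imp_permutation[of "{0..<m}" p] by simp

lemma permutes_lessI:
  assumes "inj_on p {0..<m}" and "\<And>x. x < m \<Longrightarrow> p x < (m::nat)" and "\<And>x. m \<le> x \<Longrightarrow> p x = x"
  shows "p permutes {0..<m}"
proof (rule bij_imp_permutes)
  have "p ` {0..<m} \<subseteq> {0..<m}" using assms(2) by auto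
  then have "p ` {0..<m} = {0..<m}" using endo_inj_surj[OF _ _ assms(1)] by simp
  then show "bij_betw p {0..<m} {0..<m}" using assms(1) by (simp add: bij_betw_def)
qed (use assms(3) in simp)

subsection \<open>Young diagrams and tableaux\<close>

definition row_len :: "nat multiset \<Rightarrow> nat \<Rightarrow> nat" where
  "row_len nu r = (if r < length (rows nu) then rows nu ! r else 0)"

definition col_len :: "nat multiset \<Rightarrow> nat \<Rightarrow> nat" where
  "col_len nu j = card {i. j < row_len nu i}"

lemma row_len_antimono:
  assumes "i \<le> j" shows "row_len nu j \<le> row_len nu i"
proof (cases "i < j \<and> j < length (rows nu)")
  case True
  then show ?thesis using sorted_wrt_nth_less[of "(\<ge>)" "rows nu" i j]
    unfolding row_len_def rows_def by (simp add: sorted_wrt_rev)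
next
  case False
  then show ?thesis using assms unfolding row_len_def by auto
qed

lemma row_len_le: "row_len nu i \<le> sum_mset nu"
proof -
  have "sum_list (rows nu) = sum_mset nu"
    unfolding rows_def by (simp add: sum_mset_sum_list[symmetric])
  then show ?thesis
    unfolding row_len_def using elem_le_sum_list[of i "rows nu"] by auto
qed

lemma rows_of_column: "{i. j < row_len nu i} = {..<col_len nu j}"
proof -
  let ?Q = "{i. j < row_len nu i}"
  have fin: "finite ?Q"
    by (rule finite_subset[of _ "{..<length (rows nu)}"]) (auto simp: row_len_def split: if_splits)
  have "?Q \<subseteq> {..<card ?Q}"
  proof
    fix x assume x: "x \<in> ?Q"
    have "{..x} \<subseteq> ?Q"
    proof
      fix y assume "y \<in> {..x}"
      then show "y \<in> ?Q" using x row_len_antimono[of y x nu] by simp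
    qed
    then have "card {..x} \<le> card ?Q" by (rule card_mono[OF fin])
    then show "x \<in> {..<card ?Q}" by simp
  qed
  then show ?thesis unfolding col_len_def using card_subset_eq[of "{..<card ?Q}" ?Q] by auto
qed

lemma mem_cells_iff: "(i, j) \<in> cells nu \<longleftrightarrow> j < row_len nu i"
  unfolding cells_def row_len_def by auto

lemma mem_cells_iff': "c \<in> cells nu \<longleftrightarrow> snd c < row_len nu (fst c)"
  using mem_cells_iff[of "fst c" "snd c" nu] by simp

lemma cells_eq_Sigma: "cells nu = (SIGMA i:{..<length (rows nu)}. {..<row_len nu i})"
  unfolding cells_def row_len_def by auto

lemma finite_cells: "finite (cells nu)"
  unfolding cells_eq_Sigma by auto

lemma card_cells: "card (cells nu) = sum_mset nu"
proof -
  have "(\<Sum>i<length (rows nu). row_len nu i) = (\<Sum>i<length (rows nu). rows nu ! i)"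
    by (rule sum.cong) (auto simp: row_len_def)
  also have "\<dots> = sum_list (rows nu)" by (simp add: sum_list_sum_nth atLeast0LessThan)
  also have "\<dots> = sum_mset nu" unfolding rows_def by (simp add: sum_mset_sum_list[symmetric])
  finally show ?thesis unfolding cells_eq_Sigma by simp
qed

lemma ex_tableau: "\<exists>t. t \<in> tableaux nu"
  using ex_bij_betw_nat_finite[OF finite_cells, of nu] by (auto simp: tableaux_def card_cells)

context
  fixes t nu assumes t: "t \<in> tableaux nu"
begin

lemma tableau_in_cells: "x < sum_mset nu \<Longrightarrow> t x \<in> cells nu"
  using t unfolding tableaux_def bij_betw_def by auto

lemma tableau_inj: "x < sum_mset nu \<Longrightarrow> y < sum_mset nu \<Longrightarrow> t x = t y \<Longrightarrow> x = y"
  using t unfolding tableaux_def bij_betw_def inj_on_def by auto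

lemma tableau_inv_into:
  assumes "c \<in> cells nu"
  shows "inv_into {0..<sum_mset nu} t c < sum_mset nu" "t (inv_into {0..<sum_mset nu} t c) = c"
proof -
  have "c \<in> t ` {0..<sum_mset nu}" using t assms unfolding tableaux_def bij_betw_def by simp
  then show "inv_into {0..<sum_mset nu} t c < sum_mset nu" "t (inv_into {0..<sum_mset nu} t c) = c"
    using inv_into_into[of c t "{0..<sum_mset nu}"] f_inv_into_f[of c t "{0..<sum_mset nu}"] by auto
qed

lemma tableau_surj: "c \<in> cells nu \<Longrightarrow> \<exists>x < sum_mset nu. t x = c"
  using tableau_inv_into by blast

lemma tableau_column_less: "x < sum_mset nu \<Longrightarrow> snd (t x) < sum_mset nu"
  using tableau_in_cells[of x] row_len_le[of nu "fst (t x)"] by (auto simp: mem_cells_iff')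

lemma card_column: "card {x. x < sum_mset nu \<and> snd (t x) = j} = col_len nu j"
proof -
  have "bij_betw (\<lambda>x. fst (t x)) {x. x < sum_mset nu \<and> snd (t x) = j} {i. j < row_len nu i}"
  proof (rule bij_betwI')
    fix x y assume "x \<in> {x. x < sum_mset nu \<and> snd (t x) = j}" "y \<in> {x. x < sum_mset nu \<and> snd (t x) = j}"
    then show "(fst (t x) = fst (t y)) = (x = y)" using tableau_inj by (auto simp: prod_eq_iff)
  next
    fix x assume "x \<in> {x. x < sum_mset nu \<and> snd (t x) = j}"
    then show "fst (t x) \<in> {i. j < row_len nu i}" using tableau_in_cells by (auto simp: mem_cells_iff')
  next
    fix i assume "i \<in> {i. j < row_len nu i}"
    then have "(i, j) \<in> cells nu" by (simp add: mem_cells_iff)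
    then obtain x where "x < sum_mset nu" "t x = (i, j)" using tableau_surj by blast
    then show "\<exists>x\<in>{x. x < sum_mset nu \<and> snd (t x) = j}. i = fst (t x)" by force
  qed
  then show ?thesis unfolding col_len_def by (rule bij_betw_same_card)
qed

end

lemma column_group_permutes: "p \<in> column_group nu t \<Longrightarrow> p permutes {0..<sum_mset nu}"
  unfolding column_group_def by simp

lemma column_group_same_column:
  "p \<in> column_group nu t \<Longrightarrow> x < sum_mset nu \<Longrightarrow> snd (t (p x)) = snd (t x)"
  unfolding column_group_def by simp

lemma column_group_id: "id \<in> column_group nu t"
  unfolding column_group_def by (simp add: permutes_id)

lemma column_group_comp:
  "p \<in> column_group nu t \<Longrightarrow> q \<in> column_group nu t \<Longrightarrow> p \<circ> q \<in> column_group nu t"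
  unfolding column_group_def using permutes_compose[of q "{0..<sum_mset nu}" p]
  by (auto simp: permutes_less)

lemma column_group_inv:
  assumes p: "p \<in> column_group nu t"
  shows "inv p \<in> column_group nu t"
proof -
  have pp: "p permutes {0..<sum_mset nu}" using p by (rule column_group_permutes)
  have "snd (t (inv p x)) = snd (t x)" if "x < sum_mset nu" for x
    using column_group_same_column[OF p permutes_less[OF permutes_inv[OF pp] that]]
      permutes_inverses(1)[OF pp] by simp
  then show ?thesis unfolding column_group_def using permutes_inv[OF pp] by simp
qed

lemma finite_column_group: "finite (column_group nu t)"
  by (rule finite_subset[OF _ finite_permutations[of "{0..<sum_mset nu}"]])
     (auto simp: column_group_def)

lemma transpose_in_column_group:
  "a < sum_mset nu \<Longrightarrow> b < sum_mset nu \<Longrightarrow> snd (t a) = snd (t b) \<Longrightarrow>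
   transpose a b \<in> column_group nu t"
  unfolding column_group_def by (auto simp: permutes_swap_id transpose_def)

lemma card_column_group_pos: "card (column_group nu t) > 0"
  using column_group_id[of nu t] finite_column_group[of nu t] by (auto simp: card_gt_0_iff)

lemma sum_column_group_reindex:
  assumes q: "q \<in> column_group nu t"
  shows "(\<Sum>c\<in>column_group nu t. f c) = (\<Sum>c\<in>column_group nu t. f (q \<circ> c))"
proof (rule sum.reindex_bij_witness[where i = "\<lambda>c. q \<circ> c" and j = "\<lambda>c. inv q \<circ> c"])
  have qp: "q permutes {0..<sum_mset nu}" by (rule column_group_permutes[OF q])
  fix c :: "nat \<Rightarrow> nat"
  show "q \<circ> (inv q \<circ> c) = c" "inv q \<circ> (q \<circ> c) = c"
    using permutes_inv_o[OF qp] by (simp_all add: comp_assoc[symmetric])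
  assume "c \<in> column_group nu t"
  then show "inv q \<circ> c \<in> column_group nu t" "q \<circ> c \<in> column_group nu t"
    using column_group_comp column_group_inv q by blast+
qed (use permutes_inv_o(1)[OF column_group_permutes[OF q]] in \<open>simp add: comp_assoc[symmetric]\<close>)

lemma tabloid_of_comp:
  "c permutes {0..<sum_mset nu} \<Longrightarrow> tabloid_of nu t p \<circ> c = tabloid_of nu t (p \<circ> c)"
  unfolding tabloid_of_def by (auto simp: permutes_less_iff fun_eq_iff)

lemma tabloid_of_inj_on_column_group:
  assumes t: "t \<in> tableaux nu" and p: "p \<in> column_group nu t" and q: "q \<in> column_group nu t"
    and eq: "tabloid_of nu t p = tabloid_of nu t q"
  shows "p = q"
proof
  fix x show "p x = q x"
  proof (cases "x < sum_mset nu")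
    case True
    have "fst (t (p x)) = fst (t (q x))" using fun_cong[OF eq, of x] True unfolding tabloid_of_def by simp
    moreover have "snd (t (p x)) = snd (t (q x))"
      using column_group_same_column[OF p True] column_group_same_column[OF q True] by simp
    ultimately show ?thesis
      using tableau_inj[OF t] permutes_less[OF column_group_permutes[OF p] True]
        permutes_less[OF column_group_permutes[OF q] True] by (simp add: prod_eq_iff)
  next
    case False
    then show ?thesis
      using permutes_not_in[OF column_group_permutes[OF p]] permutes_not_in[OF column_group_permutes[OF q]]
      by simp
  qed
qed

definition is_tabloid :: "nat multiset \<Rightarrow> (nat \<Rightarrow> nat) \<Rightarrow> bool" where
  "is_tabloid nu T \<longleftrightarrow> (\<forall>x. sum_mset nu \<le> x \<longrightarrow> T x = 0) \<and>
     (\<forall>r. card {x. x < sum_mset nu \<and> T x = r} = row_len nu r)"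

lemma is_tabloid_comp:
  assumes T: "is_tabloid nu T" and c: "c permutes {0..<sum_mset nu}"
  shows "is_tabloid nu (T \<circ> c)"
proof -
  let ?m = "sum_mset nu"
  have "card {x. x < ?m \<and> T (c x) = r} = row_len nu r" for r
  proof -
    have "bij_betw c {x. x < ?m \<and> T (c x) = r} {y. y < ?m \<and> T y = r}"
    proof (rule bij_betwI')
      fix y assume y: "y \<in> {y. y < ?m \<and> T y = r}"
      show "\<exists>x\<in>{x. x < ?m \<and> T (c x) = r}. y = c x"
        using y permutes_less[OF permutes_inv[OF c]] permutes_inverses(1)[OF c] by (intro bexI[of _ "inv c y"]) auto
    qed (use permutes_less[OF c] permutes_inj[OF c] in \<open>auto simp: inj_eq\<close>)
    then show ?thesis using T unfolding is_tabloid_def by (simp add: bij_betw_same_card)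
  qed
  moreover have "T (c x) = 0" if "?m \<le> x" for x
    using that permutes_not_in[OF c, of x] T unfolding is_tabloid_def by simp
  ultimately show ?thesis unfolding is_tabloid_def by simp
qed

lemma is_tabloid_tabloid_of:
  assumes t: "t \<in> tableaux nu" and p: "p permutes {0..<sum_mset nu}"
  shows "is_tabloid nu (tabloid_of nu t p)"
proof -
  let ?m = "sum_mset nu"
  have "card {x. x < ?m \<and> fst (t x) = r} = row_len nu r" for r
  proof -
    have "bij_betw t {x. x < ?m \<and> fst (t x) = r} ({r} \<times> {..<row_len nu r})"
    proof (rule bij_betwI')
      fix c assume c: "c \<in> {r} \<times> {..<row_len nu r}"
      then have "c \<in> cells nu" by (auto simp: mem_cells_iff')
      then obtain x where "x < ?m" "t x = c" using tableau_surj[OF t] by blast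
      then show "\<exists>x\<in>{x. x < ?m \<and> fst (t x) = r}. c = t x" using c by force
    qed (use tableau_inj[OF t] tableau_in_cells[OF t] in \<open>auto simp: mem_cells_iff' mem_Times_iff\<close>)
    then show ?thesis by (simp add: bij_betw_same_card)
  qed
  moreover have "{x. x < ?m \<and> tabloid_of nu t id x = r} = {x. x < ?m \<and> fst (t x) = r}" for r
    unfolding tabloid_of_def by auto
  ultimately have "is_tabloid nu (tabloid_of nu t id)"
    unfolding is_tabloid_def by (simp add: tabloid_of_def)
  then show ?thesis using is_tabloid_comp[OF _ p, of "tabloid_of nu t id"] tabloid_of_comp[OF p, of t id] by simp
qed

lemma card_tabloid_rows_le:
  assumes T: "is_tabloid nu T"
  shows "card {x. x < sum_mset nu \<and> T x \<le> r} = (\<Sum>i\<le>r. row_len nu i)"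
proof -
  have "{x. x < sum_mset nu \<and> T x \<le> r} = (\<Union>i\<le>r. {x. x < sum_mset nu \<and> T x = i})" by auto
  moreover have "card (\<Union>i\<le>r. {x. x < sum_mset nu \<and> T x = i}) = (\<Sum>i\<le>r. card {x. x < sum_mset nu \<and> T x = i})"
    by (rule card_UN_disjoint) auto
  ultimately have "card {x. x < sum_mset nu \<and> T x \<le> r} = (\<Sum>i\<le>r. card {x. x < sum_mset nu \<and> T x = i})"
    by simp
  then show ?thesis using T unfolding is_tabloid_def by simp
qed

lemma sum_min_col_len: "(\<Sum>j<sum_mset nu. min (Suc r) (col_len nu j)) = (\<Sum>i\<le>r. row_len nu i)"
proof -
  have "min (Suc r) (col_len nu j) = (\<Sum>i\<le>r. if j < row_len nu i then 1 else 0)" for j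
  proof -
    have "{..r} \<inter> {i. j < row_len nu i} = {..<min (Suc r) (col_len nu j)}"
      unfolding rows_of_column by auto
    then show ?thesis by (simp add: sum.If_cases)
  qed
  then have "(\<Sum>j<sum_mset nu. min (Suc r) (col_len nu j)) =
      (\<Sum>j<sum_mset nu. \<Sum>i\<le>r. if j < row_len nu i then 1 else 0)"
    by simp
  also have "\<dots> = (\<Sum>i\<le>r. \<Sum>j<sum_mset nu. if j < row_len nu i then 1 else 0)"
    by (rule sum.swap)
  also have "\<dots> = (\<Sum>i\<le>r. row_len nu i)"
  proof (rule sum.cong[OF refl])
    fix i
    have "{..<sum_mset nu} \<inter> {j. j < row_len nu i} = {..<row_len nu i}"
      using row_len_le[of nu i] by auto
    then show "(\<Sum>j<sum_mset nu. if j < row_len nu i then 1 else 0) = row_len nu i"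
      by (simp add: sum.If_cases)
  qed
  finally show ?thesis .
qed

text \<open>Counting the entries in rows \<open>\<le> r\<close> column by column: no column can hold more
  than \<open>min (r + 1) (col_len j)\<close> of them, and these bounds add up to the total, so every
  column is filled to capacity. An entry \<open>x\<close> outside the diagram would violate this for
  \<open>r = T x - 1\<close>.\<close>

lemma column_less_row_len:
  assumes t: "t \<in> tableaux nu" and T: "is_tabloid nu T"
    and inj: "\<And>x y. x < sum_mset nu \<Longrightarrow> y < sum_mset nu \<Longrightarrow> snd (t x) = snd (t y) \<Longrightarrow> T x = T y \<Longrightarrow> x = y"
    and x: "x < sum_mset nu"
  shows "snd (t x) < row_len nu (T x)"
proof (rule ccontr)
  assume contra: "\<not> snd (t x) < row_len nu (T x)"
  define m where "m = sum_mset nu"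
  define Col where "Col j = {x. x < m \<and> snd (t x) = j}" for j
  define S where "S r = {x. x < m \<and> T x \<le> r}" for r
  have le: "card (S r \<inter> Col j) \<le> min (Suc r) (col_len nu j)" for r j
  proof -
    have "inj_on T (S r \<inter> Col j)" using inj unfolding S_def Col_def m_def by (auto intro: inj_onI)
    moreover have "T ` (S r \<inter> Col j) \<subseteq> {..r}" unfolding S_def by auto
    ultimately have "card (S r \<inter> Col j) \<le> Suc r" using card_inj_on_le[of T _ "{..r}"] by simp
    moreover have "card (S r \<inter> Col j) \<le> col_len nu j"
      using card_mono[of "Col j" "S r \<inter> Col j"] card_column[OF t] unfolding Col_def m_def by simp
    ultimately show ?thesis by simp
  qed
  have "(\<Sum>j<m. card (S r \<inter> Col j)) = card (S r)" for r
  proof -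
    have "S r = (\<Union>j<m. S r \<inter> Col j)" using tableau_column_less[OF t] unfolding S_def Col_def m_def by auto
    moreover have "card (\<Union>j<m. S r \<inter> Col j) = (\<Sum>j<m. card (S r \<inter> Col j))"
      by (rule card_UN_disjoint) (auto simp: S_def Col_def)
    ultimately show ?thesis by simp
  qed
  then have eq: "card (S r \<inter> Col j) = min (Suc r) (col_len nu j)" if "j < m" for r j
    using sum_mono_inv[of "\<lambda>j. card (S r \<inter> Col j)" "{..<m}" "\<lambda>j. min (Suc r) (col_len nu j)" j]
      sum_min_col_len[of r nu] card_tabloid_rows_le[OF T, of r] le that unfolding S_def m_def by simp
  define j where "j = snd (t x)"
  have xC: "x \<in> Col j" and jm: "j < m"
    using x tableau_column_less[OF t x] unfolding Col_def j_def m_def by auto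
  have "T x \<notin> {..<col_len nu j}" unfolding rows_of_column[symmetric] using contra j_def by simp
  then have col: "col_len nu j \<le> T x" by simp
  show False
  proof (cases "T x")
    case 0
    then show False using eq[OF jm, of 0] xC col card_column[OF t, of j] unfolding Col_def m_def by auto
  next
    case (Suc r)
    then have "card (S r \<inter> Col j) = card (Col j)"
      using eq[OF jm, of r] col card_column[OF t, of j] unfolding Col_def m_def by simp
    then have "Col j \<subseteq> S r" using card_subset_eq[of "Col j" "S r \<inter> Col j"] unfolding Col_def by auto
    then show False using xC Suc unfolding S_def by auto
  qed
qed

lemma tabloid_eq_tabloid_of_column_perm:
  assumes t: "t \<in> tableaux nu" and T: "is_tabloid nu T"
    and inj: "\<And>x y. x < sum_mset nu \<Longrightarrow> y < sum_mset nu \<Longrightarrow> snd (t x) = snd (t y) \<Longrightarrow> T x = T y \<Longrightarrow> x = y"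
  shows "\<exists>p\<in>column_group nu t. T = tabloid_of nu t p"
proof -
  let ?m = "sum_mset nu"
  define p where "p x = (if x < ?m then inv_into {0..<?m} t (T x, snd (t x)) else x)" for x
  have px: "p x < ?m" "t (p x) = (T x, snd (t x))" if x: "x < ?m" for x
  proof -
    have "snd (t x) < row_len nu (T x)" by (rule column_less_row_len[OF t T inj x])
    then have "(T x, snd (t x)) \<in> cells nu" by (simp only: mem_cells_iff)
    then show "p x < ?m" "t (p x) = (T x, snd (t x))"
      using tableau_inv_into[OF t] x unfolding p_def by simp_all
  qed
  have "inj_on p {0..<?m}"
  proof (rule inj_onI)
    fix x y assume "x \<in> {0..<?m}" "y \<in> {0..<?m}" "p x = p y"
    then have "x < ?m" "y < ?m" "snd (t x) = snd (t y)" "T x = T y" using px(2)[of x] px(2)[of y] by auto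
    then show "x = y" by (rule inj)
  qed
  moreover have "p x = x" if "?m \<le> x" for x using that unfolding p_def by simp
  ultimately have "p permutes {0..<?m}" using px(1) by (auto intro: permutes_lessI)
  then have "p \<in> column_group nu t" unfolding column_group_def using px(2) by simp
  moreover have "T x = tabloid_of nu t p x" for x
    using px(2)[of x] T unfolding tabloid_of_def is_tabloid_def by (cases "x < ?m") simp_all
  ultimately show ?thesis by blast
qed

definition lincomb_closed :: "('x \<Rightarrow> complex) set \<Rightarrow> bool" where
  "lincomb_closed S \<longleftrightarrow> S \<noteq> {} \<and> (\<forall>u\<in>S. \<forall>v\<in>S. \<forall>a b. (\<lambda>T. a * u T + b * v T) \<in> S)"

definition linear_on :: "('x \<Rightarrow> complex) set \<Rightarrow> (('x \<Rightarrow> complex) \<Rightarrow> ('y \<Rightarrow> complex)) \<Rightarrow> bool" where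
  "linear_on S \<phi> \<longleftrightarrow> (\<forall>u\<in>S. \<forall>v\<in>S. \<forall>a b. \<phi> (\<lambda>T. a * u T + b * v T) = (\<lambda>T. a * \<phi> u T + b * \<phi> v T))"

lemma lincomb_closedD: "lincomb_closed S \<Longrightarrow> u \<in> S \<Longrightarrow> v \<in> S \<Longrightarrow> (\<lambda>T. a * u T + b * v T) \<in> S"
  unfolding lincomb_closed_def by blast

lemma linear_onD: "linear_on S \<phi> \<Longrightarrow> u \<in> S \<Longrightarrow> v \<in> S \<Longrightarrow> \<phi> (\<lambda>T. a * u T + b * v T) = (\<lambda>T. a * \<phi> u T + b * \<phi> v T)"
  unfolding linear_on_def by blast

lemma lincomb_closed_zero: assumes "lincomb_closed S" shows "(\<lambda>T. 0) \<in> S"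
proof -
  obtain u where u: "u \<in> S" using assms unfolding lincomb_closed_def by blast
  have "(\<lambda>T. 0 * u T + 0 * u T) \<in> S" by (rule lincomb_closedD[OF assms u u])
  then show ?thesis by simp
qed

lemma linear_on_zero: assumes "lincomb_closed S" "linear_on S \<phi>" shows "\<phi> (\<lambda>T. 0) = (\<lambda>T. 0)"
proof -
  obtain u where u: "u \<in> S" using assms unfolding lincomb_closed_def by blast
  have "\<phi> (\<lambda>T. 0 * u T + 0 * u T) = (\<lambda>T. 0 * \<phi> u T + 0 * \<phi> u T)" by (rule linear_onD[OF assms(2) u u])
  then show ?thesis by simp
qed

lemma linear_on_scale: assumes "linear_on S \<phi>" "u \<in> S" shows "\<phi> (\<lambda>T. a * u T) = (\<lambda>T. a * \<phi> u T)"
proof -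
  have "\<phi> (\<lambda>T. a * u T + 0 * u T) = (\<lambda>T. a * \<phi> u T + 0 * \<phi> u T)" by (rule linear_onD[OF assms(1) assms(2) assms(2)])
  then show ?thesis by simp
qed

lemma linear_on_sum:
  assumes S: "lincomb_closed S" and phi: "linear_on S \<phi>" and I: "finite I" and u: "\<forall>i\<in>I. u i \<in> S"
  shows "(\<lambda>T. \<Sum>i\<in>I. a i * u i T) \<in> S \<and> \<phi> (\<lambda>T. \<Sum>i\<in>I. a i * u i T) = (\<lambda>T. \<Sum>i\<in>I. a i * \<phi> (u i) T)"
  using I u
proof (induction I rule: finite_induct)
  case empty
  then show ?case using lincomb_closed_zero[OF S] linear_on_zero[OF S phi] by simp
next
  case (insert j I)
  let ?w = "\<lambda>T. \<Sum>i\<in>I. a i * u i T"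
  have w: "?w \<in> S" and pw: "\<phi> ?w = (\<lambda>T. \<Sum>i\<in>I. a i * \<phi> (u i) T)" using insert by auto
  have uj: "u j \<in> S" using insert by simp
  have eq: "(\<lambda>T. \<Sum>i\<in>insert j I. a i * u i T) = (\<lambda>T. a j * u j T + 1 * ?w T)"
    using insert by simp
  have "(\<lambda>T. a j * u j T + 1 * ?w T) \<in> S" by (rule lincomb_closedD[OF S uj w])
  moreover have "\<phi> (\<lambda>T. a j * u j T + 1 * ?w T) = (\<lambda>T. a j * \<phi> (u j) T + 1 * \<phi> ?w T)"
    by (rule linear_onD[OF phi uj w])
  ultimately show ?case unfolding eq using insert pw by simp
qed

lemma linear_on_id: "linear_on S (\<lambda>v. v)" unfolding linear_on_def by simp

lemma lincomb_closed_sum: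
  assumes S: "lincomb_closed S" and I: "finite I" and u: "\<forall>i\<in>I. u i \<in> S"
  shows "(\<lambda>T. \<Sum>i\<in>I. a i * u i T) \<in> S"
  using linear_on_sum[OF S linear_on_id I u] by blast

subsection \<open>Specht modules\<close>

lemma lincomb_closed_specht: "lincomb_closed (specht nu)"
  unfolding lincomb_closed_def
proof (intro conjI ballI allI)
  have "(\<lambda>T. \<Sum>t\<in>{}. (\<lambda>_. 0) t * polytabloid nu t T) \<in> specht nu"
    unfolding specht_def by (rule CollectI, rule exI[where x="{}"], rule exI[where x="\<lambda>_. 0"]) simp
  then show "specht nu \<noteq> {}" by blast
next
  fix u v a b assume u: "u \<in> specht nu" and v: "v \<in> specht nu"
  obtain F1 c1 where F1: "finite F1" "F1 \<subseteq> tableaux nu" and u': "u = (\<lambda>T. \<Sum>t\<in>F1. c1 t * polytabloid nu t T)"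
    using u unfolding specht_def by blast
  obtain F2 c2 where F2: "finite F2" "F2 \<subseteq> tableaux nu" and v': "v = (\<lambda>T. \<Sum>t\<in>F2. c2 t * polytabloid nu t T)"
    using v unfolding specht_def by blast
  define c where "c t = a * (if t \<in> F1 then c1 t else 0) + b * (if t \<in> F2 then c2 t else 0)" for t
  have fin: "finite (F1 \<union> F2)" using F1 F2 by simp
  have "(\<lambda>T. a * u T + b * v T) = (\<lambda>T. \<Sum>t\<in>F1 \<union> F2. c t * polytabloid nu t T)"
  proof
    fix T
    have s1: "(\<Sum>t\<in>F1. c1 t * polytabloid nu t T) = (\<Sum>t\<in>F1 \<union> F2. (if t \<in> F1 then c1 t else 0) * polytabloid nu t T)"
      by (rule sum.mono_neutral_cong_left) (use fin in auto)
    have s2: "(\<Sum>t\<in>F2. c2 t * polytabloid nu t T) = (\<Sum>t\<in>F1 \<union> F2. (if t \<in> F2 then c2 t else 0) * polytabloid nu t T)"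
      by (rule sum.mono_neutral_cong_left) (use fin in auto)
    show "a * u T + b * v T = (\<Sum>t\<in>F1 \<union> F2. c t * polytabloid nu t T)"
      unfolding u' v' s1 s2 c_def by (simp add: sum_distrib_left sum.distrib algebra_simps)
  qed
  then show "(\<lambda>T. a * u T + b * v T) \<in> specht nu" unfolding specht_def
    by (intro CollectI exI[where x="F1 \<union> F2"] exI[where x=c]) (use fin F1 F2 in simp)
qed

lemma polytabloid_in_specht: "t \<in> tableaux nu \<Longrightarrow> polytabloid nu t \<in> specht nu"
proof -
  assume t: "t \<in> tableaux nu"
  have "polytabloid nu t = (\<lambda>T. \<Sum>t'\<in>{t}. (\<lambda>_. 1) t' * polytabloid nu t' T)" by simp
  then show ?thesis unfolding specht_def
    by (intro CollectI exI[where x="{t}"] exI[where x="\<lambda>_. 1"]) (use t in simp)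
qed

lemma polytabloid_nonzeroD: "t \<in> tableaux nu \<Longrightarrow> polytabloid nu t T \<noteq> 0 \<Longrightarrow> \<exists>p\<in>column_group nu t. T = tabloid_of nu t p"
  unfolding polytabloid_def by (rule ccontr) simp

lemma specht_nonzero_is_tabloid: "v \<in> specht nu \<Longrightarrow> v T \<noteq> 0 \<Longrightarrow> is_tabloid nu T"
proof -
  assume v: "v \<in> specht nu" and nz: "v T \<noteq> 0"
  obtain F c where F: "finite F" "F \<subseteq> tableaux nu" and v': "v = (\<lambda>T. \<Sum>t\<in>F. c t * polytabloid nu t T)"
    using v unfolding specht_def by blast
  have "\<exists>t\<in>F. polytabloid nu t T \<noteq> 0"
  proof (rule ccontr)
    assume "\<not> ?thesis"
    then have "v T = 0" unfolding v' by simp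
    then show False using nz by simp
  qed
  then obtain t p where "t \<in> tableaux nu" "p \<in> column_group nu t" "T = tabloid_of nu t p"
    using polytabloid_nonzeroD F by blast
  then show ?thesis using is_tabloid_tabloid_of column_group_permutes by blast
qed

lemma act_tab_column_group_polytabloid:
  assumes t: "t \<in> tableaux nu" and c: "c \<in> column_group nu t"
  shows "act_tab c (polytabloid nu t) = (\<lambda>T. of_int (sign c) * polytabloid nu t T)"
proof
  fix T
  let ?G = "column_group nu t"
  have cp: "c permutes {0..<sum_mset nu}" by (rule column_group_permutes[OF c])
  have "act_tab c (polytabloid nu t) T = (\<Sum>p\<in>?G. of_int (sign p) * (if T \<circ> c = tabloid_of nu t p then 1 else 0))"
    unfolding act_tab_def polytabloid_def by simp
  also have "\<dots> = (\<Sum>p\<in>?G. of_int (sign (p \<circ> c)) * (if T \<circ> c = tabloid_of nu t (p \<circ> c) then 1 else 0))"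
  proof (rule sum.reindex_bij_witness[where j = "\<lambda>p. p \<circ> inv c" and i = "\<lambda>p. p \<circ> c"])
    fix p :: "nat \<Rightarrow> nat"
    show "p \<circ> c \<circ> inv c = p" using permutes_inv_o(1)[OF cp] by (simp add: comp_assoc)
    show "p \<circ> inv c \<circ> c = p" using permutes_inv_o(2)[OF cp] by (simp add: comp_assoc)
    assume "p \<in> ?G"
    then show "p \<circ> c \<in> ?G" "p \<circ> inv c \<in> ?G" using column_group_comp column_group_inv c by blast+
  qed (use permutes_inv_o(2)[OF cp] in \<open>simp add: comp_assoc\<close>)
  also have "\<dots> = (\<Sum>p\<in>?G. of_int (sign c) * (of_int (sign p) * (if T = tabloid_of nu t p then 1 else 0)))"
  proof (rule sum.cong[OF refl])
    fix p assume p: "p \<in> ?G"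
    have "sign (p \<circ> c) = sign p * sign c"
      using sign_compose[OF permutes_less_permutation[OF column_group_permutes[OF p]] permutes_less_permutation[OF cp]] .
    moreover have "T \<circ> c = tabloid_of nu t (p \<circ> c) \<longleftrightarrow> T = tabloid_of nu t p"
    proof
      assume "T \<circ> c = tabloid_of nu t (p \<circ> c)"
      then have "T \<circ> c = tabloid_of nu t p \<circ> c" using tabloid_of_comp[OF cp] by simp
      then have "T \<circ> c \<circ> inv c = tabloid_of nu t p \<circ> c \<circ> inv c" by simp
      then show "T = tabloid_of nu t p" using permutes_inv_o(1)[OF cp] by (simp add: comp_assoc)
    next
      assume "T = tabloid_of nu t p"
      then show "T \<circ> c = tabloid_of nu t (p \<circ> c)" using tabloid_of_comp[OF cp] by simp
    qed
    ultimately show "of_int (sign (p \<circ> c)) * (if T \<circ> c = tabloid_of nu t (p \<circ> c) then 1 else 0) =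
         of_int (sign c) * (of_int (sign p) * (if T = tabloid_of nu t p then 1 else (0::complex)))"
      by simp
  qed
  also have "\<dots> = of_int (sign c) * polytabloid nu t T"
    unfolding polytabloid_def by (simp add: sum_distrib_left)
  finally show "act_tab c (polytabloid nu t) T = of_int (sign c) * polytabloid nu t T" .
qed

lemma column_group_cong:
  assumes "\<forall>x < sum_mset nu. t x = t' x"
  shows "column_group nu t = column_group nu t'"
proof -
  have "p permutes {0..<sum_mset nu} \<Longrightarrow> x < sum_mset nu \<Longrightarrow> t (p x) = t' (p x) \<and> t x = t' x" for p x
    using assms permutes_less by blast
  then show ?thesis unfolding column_group_def by auto
qed

lemma polytabloid_cong:
  assumes "\<forall>x < sum_mset nu. t x = t' x"
  shows "polytabloid nu t = polytabloid nu t'"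
proof -
  have "tabloid_of nu t p = tabloid_of nu t' p" if "p permutes {0..<sum_mset nu}" for p
    using assms permutes_less[OF that] unfolding tabloid_of_def by (auto simp: fun_eq_iff)
  then show ?thesis unfolding polytabloid_def column_group_cong[OF assms, symmetric]
    using column_group_permutes by (auto intro!: sum.cong simp: fun_eq_iff)
qed

lemma tableau_comp_inv:
  assumes t: "t \<in> tableaux nu" and s: "s permutes {0..<sum_mset nu}"
  shows "t \<circ> inv s \<in> tableaux nu"
proof -
  have "bij_betw (inv s) {0..<sum_mset nu} {0..<sum_mset nu}"
    using permutes_imp_bij[OF permutes_inv[OF s]] .
  moreover have "bij_betw t {0..<sum_mset nu} (cells nu)" using t unfolding tableaux_def by simp
  ultimately show ?thesis unfolding tableaux_def using bij_betw_trans by blast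
qed

lemma tabloid_of_conj:
  assumes s: "s permutes {0..<sum_mset nu}"
  shows "tabloid_of nu (t \<circ> inv s) (s \<circ> p \<circ> inv s) = tabloid_of nu t p \<circ> inv s"
proof
  fix x
  have "inv s x < sum_mset nu \<longleftrightarrow> x < sum_mset nu" using permutes_less_iff[OF permutes_inv[OF s]] .
  moreover have "inv s (s y) = y" for y using permutes_inverses(2)[OF s] .
  ultimately show "tabloid_of nu (t \<circ> inv s) (s \<circ> p \<circ> inv s) x = (tabloid_of nu t p \<circ> inv s) x"
    unfolding tabloid_of_def by simp
qed

lemma column_group_conj:
  assumes s: "s permutes {0..<sum_mset nu}" and p: "p \<in> column_group nu t"
  shows "s \<circ> p \<circ> inv s \<in> column_group nu (t \<circ> inv s)"
proof -
  have "(s \<circ> p) \<circ> inv s permutes {0..<sum_mset nu}"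
    using permutes_compose[OF permutes_inv[OF s] permutes_compose[OF column_group_permutes[OF p] s]] .
  moreover have "snd (t (inv s (s (p (inv s x))))) = snd (t (inv s x))" if "x < sum_mset nu" for x
    using permutes_inverses(2)[OF s] column_group_same_column[OF p permutes_less[OF permutes_inv[OF s] that]] by simp
  ultimately show ?thesis unfolding column_group_def by (simp add: comp_assoc)
qed

lemma act_tab_polytabloid:
  assumes t: "t \<in> tableaux nu" and s: "s permutes {0..<sum_mset nu}"
  shows "act_tab s (polytabloid nu t) = polytabloid nu (t \<circ> inv s)"
proof
  fix T
  let ?t' = "t \<circ> inv s"
  have inv1: "inv s \<circ> s = id" and inv2: "s \<circ> inv s = id" using permutes_inv_o[OF s] by auto
  have "act_tab s (polytabloid nu t) T =
    (\<Sum>p\<in>column_group nu t. of_int (sign p) * (if T \<circ> s = tabloid_of nu t p then 1 else 0))"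
    unfolding act_tab_def polytabloid_def by simp
  also have "\<dots> = (\<Sum>p\<in>column_group nu ?t'. of_int (sign p) * (if T = tabloid_of nu ?t' p then 1 else 0))"
  proof (rule sum.reindex_bij_witness[where j = "\<lambda>p. s \<circ> p \<circ> inv s" and i = "\<lambda>p. inv s \<circ> p \<circ> s"])
    fix p :: "nat \<Rightarrow> nat"
    show "inv s \<circ> (s \<circ> p \<circ> inv s) \<circ> s = p" using permutes_inverses[OF s] by (simp add: fun_eq_iff)
    show "s \<circ> (inv s \<circ> p \<circ> s) \<circ> inv s = p" using permutes_inverses[OF s] by (simp add: fun_eq_iff)
  next
    fix p assume p: "p \<in> column_group nu t"
    show "s \<circ> p \<circ> inv s \<in> column_group nu ?t'" by (rule column_group_conj[OF s p])
    have pp: "permutation p" using permutes_less_permutation[OF column_group_permutes[OF p]] .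
    have ps: "permutation s" "permutation (inv s)" using permutes_less_permutation[OF s] permutes_less_permutation[OF permutes_inv[OF s]] by auto
    have "sign (s \<circ> p \<circ> inv s) = sign s * sign p * sign (inv s)"
      using sign_compose[OF permutation_compose[OF ps(1) pp] ps(2)] sign_compose[OF ps(1) pp] by simp
    also have "\<dots> = sign p" using sign_inverse[OF ps(1)] by (simp add: mult.commute mult.left_commute)
    finally have sg: "sign (s \<circ> p \<circ> inv s) = sign p" .
    have "T = tabloid_of nu t p \<circ> inv s \<longleftrightarrow> T \<circ> s = tabloid_of nu t p"
    proof
      assume "T = tabloid_of nu t p \<circ> inv s"
      then show "T \<circ> s = tabloid_of nu t p" using inv1 by (simp add: comp_assoc)
    next
      assume "T \<circ> s = tabloid_of nu t p"
      then have "T \<circ> s \<circ> inv s = tabloid_of nu t p \<circ> inv s" by simp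
      then show "T = tabloid_of nu t p \<circ> inv s" using inv2 by (simp add: comp_assoc)
    qed
    then show "of_int (sign (s \<circ> p \<circ> inv s)) * (if T = tabloid_of nu ?t' (s \<circ> p \<circ> inv s) then 1 else 0) =
          of_int (sign p) * (if T \<circ> s = tabloid_of nu t p then 1 else (0::complex))"
      using sg tabloid_of_conj[OF s, of t p] by simp
  next
    fix p assume p: "p \<in> column_group nu ?t'"
    have "inv s \<circ> p \<circ> inv (inv s) \<in> column_group nu (?t' \<circ> inv (inv s))"
      by (rule column_group_conj[OF permutes_inv[OF s] p])
    moreover have "inv (inv s) = s" using permutes_inv_inv[OF s] .
    moreover have "?t' \<circ> s = t" using inv1 by (simp add: comp_assoc)
    ultimately show "inv s \<circ> p \<circ> s \<in> column_group nu t" by simp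
  qed
  also have "\<dots> = polytabloid nu ?t' T" unfolding polytabloid_def by simp
  finally show "act_tab s (polytabloid nu t) T = polytabloid nu ?t' T" .
qed

lemma polytabloid_transitive:
  assumes t: "t \<in> tableaux nu" and t0: "t0 \<in> tableaux nu"
  obtains s where "s permutes {0..<sum_mset nu}" "polytabloid nu t = act_tab s (polytabloid nu t0)"
proof -
  let ?m = "sum_mset nu"
  define s where "s x = (if x < ?m then inv_into {0..<?m} t (t0 x) else x)" for x
  have sx: "s x < ?m" "t (s x) = t0 x" if "x < ?m" for x
    using tableau_inv_into[OF t tableau_in_cells[OF t0 that]] that unfolding s_def by simp_all
  have "inj_on s {0..<?m}"
  proof (rule inj_onI)
    fix x y assume "x \<in> {0..<?m}" "y \<in> {0..<?m}" "s x = s y"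
    then show "x = y" using sx[of x] sx[of y] tableau_inj[OF t0] by auto
  qed
  moreover have "s x = x" if "?m \<le> x" for x using that unfolding s_def by simp
  ultimately have sp: "s permutes {0..<?m}" using sx(1) by (auto intro: permutes_lessI)
  have "t x = (t0 \<circ> inv s) x" if x: "x < ?m" for x
    using sx[OF permutes_less[OF permutes_inv[OF sp] x]] permutes_inverses(1)[OF sp] by simp
  then have "polytabloid nu t = polytabloid nu (t0 \<circ> inv s)" by (intro polytabloid_cong) simp
  also have "\<dots> = act_tab s (polytabloid nu t0)" using act_tab_polytabloid[OF t0 sp] by simp
  finally show ?thesis using sp that by blast
qed

definition col_antisym :: "nat multiset \<Rightarrow> (nat \<Rightarrow> nat \<times> nat) \<Rightarrow> ((nat \<Rightarrow> nat) \<Rightarrow> complex) \<Rightarrow> ((nat \<Rightarrow> nat) \<Rightarrow> complex)" where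
  "col_antisym nu t v = (\<lambda>T. \<Sum>c\<in>column_group nu t. of_int (sign c) * act_tab c v T)"

lemma col_antisym_polytabloid:
  assumes t: "t \<in> tableaux nu"
  shows "col_antisym nu t (polytabloid nu t) = (\<lambda>T. of_nat (card (column_group nu t)) * polytabloid nu t T)"
proof
  fix T
  have "col_antisym nu t (polytabloid nu t) T = (\<Sum>c\<in>column_group nu t. polytabloid nu t T)"
  proof -
    have "of_int (sign c) * act_tab c (polytabloid nu t) T = polytabloid nu t T" if c: "c \<in> column_group nu t" for c
    proof -
      have h: "(of_int (sign c) :: complex) * of_int (sign c) = 1"
      proof -
        have "(of_int (sign c * sign c) :: complex) = 1" by simp
        then show ?thesis by (simp only: of_int_mult)
      qed
      have "of_int (sign c) * act_tab c (polytabloid nu t) T = (of_int (sign c) * of_int (sign c)) * polytabloid nu t T"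
        using act_tab_column_group_polytabloid[OF t c] by (simp add: mult.assoc)
      then show ?thesis using h by simp
    qed
    then show ?thesis unfolding col_antisym_def by simp
  qed
  then show "col_antisym nu t (polytabloid nu t) T = of_nat (card (column_group nu t)) * polytabloid nu t T" by simp
qed

lemma polytabloid_tabloid_of:
  assumes t: "t \<in> tableaux nu" and p: "p \<in> column_group nu t"
  shows "polytabloid nu t (tabloid_of nu t p) = of_int (sign p)"
proof -
  have "polytabloid nu t (tabloid_of nu t p) =
      (\<Sum>q\<in>column_group nu t. if q = p then of_int (sign p) else 0)"
    unfolding polytabloid_def
  proof (rule sum.cong[OF refl])
    fix q assume q: "q \<in> column_group nu t"
    have "tabloid_of nu t p = tabloid_of nu t q \<longleftrightarrow> q = p"
      using tabloid_of_inj_on_column_group[OF t p q] by blast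
    then show "of_int (sign q) * (if tabloid_of nu t p = tabloid_of nu t q then 1 else 0) = (if q = p then of_int (sign p) else (0::complex))"
      by auto
  qed
  also have "\<dots> = of_int (sign p)" using p finite_column_group[of nu t] by simp
  finally show ?thesis .
qed

lemma polytabloid_eq_0:
  assumes "\<not> (\<exists>p\<in>column_group nu t. T = tabloid_of nu t p)"
  shows "polytabloid nu t T = 0"
  using assms unfolding polytabloid_def by (auto intro!: sum.neutral)

lemma col_antisym_tabloid_of:
  assumes t: "t \<in> tableaux nu" and p: "p \<in> column_group nu t"
  shows "col_antisym nu t w (tabloid_of nu t p) = of_int (sign p) * col_antisym nu t w (tabloid_of nu t id)"
proof -
  let ?G = "column_group nu t"
  have pp: "p permutes {0..<sum_mset nu}" by (rule column_group_permutes[OF p])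
  have "col_antisym nu t w (tabloid_of nu t p) = (\<Sum>c\<in>?G. of_int (sign c) * w (tabloid_of nu t (p \<circ> c)))"
    unfolding col_antisym_def act_tab_def using tabloid_of_comp[OF column_group_permutes, of _ nu t t p] by simp
  also have "\<dots> = (\<Sum>c\<in>?G. of_int (sign (inv p \<circ> c)) * w (tabloid_of nu t (p \<circ> (inv p \<circ> c))))"
    by (rule sum_column_group_reindex[OF column_group_inv[OF p]])
  also have "\<dots> = (\<Sum>c\<in>?G. of_int (sign p) * (of_int (sign c) * w (tabloid_of nu t c)))"
  proof (rule sum.cong[OF refl])
    fix c assume c: "c \<in> ?G"
    have "p \<circ> (inv p \<circ> c) = c" using permutes_inv_o(1)[OF pp] by (simp add: comp_assoc[symmetric])
    moreover have "sign (inv p \<circ> c) = sign p * sign c"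
      using sign_compose[OF permutes_less_permutation[OF permutes_inv[OF pp]] permutes_less_permutation[OF column_group_permutes[OF c]]]
        sign_inverse[OF permutes_less_permutation[OF pp]] by simp
    ultimately show "of_int (sign (inv p \<circ> c)) * w (tabloid_of nu t (p \<circ> (inv p \<circ> c))) =
        of_int (sign p) * (of_int (sign c) * w (tabloid_of nu t c))" by simp
  qed
  also have "\<dots> = of_int (sign p) * col_antisym nu t w (tabloid_of nu t id)"
    unfolding col_antisym_def act_tab_def using tabloid_of_comp[OF column_group_permutes, of _ nu t t id]
    by (simp add: sum_distrib_left)
  finally show ?thesis .
qed

text \<open>If two entries of a column of \<open>t\<close> lie in the same row of \<open>T\<close>, their transposition \<open>\<tau>\<close>
  fixes \<open>T\<close>, and \<open>c \<mapsto> \<tau> \<circ> c\<close> pairs off the terms of \<open>col_antisym nu t w T\<close> with opposite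
  signs.\<close>

lemma col_antisym_eq_0:
  assumes t: "t \<in> tableaux nu" and w: "\<And>T. w T \<noteq> 0 \<Longrightarrow> is_tabloid nu T"
    and T: "\<not> (\<exists>p\<in>column_group nu t. T = tabloid_of nu t p)"
  shows "col_antisym nu t w T = 0"
proof (cases "is_tabloid nu T")
  case False
  have "w (T \<circ> c) = 0" if c: "c \<in> column_group nu t" for c
  proof (rule ccontr)
    assume "w (T \<circ> c) \<noteq> 0"
    then have "is_tabloid nu (T \<circ> c \<circ> inv c)"
      using w is_tabloid_comp[OF _ permutes_inv[OF column_group_permutes[OF c]]] by blast
    then show False using False permutes_inv_o(1)[OF column_group_permutes[OF c]] by (simp add: comp_assoc)
  qed
  then show ?thesis unfolding col_antisym_def act_tab_def by simp
next
  case True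
  let ?G = "column_group nu t"
  obtain x y where xy: "x < sum_mset nu" "y < sum_mset nu" "snd (t x) = snd (t y)" "T x = T y" "x \<noteq> y"
    using tabloid_eq_tabloid_of_column_perm[OF t True] T by blast
  let ?tau = "transpose x y"
  have tau: "?tau \<in> ?G" by (rule transpose_in_column_group[OF xy(1-3)])
  have Ttau: "T \<circ> ?tau = T" using xy(4) by (auto simp: fun_eq_iff transpose_def)
  define S where "S = (\<Sum>c\<in>?G. of_int (sign c) * w (T \<circ> c))"
  have "S = (\<Sum>c\<in>?G. of_int (sign (?tau \<circ> c)) * w (T \<circ> (?tau \<circ> c)))"
    unfolding S_def by (rule sum_column_group_reindex[OF tau])
  also have "\<dots> = (\<Sum>c\<in>?G. - (of_int (sign c) * w (T \<circ> c)))"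
  proof (rule sum.cong[OF refl])
    fix c assume c: "c \<in> ?G"
    have "sign (?tau \<circ> c) = - sign c"
      using sign_compose[OF permutes_less_permutation[OF column_group_permutes[OF tau]]
          permutes_less_permutation[OF column_group_permutes[OF c]]] sign_swap_id[of x y] xy(5) by simp
    moreover have "T \<circ> (?tau \<circ> c) = T \<circ> c" using Ttau by (simp add: comp_assoc[symmetric])
    ultimately show "of_int (sign (?tau \<circ> c)) * w (T \<circ> (?tau \<circ> c)) = - (of_int (sign c) * w (T \<circ> c))"
      by simp
  qed
  also have "\<dots> = - S" unfolding S_def by (simp add: sum_negf)
  finally show ?thesis unfolding col_antisym_def act_tab_def S_def by simp
qed

lemma col_antisym_eq_scale_polytabloid:
  assumes t: "t \<in> tableaux nu" and w: "\<And>T. w T \<noteq> 0 \<Longrightarrow> is_tabloid nu T"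
  shows "col_antisym nu t w = (\<lambda>T. col_antisym nu t w (tabloid_of nu t id) * polytabloid nu t T)"
proof
  fix T
  show "col_antisym nu t w T = col_antisym nu t w (tabloid_of nu t id) * polytabloid nu t T"
  proof (cases "\<exists>p\<in>column_group nu t. T = tabloid_of nu t p")
    case True
    then show ?thesis using col_antisym_tabloid_of[OF t] polytabloid_tabloid_of[OF t] by (auto simp: mult.commute)
  next
    case False
    then show ?thesis using col_antisym_eq_0[OF t w] polytabloid_eq_0 by simp
  qed
qed

lemma act_tab_specht:
  assumes s: "s permutes {0..<sum_mset nu}" and v: "v \<in> specht nu"
  shows "act_tab s v \<in> specht nu"
proof -
  obtain F c where F: "finite F" "F \<subseteq> tableaux nu" and v': "v = (\<lambda>T. \<Sum>t\<in>F. c t * polytabloid nu t T)"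
    using v unfolding specht_def by blast
  have "act_tab s v = (\<lambda>T. \<Sum>t\<in>F. c t * act_tab s (polytabloid nu t) T)"
    unfolding v' act_tab_def by simp
  also have "\<dots> = (\<lambda>T. \<Sum>t\<in>F. c t * polytabloid nu (t \<circ> inv s) T)"
  proof (rule ext, rule sum.cong[OF refl])
    fix T t assume "t \<in> F"
    then have "t \<in> tableaux nu" using F by blast
    then show "c t * act_tab s (polytabloid nu t) T = c t * polytabloid nu (t \<circ> inv s) T"
      using act_tab_polytabloid[OF _ s] by simp
  qed
  finally have eq: "act_tab s v = (\<lambda>T. \<Sum>t\<in>F. c t * polytabloid nu (t \<circ> inv s) T)" .
  have "\<forall>t\<in>F. polytabloid nu (t \<circ> inv s) \<in> specht nu"
    using F tableau_comp_inv[OF _ s] polytabloid_in_specht by blast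
  then show ?thesis unfolding eq by (rule lincomb_closed_sum[OF lincomb_closed_specht F(1)])
qed

lemma specht_maps_proportional:
  fixes \<phi> \<psi> :: "((nat \<Rightarrow> nat) \<Rightarrow> complex) \<Rightarrow> 'y \<Rightarrow> complex"
  assumes t0: "t0 \<in> tableaux nu"
    and lin: "linear_on (specht nu) \<phi>" "linear_on (specht nu) \<psi>"
    and act_scale: "\<And>s c f. A s (\<lambda>y. c * f y) = (\<lambda>y. c * A s f y)"
    and eqv: "\<And>s v. s permutes {0..<sum_mset nu} \<Longrightarrow> v \<in> specht nu \<Longrightarrow> \<phi> (act_tab s v) = A s (\<phi> v)"
      "\<And>s v. s permutes {0..<sum_mset nu} \<Longrightarrow> v \<in> specht nu \<Longrightarrow> \<psi> (act_tab s v) = A s (\<psi> v)"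
    and c: "\<phi> (polytabloid nu t0) = (\<lambda>y. c * \<psi> (polytabloid nu t0) y)"
    and v: "v \<in> specht nu"
  shows "\<phi> v = (\<lambda>y. c * \<psi> v y)"
proof -
  have e0: "polytabloid nu t0 \<in> specht nu" by (rule polytabloid_in_specht[OF t0])
  have et: "\<phi> (polytabloid nu t) = (\<lambda>y. c * \<psi> (polytabloid nu t) y)" if t: "t \<in> tableaux nu" for t
  proof -
    obtain s where s: "s permutes {0..<sum_mset nu}" and es: "polytabloid nu t = act_tab s (polytabloid nu t0)"
      using polytabloid_transitive[OF t t0] by blast
    show ?thesis unfolding es eqv(1)[OF s e0] eqv(2)[OF s e0] c act_scale ..
  qed
  obtain F a where F: "finite F" "F \<subseteq> tableaux nu" and v': "v = (\<lambda>T. \<Sum>t\<in>F. a t * polytabloid nu t T)"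
    using v unfolding specht_def by blast
  have Fs: "\<forall>t\<in>F. polytabloid nu t \<in> specht nu" using F polytabloid_in_specht by blast
  have "\<phi> v = (\<lambda>y. \<Sum>t\<in>F. a t * \<phi> (polytabloid nu t) y)"
    unfolding v' using linear_on_sum[OF lincomb_closed_specht lin(1) F(1) Fs] by blast
  also have "\<dots> = (\<lambda>y. \<Sum>t\<in>F. a t * (c * \<psi> (polytabloid nu t) y))"
    using et F by (intro ext sum.cong) auto
  also have "\<dots> = (\<lambda>y. c * (\<Sum>t\<in>F. a t * \<psi> (polytabloid nu t) y))"
    by (simp add: sum_distrib_left mult_ac)
  also have "\<dots> = (\<lambda>y. c * \<psi> v y)"
    unfolding v' using linear_on_sum[OF lincomb_closed_specht lin(2) F(1) Fs] by simp
  finally show ?thesis .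
qed

text \<open>Schur's lemma for Specht modules, via the column antisymmetrizer \<open>\<kappa>\<^sub>t = col_antisym nu t\<close>:
  it maps every vector supported on tabloids onto a multiple of \<open>e\<^sub>t\<close>, and
  \<open>\<kappa>\<^sub>t e\<^sub>t = |C\<^sub>t| e\<^sub>t\<close>; an equivariant \<open>\<phi>\<close> commutes with \<open>\<kappa>\<^sub>t\<close>, so \<open>\<phi> e\<^sub>t\<close> is a multiple of \<open>e\<^sub>t\<close>.\<close>

theorem specht_endomorphism_scalar:
  assumes into: "\<And>v. v \<in> specht nu \<Longrightarrow> \<phi> v \<in> specht nu"
    and lin: "linear_on (specht nu) \<phi>"
    and eqv: "\<And>s v. s permutes {0..<sum_mset nu} \<Longrightarrow> v \<in> specht nu \<Longrightarrow> \<phi> (act_tab s v) = act_tab s (\<phi> v)"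
  shows "\<exists>c. \<forall>v\<in>specht nu. \<phi> v = (\<lambda>T. c * v T)"
proof -
  obtain t0 where t0: "t0 \<in> tableaux nu" using ex_tableau by blast
  let ?e = "polytabloid nu t0"
  let ?G = "column_group nu t0"
  have e: "?e \<in> specht nu" by (rule polytabloid_in_specht[OF t0])
  have acte: "\<forall>c\<in>?G. act_tab c ?e \<in> specht nu" using act_tab_specht[OF column_group_permutes e] by blast
  have "\<phi> (col_antisym nu t0 ?e) = (\<lambda>T. \<Sum>c\<in>?G. of_int (sign c) * \<phi> (act_tab c ?e) T)"
    unfolding col_antisym_def
    using linear_on_sum[OF lincomb_closed_specht lin finite_column_group acte, of "\<lambda>c. of_int (sign c)"] by blast
  also have "\<dots> = col_antisym nu t0 (\<phi> ?e)" unfolding col_antisym_def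
    using eqv[OF column_group_permutes e] by (auto intro!: sum.cong)
  also have "\<dots> = (\<lambda>T. col_antisym nu t0 (\<phi> ?e) (tabloid_of nu t0 id) * ?e T)"
    by (rule col_antisym_eq_scale_polytabloid[OF t0 specht_nonzero_is_tabloid[OF into[OF e]]])
  finally have "(\<lambda>T. of_nat (card ?G) * \<phi> ?e T) = (\<lambda>T. col_antisym nu t0 (\<phi> ?e) (tabloid_of nu t0 id) * ?e T)"
    using col_antisym_polytabloid[OF t0] linear_on_scale[OF lin e] by simp
  then have e_eq: "\<phi> ?e = (\<lambda>T. (col_antisym nu t0 (\<phi> ?e) (tabloid_of nu t0 id) / of_nat (card ?G)) * ?e T)"
    using card_column_group_pos[of nu t0] by (auto simp: fun_eq_iff field_simps)
  have "\<phi> v = (\<lambda>T. (col_antisym nu t0 (\<phi> ?e) (tabloid_of nu t0 id) / of_nat (card ?G)) * v T)"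
    if "v \<in> specht nu" for v
    by (rule specht_maps_proportional[OF t0 lin linear_on_id _ eqv _ e_eq that])
      (simp_all add: act_tab_def)
  then show ?thesis by blast
qed

subsection \<open>Perfect matchings and relabelling\<close>

definition partner :: "nat set set \<Rightarrow> nat \<Rightarrow> nat" where
  "partner A x = (if \<exists>y. y \<noteq> x \<and> {x, y} \<in> A then (THE y. y \<noteq> x \<and> {x, y} \<in> A) else x)"

definition relabel :: "(nat \<Rightarrow> nat) \<Rightarrow> nat set set \<Rightarrow> nat set set" where
  "relabel g A = (\<lambda>e. g ` e) ` A"

lemma matching_edgeD: "A \<in> matchings n \<Longrightarrow> e \<in> A \<Longrightarrow> \<exists>i j. e = {i, j} \<and> i \<noteq> j \<and> i < 2 * n \<and> j < 2 * n"
  unfolding matchings_def by blast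

lemma matching_coverD: "A \<in> matchings n \<Longrightarrow> x < 2 * n \<Longrightarrow> \<exists>!e. e \<in> A \<and> x \<in> e"
  unfolding matchings_def by blast

lemma matching_partner_unique:
  assumes A: "A \<in> matchings n" and "{x, y} \<in> A" "{x, z} \<in> A" "y \<noteq> x" "z \<noteq> x"
  shows "y = z"
proof -
  obtain i j where "{x, y} = {i, j}" "i \<noteq> j" "i < 2 * n" "j < 2 * n" using matching_edgeD[OF A assms(2)] by blast
  then have x: "x < 2 * n" by (auto simp: doubleton_eq_iff)
  have "{x, y} = {x, z}" using matching_coverD[OF A x] assms(2,3) by blast
  then show ?thesis using assms(4,5) by (auto simp: doubleton_eq_iff)
qed

lemma partner_spec:
  assumes A: "A \<in> matchings n" and x: "x < 2 * n"
  shows "partner A x \<noteq> x" "{x, partner A x} \<in> A" "partner A x < 2 * n"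
proof -
  obtain e where e: "e \<in> A" "x \<in> e" using matching_coverD[OF A x] by blast
  obtain i j where ij: "e = {i, j}" "i \<noteq> j" "i < 2 * n" "j < 2 * n" using matching_edgeD[OF A e(1)] by blast
  obtain y where y: "y \<noteq> x" "{x, y} \<in> A" "y < 2 * n"
  proof (cases "x = i")
    case True then show ?thesis using that[of j] ij e by auto
  next
    case False then have "x = j" using ij e by auto
    then show ?thesis using that[of i] ij e by (auto simp: insert_commute)
  qed
  have ex: "\<exists>y. y \<noteq> x \<and> {x, y} \<in> A" using y by blast
  have the: "(THE y. y \<noteq> x \<and> {x, y} \<in> A) = y"
    by (rule the_equality) (use y matching_partner_unique[OF A] in blast)+
  show "partner A x \<noteq> x" "{x, partner A x} \<in> A" "partner A x < 2 * n" unfolding partner_def using ex the y by auto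
qed

lemma partner_eqI:
  assumes A: "A \<in> matchings n" and "{x, y} \<in> A" 
  shows "partner A x = y"
proof -
  obtain i j where "{x, y} = {i, j}" "i \<noteq> j" "i < 2 * n" "j < 2 * n" using matching_edgeD[OF A assms(2)] by blast
  then have x: "x < 2 * n" and yx: "y \<noteq> x" by (auto simp: doubleton_eq_iff)
  show ?thesis using matching_partner_unique[OF A partner_spec(2)[OF A x] assms(2) partner_spec(1)[OF A x] yx] .
qed

lemma partner_outside:
  assumes A: "A \<in> matchings n" and x: "\<not> x < 2 * n"
  shows "partner A x = x"
proof -
  have "\<not> (\<exists>y. y \<noteq> x \<and> {x, y} \<in> A)"
  proof
    assume "\<exists>y. y \<noteq> x \<and> {x, y} \<in> A"
    then obtain y where "{x, y} \<in> A" by blast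
    then obtain i j where "{x, y} = {i, j}" "i < 2 * n" "j < 2 * n" using matching_edgeD[OF A] by blast
    then show False using x by (auto simp: doubleton_eq_iff)
  qed
  then show ?thesis unfolding partner_def by (simp only: if_False)
qed

lemma partner_partner: assumes A: "A \<in> matchings n" shows "partner A (partner A x) = x"
proof (cases "x < 2 * n")
  case True
  have "{partner A x, x} \<in> A" using partner_spec(2)[OF A True] by (simp add: insert_commute)
  then show ?thesis by (rule partner_eqI[OF A])
next
  case False then show ?thesis using partner_outside[OF A] by simp
qed

lemma matching_edge_partner:
  assumes A: "A \<in> matchings n" and e: "e \<in> A"
  shows "\<exists>x < 2 * n. e = {x, partner A x}"
proof -
  obtain i j where ij: "e = {i, j}" "i \<noteq> j" "i < 2 * n" "j < 2 * n" using matching_edgeD[OF A e] by blast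
  have "partner A i = j" using partner_eqI[OF A] e ij by simp
  then show ?thesis using ij by blast
qed

lemma matching_eqI:
  assumes A: "A \<in> matchings n" and B: "B \<in> matchings n" and eq: "\<And>x. x < 2 * n \<Longrightarrow> partner A x = partner B x"
  shows "A = B"
proof -
  have "A \<subseteq> B" if A: "A \<in> matchings n" and B: "B \<in> matchings n" and eq: "\<And>x. x < 2 * n \<Longrightarrow> partner A x = partner B x" for A B
  proof
    fix e assume "e \<in> A"
    then obtain x where "x < 2 * n" "e = {x, partner A x}" using matching_edge_partner[OF A] by blast
    then show "e \<in> B" using partner_spec(2)[OF B] eq by simp
  qed
  then show ?thesis using assms by (metis order_antisym)
qed

lemma relabel_in_matchings:
  assumes A: "A \<in> matchings n" and g: "g permutes {0..<2 * n}"
  shows "relabel g A \<in> matchings n"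
  unfolding matchings_def
proof (intro CollectI conjI ballI allI impI)
  fix e assume "e \<in> relabel g A"
  then obtain e0 where e0: "e0 \<in> A" "e = g ` e0" unfolding relabel_def by blast
  obtain i j where ij: "e0 = {i, j}" "i \<noteq> j" "i < 2 * n" "j < 2 * n" using matching_edgeD[OF A e0(1)] by blast
  have "g i \<noteq> g j" using ij(2) permutes_inj[OF g] by (simp add: inj_eq)
  then show "\<exists>i j. e = {i, j} \<and> i \<noteq> j \<and> i < 2 * n \<and> j < 2 * n"
    using e0 ij permutes_less[OF g] by auto
next
  fix x :: nat assume x: "x < 2 * n"
  define y where "y = inv g x"
  have y: "y < 2 * n" "g y = x" unfolding y_def using permutes_less[OF permutes_inv[OF g] x] permutes_inverses(1)[OF g] by auto
  obtain e0 where e0: "e0 \<in> A" "y \<in> e0" using matching_coverD[OF A y(1)] by blast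
  show "\<exists>!e. e \<in> relabel g A \<and> x \<in> e"
  proof (rule ex1I[where a = "g ` e0"])
    show "g ` e0 \<in> relabel g A \<and> x \<in> g ` e0" unfolding relabel_def using e0 y by auto
  next
    fix e assume e: "e \<in> relabel g A \<and> x \<in> e"
    then obtain e1 where e1: "e1 \<in> A" "e = g ` e1" unfolding relabel_def by blast
    then obtain z where "z \<in> e1" "g z = x" using e by blast
    then have "z = y" using y permutes_inj[OF g] by (auto simp: inj_eq)
    then have "e1 = e0" using matching_coverD[OF A y(1)] e0 e1 \<open>z \<in> e1\<close> by blast
    then show "e = g ` e0" using e1 by simp
  qed
qed

lemma partner_relabel:
  assumes A: "A \<in> matchings n" and g: "g permutes {0..<2 * n}" and x: "x < 2 * n"
  shows "partner (relabel g A) (g x) = g (partner A x)"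
proof -
  have "{g x, g (partner A x)} \<in> relabel g A" unfolding relabel_def using partner_spec(2)[OF A x]
    by (metis image_empty image_eqI image_insert)
  then show ?thesis by (rule partner_eqI[OF relabel_in_matchings[OF A g]])
qed

lemma relabel_eqI:
  assumes A: "A \<in> matchings n" and A': "A' \<in> matchings n" and g: "g permutes {0..<2 * n}"
    and h: "\<And>x. x < 2 * n \<Longrightarrow> g (partner A x) = partner A' (g x)"
  shows "relabel g A = A'"
proof (rule matching_eqI[OF relabel_in_matchings[OF A g] A'])
  fix y assume y: "y < 2 * n"
  define x where "x = inv g y"
  have x: "x < 2 * n" "g x = y" unfolding x_def using permutes_less[OF permutes_inv[OF g] y] permutes_inverses(1)[OF g] by auto
  show "partner (relabel g A) y = partner A' y" using partner_relabel[OF A g x(1)] h[OF x(1)] x(2) by simp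
qed

lemma finite_matchings: "finite (matchings n)"
proof -
  have "matchings n \<subseteq> Pow (Pow {0..<2 * n})"
    unfolding matchings_def by auto
  then show ?thesis by (rule finite_subset) simp
qed

lemma relabel_relabel: "relabel f (relabel h B) = relabel (f \<circ> h) B"
  unfolding relabel_def by (auto simp: image_comp)

lemma relabel_id: "relabel id B = B"
  unfolding relabel_def by simp

lemma relabel_relabel_inv: "g permutes S \<Longrightarrow> relabel g (relabel (inv g) B) = B"
  using relabel_relabel[of g "inv g" B] permutes_inv_o(1)[of g S] relabel_id by simp

lemma relabel_inv_relabel: "g permutes S \<Longrightarrow> relabel (inv g) (relabel g B) = B"
  using relabel_relabel[of "inv g" g B] permutes_inv_o(2)[of g S] relabel_id by simp

lemma relabel_in_matchings_iff:
  assumes g: "g permutes {0..<2 * n}"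
  shows "relabel g B \<in> matchings n \<longleftrightarrow> B \<in> matchings n"
proof
  assume "relabel g B \<in> matchings n"
  then have "relabel (inv g) (relabel g B) \<in> matchings n" by (rule relabel_in_matchings[OF _ permutes_inv[OF g]])
  then show "B \<in> matchings n" using relabel_inv_relabel[OF g] by simp
qed (rule relabel_in_matchings[OF _ g])

lemma bij_betw_relabel:
  assumes g: "g permutes {0..<2 * n}"
  shows "bij_betw (relabel g) (matchings n) (matchings n)"
proof (rule bij_betw_byWitness[where f' = "relabel (inv g)"])
  show "\<forall>a\<in>matchings n. relabel (inv g) (relabel g a) = a" using relabel_inv_relabel[OF g] by simp
  show "\<forall>a'\<in>matchings n. relabel g (relabel (inv g) a') = a'" using relabel_relabel_inv[OF g] by simp
  show "relabel g ` matchings n \<subseteq> matchings n" using relabel_in_matchings[OF _ g] by auto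
  show "relabel (inv g) ` matchings n \<subseteq> matchings n" using relabel_in_matchings[OF _ permutes_inv[OF g]] by auto
qed

lemma act_M_eq_relabel: "act_M s g = (\<lambda>B. g (relabel (inv s) B))"
  unfolding act_M_def relabel_def by simp

lemma sum_matchings_relabel:
  assumes g: "g permutes {0..<2 * n}"
  shows "(\<Sum>B\<in>matchings n. F (relabel g B)) = (\<Sum>B\<in>matchings n. F B)"
  using sum.reindex_bij_betw[OF bij_betw_relabel[OF g], of F] .

subsection \<open>Alternating walks and the components of \<open>A \<union> B\<close>\<close>

definition alt_partner :: "nat set set \<Rightarrow> nat set set \<Rightarrow> nat \<Rightarrow> nat \<Rightarrow> nat" where
  "alt_partner A B i = (if even i then partner A else partner B)"

primrec alt_walk :: "nat set set \<Rightarrow> nat set set \<Rightarrow> nat \<Rightarrow> nat \<Rightarrow> nat" where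
  "alt_walk A B v 0 = v"
| "alt_walk A B v (Suc i) = alt_partner A B i (alt_walk A B v i)"

context
  fixes n :: nat and A B :: "nat set set"
  assumes A: "A \<in> matchings n" and B: "B \<in> matchings n"
begin

lemma alt_partner_involution: "alt_partner A B i (alt_partner A B i x) = x"
  unfolding alt_partner_def using partner_partner[OF A] partner_partner[OF B] by simp

lemma alt_partner_less: "x < 2 * n \<Longrightarrow> alt_partner A B i x < 2 * n"
  unfolding alt_partner_def using partner_spec(3)[OF A] partner_spec(3)[OF B] by simp

lemma alt_partner_neq: "x < 2 * n \<Longrightarrow> alt_partner A B i x \<noteq> x"
  unfolding alt_partner_def using partner_spec(1)[OF A] partner_spec(1)[OF B] by simp

lemma alt_partner_edge: "x < 2 * n \<Longrightarrow> {x, alt_partner A B i x} \<in> A \<union> B"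
  unfolding alt_partner_def using partner_spec(2)[OF A] partner_spec(2)[OF B] by simp

lemma alt_partner_parity: "even i = even j \<Longrightarrow> alt_partner A B i = alt_partner A B j"
  unfolding alt_partner_def by simp

lemma alt_walk_less: "v < 2 * n \<Longrightarrow> alt_walk A B v i < 2 * n"
  by (induction i) (simp_all add: alt_partner_less)

lemma alt_walk_back: "alt_walk A B v i = alt_partner A B i (alt_walk A B v (Suc i))"
  by (simp add: alt_partner_involution)

lemma alt_walk_shift:
  assumes "even a = even b" "alt_walk A B v (a + c) = alt_walk A B v (b + c)"
  shows "alt_walk A B v a = alt_walk A B v b"
  using assms(2)
proof (induction c)
  case 0 then show ?case by simp
next
  case (Suc c)
  have "alt_walk A B v (a + c) = alt_partner A B (a + c) (alt_walk A B v (Suc (a + c)))" by (rule alt_walk_back)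
  also have "\<dots> = alt_partner A B (b + c) (alt_walk A B v (Suc (b + c)))"
  proof -
    have "alt_partner A B (a + c) = alt_partner A B (b + c)" by (rule alt_partner_parity) (use assms(1) in simp)
    moreover have "alt_walk A B v (Suc (a + c)) = alt_walk A B v (Suc (b + c))" using Suc.prems by simp
    ultimately show ?thesis by simp
  qed
  also have "\<dots> = alt_walk A B v (b + c)" by (rule alt_walk_back[symmetric])
  finally show ?case by (rule Suc.IH)
qed

lemma alt_walk_period_ex:
  assumes v: "v < 2 * n"
  shows "\<exists>k>0. alt_walk A B v (2 * k) = v"
proof -
  let ?f = "\<lambda>j. alt_walk A B v (2 * j)"
  have "?f ` {..2 * n} \<subseteq> {0..<2 * n}" using alt_walk_less[OF v] by auto
  then have "card (?f ` {..2 * n}) \<le> card {0..<2 * n}" by (rule card_mono[rotated]) simp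
  then have "card (?f ` {..2 * n}) < card {..2 * n}" by simp
  then have "\<not> inj_on ?f {..2 * n}" by (rule pigeonhole)
  then obtain i j where ij: "i \<le> 2 * n" "j \<le> 2 * n" "i \<noteq> j" "?f i = ?f j" unfolding inj_on_def by blast
  obtain a b where ab: "a < b" "?f a = ?f b"
  proof (cases "i < j")
    case True then show ?thesis using that ij by blast
  next
    case False then show ?thesis using that[of j i] ij by auto
  qed
  have "alt_walk A B v (0 + 2 * a) = alt_walk A B v (2 * (b - a) + 2 * a)" using ab by (simp add: algebra_simps)
  then have "alt_walk A B v 0 = alt_walk A B v (2 * (b - a))" by (rule alt_walk_shift[rotated]) simp
  then show ?thesis using ab(1) by (intro exI[of _ "b - a"]) simp
qed

definition half_period :: "nat \<Rightarrow> nat" where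
  "half_period v = (LEAST k. 0 < k \<and> alt_walk A B v (2 * k) = v)"

lemma half_period_spec:
  assumes v: "v < 2 * n"
  shows "0 < half_period v" "alt_walk A B v (2 * half_period v) = v" "\<And>k. 0 < k \<Longrightarrow> k < half_period v \<Longrightarrow> alt_walk A B v (2 * k) \<noteq> v"
proof -
  obtain k where k: "0 < k \<and> alt_walk A B v (2 * k) = v" using alt_walk_period_ex[OF v] by blast
  have "0 < (LEAST k. 0 < k \<and> alt_walk A B v (2 * k) = v) \<and> alt_walk A B v (2 * (LEAST k. 0 < k \<and> alt_walk A B v (2 * k) = v)) = v"
    by (rule LeastI[where P = "\<lambda>k. 0 < k \<and> alt_walk A B v (2 * k) = v", OF k])
  then show "0 < half_period v" "alt_walk A B v (2 * half_period v) = v" unfolding half_period_def by auto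
  show "\<And>k. 0 < k \<Longrightarrow> k < half_period v \<Longrightarrow> alt_walk A B v (2 * k) \<noteq> v"
    unfolding half_period_def using not_less_Least by blast
qed

lemma alt_walk_periodic:
  assumes v: "v < 2 * n"
  shows "alt_walk A B v (i + 2 * half_period v) = alt_walk A B v i"
proof (induction i)
  case 0 then show ?case using half_period_spec(2)[OF v] by simp
next
  case (Suc i)
  have "alt_walk A B v (Suc i + 2 * half_period v) = alt_partner A B (i + 2 * half_period v) (alt_walk A B v (i + 2 * half_period v))" by simp
  also have "\<dots> = alt_partner A B i (alt_walk A B v i)" using Suc alt_partner_parity[of "i + 2 * half_period v" i] by simp
  finally show ?case by simp
qed

lemma alt_walk_periodic_mult:
  assumes v: "v < 2 * n"
  shows "alt_walk A B v (i + q * (2 * half_period v)) = alt_walk A B v i"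
proof (induction q)
  case 0 then show ?case by simp
next
  case (Suc q)
  have "alt_walk A B v (i + Suc q * (2 * half_period v)) = alt_walk A B v ((i + q * (2 * half_period v)) + 2 * half_period v)"
    by (simp add: algebra_simps)
  also have "\<dots> = alt_walk A B v (i + q * (2 * half_period v))" by (rule alt_walk_periodic[OF v])
  finally show ?case using Suc by simp
qed

lemma alt_walk_mod:
  assumes v: "v < 2 * n"
  shows "alt_walk A B v i = alt_walk A B v (i mod (2 * half_period v))"
proof -
  have "alt_walk A B v (i mod (2 * half_period v) + (i div (2 * half_period v)) * (2 * half_period v)) = alt_walk A B v (i mod (2 * half_period v))"
    by (rule alt_walk_periodic_mult[OF v])
  moreover have "i mod (2 * half_period v) + (i div (2 * half_period v)) * (2 * half_period v) = i" by (rule mod_div_mult_eq)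
  ultimately show ?thesis by simp
qed

lemma alt_walk_reflect:
  assumes "alt_walk A B v a = alt_walk A B v b" "odd (a + b)" "a + t \<le> b"
  shows "alt_walk A B v (a + t) = alt_walk A B v (b - t)"
  using assms(3)
proof (induction t)
  case 0 then show ?case using assms(1) by simp
next
  case (Suc t)
  then have IH: "alt_walk A B v (a + t) = alt_walk A B v (b - t)" by simp
  have bt: "b - t = Suc (b - Suc t)" using Suc.prems by simp
  have "alt_walk A B v (a + Suc t) = alt_partner A B (a + t) (alt_walk A B v (a + t))" by simp
  also have "\<dots> = alt_partner A B (b - Suc t) (alt_walk A B v (Suc (b - Suc t)))"
  proof -
    have "even (a + t) = even (b - Suc t)" using assms(2) Suc.prems by presburger
    then have "alt_partner A B (a + t) = alt_partner A B (b - Suc t)" by (rule alt_partner_parity)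
    then show ?thesis using IH bt by simp
  qed
  also have "\<dots> = alt_walk A B v (b - Suc t)" by (rule alt_walk_back[symmetric])
  finally show ?case .
qed

text \<open>Two visits of the walk to the same vertex at an even distance contradict the minimality of
  the half period; at an odd distance, walking towards each other from both visits forces a vertex
  to be its own partner.\<close>

lemma inj_on_alt_walk:
  assumes v: "v < 2 * n"
  shows "inj_on (alt_walk A B v) {0..<2 * half_period v}"
proof (rule inj_onI)
  have main: "a = b" if ab: "a \<le> b" "b < 2 * half_period v" "alt_walk A B v a = alt_walk A B v b" for a b
  proof (rule ccontr)
    assume "a \<noteq> b"
    then have lt: "a < b" using ab by simp
    show False
    proof (cases "even (b - a)")
      case True
      have "alt_walk A B v (0 + a) = alt_walk A B v ((b - a) + a)" using ab lt by simp
      then have "alt_walk A B v 0 = alt_walk A B v (b - a)" by (rule alt_walk_shift[rotated]) (use True in simp)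
      moreover obtain j where j: "b - a = 2 * j" using True by blast
      ultimately have "alt_walk A B v (2 * j) = v" by simp
      moreover have "0 < j" "j < half_period v" using j lt ab by auto
      ultimately show False using half_period_spec(3)[OF v] by blast
    next
      case False
      then obtain j where j: "b - a = 2 * j + 1" by (metis oddE)
      have odd: "odd (a + b)" using False lt by (simp add: even_add even_diff_nat)
      have "alt_walk A B v (a + j) = alt_walk A B v (b - j)" by (rule alt_walk_reflect[OF ab(3) odd]) (use j in simp)
      moreover have "b - j = Suc (a + j)" using j lt by simp
      ultimately have "alt_walk A B v (Suc (a + j)) = alt_walk A B v (a + j)" by simp
      then show False using alt_partner_neq[OF alt_walk_less[OF v]] by simp
    qed
  qed
  fix a b assume "a \<in> {0..<2 * half_period v}" "b \<in> {0..<2 * half_period v}" "alt_walk A B v a = alt_walk A B v b"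
  then show "a = b" using main[of a b] main[of b a] by (cases "a \<le> b") auto
qed

lemma range_alt_walk:
  assumes v: "v < 2 * n"
  shows "range (alt_walk A B v) = alt_walk A B v ` {0..<2 * half_period v}"
proof
  show "range (alt_walk A B v) \<subseteq> alt_walk A B v ` {0..<2 * half_period v}"
  proof
    fix y assume "y \<in> range (alt_walk A B v)"
    then obtain i where "y = alt_walk A B v i" by blast
    then have "y = alt_walk A B v (i mod (2 * half_period v))" using alt_walk_mod[OF v] by simp
    moreover have "i mod (2 * half_period v) < 2 * half_period v" using half_period_spec(1)[OF v] by simp
    ultimately show "y \<in> alt_walk A B v ` {0..<2 * half_period v}" by auto
  qed
qed auto

lemma card_range_alt_walk:
  assumes v: "v < 2 * n"
  shows "card (range (alt_walk A B v)) = 2 * half_period v"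
  using range_alt_walk[OF v] card_image[OF inj_on_alt_walk[OF v]] by simp

lemma alt_walk_eq_iff:
  assumes v: "v < 2 * n"
  shows "alt_walk A B v i = alt_walk A B v j \<longleftrightarrow> i mod (2 * half_period v) = j mod (2 * half_period v)"
proof -
  have "i mod (2 * half_period v) \<in> {0..<2 * half_period v}" "j mod (2 * half_period v) \<in> {0..<2 * half_period v}"
    using half_period_spec(1)[OF v] by auto
  then have "alt_walk A B v (i mod (2 * half_period v)) = alt_walk A B v (j mod (2 * half_period v)) \<longleftrightarrow>
      i mod (2 * half_period v) = j mod (2 * half_period v)"
    by (rule inj_on_eq_iff[OF inj_on_alt_walk[OF v]])
  then show ?thesis using alt_walk_mod[OF v, of i] alt_walk_mod[OF v, of j] by simp
qed

lemma alt_walk_other_partner: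
  assumes v: "v < 2 * n"
  shows "alt_partner A B (Suc i) (alt_walk A B v i) = alt_walk A B v (i + 2 * half_period v - 1)"
proof -
  let ?j = "i + 2 * half_period v - 1"
  have j: "Suc ?j = i + 2 * half_period v" using half_period_spec(1)[OF v] by simp
  have "alt_walk A B v ?j = alt_partner A B ?j (alt_walk A B v (Suc ?j))" by (rule alt_walk_back)
  also have "\<dots> = alt_partner A B ?j (alt_walk A B v i)" using j alt_walk_periodic[OF v] by simp
  also have "alt_partner A B ?j = alt_partner A B (Suc i)" by (rule alt_partner_parity) (use half_period_spec(1)[OF v] in \<open>auto simp: even_diff_nat\<close>)
  finally show ?thesis by simp
qed

lemma partner_alt_walk:
  assumes v: "v < 2 * n"
  shows "partner A (alt_walk A B v i) \<in> range (alt_walk A B v)" "partner B (alt_walk A B v i) \<in> range (alt_walk A B v)"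
proof -
  have "alt_partner A B i (alt_walk A B v i) \<in> range (alt_walk A B v)" using alt_walk.simps(2)[of A B v i, symmetric] by blast
  moreover have "alt_partner A B (Suc i) (alt_walk A B v i) \<in> range (alt_walk A B v)" using alt_walk_other_partner[OF v] by simp
  ultimately show "partner A (alt_walk A B v i) \<in> range (alt_walk A B v)" "partner B (alt_walk A B v i) \<in> range (alt_walk A B v)"
    unfolding alt_partner_def by (cases "even i"; simp)+
qed

definition edge_rel :: "nat set set \<Rightarrow> (nat \<times> nat) set" where
  "edge_rel E = {(u, v). {u, v} \<in> E}"

lemma comp_of_edge_rel: "comp_of E x = {y. (x, y) \<in> (edge_rel E)\<^sup>*}"
  unfolding comp_of_def edge_rel_def by simp

lemma edge_rel_rtrancl_sym: "(x, y) \<in> (edge_rel E)\<^sup>* \<Longrightarrow> (y, x) \<in> (edge_rel E)\<^sup>*"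
proof -
  have "(edge_rel E)\<inverse> = edge_rel E" unfolding edge_rel_def by (auto simp: insert_commute)
  then have "((edge_rel E)\<^sup>*)\<inverse> = (edge_rel E)\<^sup>*" by (metis rtrancl_converse)
  then show "(x, y) \<in> (edge_rel E)\<^sup>* \<Longrightarrow> (y, x) \<in> (edge_rel E)\<^sup>*" by (metis converseI)
qed

lemma edge_rel_Un_partner: "(u, w) \<in> edge_rel (A \<union> B) \<Longrightarrow> w = partner A u \<or> w = partner B u"
  unfolding edge_rel_def using partner_eqI[OF A] partner_eqI[OF B] by auto

lemma comp_of_eq_range_alt_walk:
  assumes v: "v < 2 * n"
  shows "comp_of (A \<union> B) v = range (alt_walk A B v)"
proof
  show "comp_of (A \<union> B) v \<subseteq> range (alt_walk A B v)"
  proof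
    fix y assume "y \<in> comp_of (A \<union> B) v"
    then have "(v, y) \<in> (edge_rel (A \<union> B))\<^sup>*" unfolding comp_of_edge_rel by simp
    then show "y \<in> range (alt_walk A B v)"
    proof (induction rule: rtrancl_induct)
      case base then show ?case using alt_walk.simps(1)[of A B v, symmetric] by blast
    next
      case (step y z)
      then obtain i where "y = alt_walk A B v i" by blast
      then show ?case using edge_rel_Un_partner[OF step(2)] partner_alt_walk[OF v] by auto
    qed
  qed
  show "range (alt_walk A B v) \<subseteq> comp_of (A \<union> B) v"
  proof
    fix y assume "y \<in> range (alt_walk A B v)"
    then obtain i where y: "y = alt_walk A B v i" by blast
    have "(v, alt_walk A B v i) \<in> (edge_rel (A \<union> B))\<^sup>*"
    proof (induction i)
      case 0 then show ?case by simp
    next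
      case (Suc i)
      have "(alt_walk A B v i, alt_walk A B v (Suc i)) \<in> edge_rel (A \<union> B)"
        unfolding edge_rel_def using alt_partner_edge[OF alt_walk_less[OF v]] by simp
      with Suc show ?case by (rule rtrancl_into_rtrancl)
    qed
    then show "y \<in> comp_of (A \<union> B) v" unfolding comp_of_edge_rel y by simp
  qed
qed

lemma comp_of_self: "v < 2 * n \<Longrightarrow> v \<in> comp_of (A \<union> B) v"
  unfolding comp_of_edge_rel by simp

lemma comp_of_subset: "v < 2 * n \<Longrightarrow> comp_of (A \<union> B) v \<subseteq> {0..<2 * n}"
  using comp_of_eq_range_alt_walk alt_walk_less by auto

lemma card_comp_of: "v < 2 * n \<Longrightarrow> card (comp_of (A \<union> B) v) = 2 * half_period v"
  using comp_of_eq_range_alt_walk card_range_alt_walk by simp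

lemma finite_comp_of: "v < 2 * n \<Longrightarrow> finite (comp_of (A \<union> B) v)"
  using comp_of_subset finite_subset by blast

lemma comp_of_eq: "y \<in> comp_of (A \<union> B) v \<Longrightarrow> comp_of (A \<union> B) y = comp_of (A \<union> B) v"
proof -
  assume y: "y \<in> comp_of (A \<union> B) v"
  then have vy: "(v, y) \<in> (edge_rel (A \<union> B))\<^sup>*" unfolding comp_of_edge_rel by simp
  then have yv: "(y, v) \<in> (edge_rel (A \<union> B))\<^sup>*" by (rule edge_rel_rtrancl_sym)
  show ?thesis unfolding comp_of_edge_rel using vy yv by (auto intro: rtrancl_trans)
qed

definition components :: "nat set set" where
  "components = {comp_of (A \<union> B) x | x. x < 2 * n}"

lemma dmatch_components: "dmatch n A B = image_mset card (mset_set components)"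
  unfolding dmatch_def components_def by simp

lemma finite_components: "finite components"
  unfolding components_def by simp

lemma components_disjoint: "C \<in> components \<Longrightarrow> C' \<in> components \<Longrightarrow> C \<inter> C' \<noteq> {} \<Longrightarrow> C = C'"
proof -
  assume "C \<in> components" "C' \<in> components" "C \<inter> C' \<noteq> {}"
  then obtain x y z where "C = comp_of (A \<union> B) x" "C' = comp_of (A \<union> B) y" "z \<in> C" "z \<in> C'"
    unfolding components_def by blast
  then show "C = C'" using comp_of_eq[of z x] comp_of_eq[of z y] by simp
qed

lemma Union_components: "\<Union> components = {0..<2 * n}"
proof
  show "\<Union> components \<subseteq> {0..<2 * n}" unfolding components_def using comp_of_subset by blast
  show "{0..<2 * n} \<subseteq> \<Union> components"
  proof
    fix x assume "x \<in> {0..<2 * n}"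
    then have "x \<in> comp_of (A \<union> B) x" "comp_of (A \<union> B) x \<in> components" using comp_of_self unfolding components_def by auto
    then show "x \<in> \<Union> components" by blast
  qed
qed

lemma card_components: "C \<in> components \<Longrightarrow> \<exists>v<2 * n. C = comp_of (A \<union> B) v \<and> card C = 2 * half_period v \<and> 0 < half_period v"
  unfolding components_def using card_comp_of half_period_spec(1) by blast

lemma sum_card_components: "(\<Sum>C\<in>components. card C) = 2 * n"
proof -
  have "card (\<Union> components) = (\<Sum>C\<in>components. card C)"
  proof (rule card_Union_disjoint)
    show "pairwise disjnt components" unfolding pairwise_def disjnt_def using components_disjoint by blast
    show "\<And>C. C \<in> components \<Longrightarrow> finite C" unfolding components_def using finite_comp_of by blast
  qed
  then show ?thesis using Union_components by simp
qed

lemma dmatch_double_partition: "\<exists>tau. is_partition n tau \<and> dmatch n A B = double tau"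
proof -
  define tau where "tau = image_mset (\<lambda>C. card C div 2) (mset_set components)"
  have ev: "C \<in> components \<Longrightarrow> 2 * (card C div 2) = card C" for C using card_components by fastforce
  have "double tau = image_mset (\<lambda>C. 2 * (card C div 2)) (mset_set components)"
    unfolding double_def tau_def by (simp add: image_mset.compositionality comp_def)
  also have "\<dots> = image_mset card (mset_set components)"
    by (rule image_mset_cong) (use ev finite_components in simp)
  finally have d: "dmatch n A B = double tau" using dmatch_components by simp
  have pos: "\<forall>x\<in>#tau. 0 < x" unfolding tau_def using card_components finite_components by fastforce
  have "2 * sum_mset tau = (\<Sum>C\<in>components. 2 * (card C div 2))"
    unfolding tau_def by (simp add: sum_unfold_sum_mset[symmetric] sum_distrib_left)
  also have "\<dots> = (\<Sum>C\<in>components. card C)" using ev by simp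
  finally have "sum_mset tau = n" using sum_card_components by simp
  then show ?thesis using pos d unfolding is_partition_def by blast
qed

end

lemma alt_walk_relabel:
  assumes A: "A \<in> matchings n" and B: "B \<in> matchings n" and g: "g permutes {0..<2 * n}" and v: "v < 2 * n"
  shows "alt_walk (relabel g A) (relabel g B) (g v) i = g (alt_walk A B v i)"
proof (induction i)
  case 0 then show ?case by simp
next
  case (Suc i)
  have w: "alt_walk A B v i < 2 * n" by (rule alt_walk_less[OF A B v])
  show ?case using Suc partner_relabel[OF A g w] partner_relabel[OF B g w] by (simp add: alt_partner_def)
qed

lemma comp_of_relabel:
  assumes A: "A \<in> matchings n" and B: "B \<in> matchings n" and g: "g permutes {0..<2 * n}" and v: "v < 2 * n"
  shows "comp_of (relabel g A \<union> relabel g B) (g v) = g ` comp_of (A \<union> B) v"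
proof -
  have gv: "g v < 2 * n" by (rule permutes_less[OF g v])
  have "comp_of (relabel g A \<union> relabel g B) (g v) = range (alt_walk (relabel g A) (relabel g B) (g v))"
    by (rule comp_of_eq_range_alt_walk[OF relabel_in_matchings[OF A g] relabel_in_matchings[OF B g] gv])
  also have "\<dots> = range (\<lambda>i. g (alt_walk A B v i))" using alt_walk_relabel[OF A B g v] by simp
  also have "\<dots> = g ` range (alt_walk A B v)" by auto
  also have "\<dots> = g ` comp_of (A \<union> B) v" using comp_of_eq_range_alt_walk[OF A B v] by simp
  finally show ?thesis .
qed

lemma components_relabel:
  assumes A: "A \<in> matchings n" and B: "B \<in> matchings n" and g: "g permutes {0..<2 * n}"
  shows "components n (relabel g A) (relabel g B) = (\<lambda>C. g ` C) ` components n A B"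
proof
  show "components n (relabel g A) (relabel g B) \<subseteq> (\<lambda>C. g ` C) ` components n A B"
  proof
    fix C assume "C \<in> components n (relabel g A) (relabel g B)"
    then obtain y where y: "y < 2 * n" "C = comp_of (relabel g A \<union> relabel g B) y"
      unfolding components_def[OF relabel_in_matchings[OF A g] relabel_in_matchings[OF B g]] by blast
    define x where "x = inv g y"
    have x: "x < 2 * n" "g x = y" unfolding x_def using permutes_less[OF permutes_inv[OF g] y(1)] permutes_inverses(1)[OF g] by auto
    have "C = g ` comp_of (A \<union> B) x" using comp_of_relabel[OF A B g x(1)] x y by simp
    then show "C \<in> (\<lambda>C. g ` C) ` components n A B" unfolding components_def[OF A B] using x by blast
  qed
  show "(\<lambda>C. g ` C) ` components n A B \<subseteq> components n (relabel g A) (relabel g B)"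
  proof
    fix C assume "C \<in> (\<lambda>C. g ` C) ` components n A B"
    then obtain x where x: "x < 2 * n" "C = g ` comp_of (A \<union> B) x" unfolding components_def[OF A B] by blast
    then have "C = comp_of (relabel g A \<union> relabel g B) (g x)" using comp_of_relabel[OF A B g x(1)] by simp
    then show "C \<in> components n (relabel g A) (relabel g B)"
      unfolding components_def[OF relabel_in_matchings[OF A g] relabel_in_matchings[OF B g]] using permutes_less[OF g x(1)] by blast
  qed
qed

lemma dmatch_relabel:
  assumes A: "A \<in> matchings n" and B: "B \<in> matchings n" and g: "g permutes {0..<2 * n}"
  shows "dmatch n (relabel g A) (relabel g B) = dmatch n A B"
proof -
  have ig: "inj g" by (rule permutes_inj[OF g])
  have inj: "inj_on (\<lambda>C. g ` C) (components n A B)" using ig by (auto simp: inj_on_def inj_image_eq_iff)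
  have "dmatch n (relabel g A) (relabel g B) = image_mset card (mset_set ((\<lambda>C. g ` C) ` components n A B))"
    using dmatch_components[OF relabel_in_matchings[OF A g] relabel_in_matchings[OF B g]] components_relabel[OF A B g] by simp
  also have "\<dots> = image_mset card (image_mset (\<lambda>C. g ` C) (mset_set (components n A B)))"
    using image_mset_mset_set[OF inj] by simp
  also have "\<dots> = image_mset (\<lambda>C. card (g ` C)) (mset_set (components n A B))"
    by (simp add: image_mset.compositionality comp_def)
  also have "\<dots> = image_mset card (mset_set (components n A B))"
    using card_image[OF inj_on_subset[OF ig]] by simp
  also have "\<dots> = dmatch n A B" using dmatch_components[OF A B] by simp
  finally show ?thesis .
qed

subsection \<open>Orbits of pairs of matchings\<close>

lemma image_mset_eq_bij_betw:
  assumes "finite X" "finite Y" "image_mset f (mset_set X) = image_mset h (mset_set Y)"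
  shows "\<exists>\<beta>. bij_betw \<beta> X Y \<and> (\<forall>x\<in>X. h (\<beta> x) = f x)"
  using assms
proof (induction X arbitrary: Y rule: finite_induct)
  case empty
  then show ?case by (simp add: mset_set_empty_iff bij_betw_def)
next
  case (insert x X)
  have "f x \<in># image_mset h (mset_set Y)" using insert.prems(2) insert.hyps by (simp flip: insert.prems(2))
  then obtain y where y: "y \<in> Y" "h y = f x" using insert.prems(1) by auto
  have "add_mset (f x) (image_mset f (mset_set X)) = add_mset (h y) (image_mset h (mset_set (Y - {y})))"
    using insert.prems(2) insert.hyps mset_set.remove[OF insert.prems(1) y(1)] by simp
  then obtain \<beta> where \<beta>: "bij_betw \<beta> X (Y - {y})" "\<forall>x\<in>X. h (\<beta> x) = f x"
    using insert.IH[of "Y - {y}"] insert.prems(1) y(2) by auto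
  have "bij_betw (\<lambda>z. if z \<in> {x} then y else \<beta> z) ({x} \<union> X) ({y} \<union> (Y - {y}))"
    by (rule bij_betw_disjoint_Un) (use \<beta>(1) insert.hyps(2) in \<open>auto simp: bij_betw_def\<close>)
  moreover have "{y} \<union> (Y - {y}) = Y" using y(1) by blast
  ultimately show ?case using \<beta>(2) y(2) insert.hyps(2) by (intro exI[of _ "\<lambda>z. if z \<in> {x} then y else \<beta> z"]) auto
qed

lemma component_base_spec:
  assumes A: "A \<in> matchings n" and B: "B \<in> matchings n" and C: "C \<in> components n A B"
  shows "Min C < 2 * n" "comp_of (A \<union> B) (Min C) = C" "C = range (alt_walk A B (Min C))"
    "card C = 2 * half_period A B (Min C)"
proof -
  obtain x where x: "x < 2 * n" "C = comp_of (A \<union> B) x" using C unfolding components_def[OF A B] by blast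
  have "Min C \<in> C"
    using finite_comp_of[OF A B x(1)] comp_of_self[OF A B x(1)] x(2) by (intro Min_in) auto
  then show "Min C < 2 * n" using comp_of_subset[OF A B x(1)] x(2) by auto
  show c: "comp_of (A \<union> B) (Min C) = C" using comp_of_eq[OF A B, of "Min C" x] \<open>Min C \<in> C\<close> x(2) by simp
  show "C = range (alt_walk A B (Min C))" using comp_of_eq_range_alt_walk[OF A B \<open>Min C < 2 * n\<close>] c by simp
  show "card C = 2 * half_period A B (Min C)" using card_comp_of[OF A B \<open>Min C < 2 * n\<close>] c by simp
qed

text \<open>Given a size-preserving bijection \<open>\<beta>\<close> between the components of \<open>A \<union> B\<close> and of
  \<open>A' \<union> B'\<close>, the alternating walk from the least vertex of each component \<open>C\<close> is sent to the
  alternating walk from the least vertex of \<open>\<beta> C\<close>; this relabelling maps \<open>(A, B)\<close> to \<open>(A', B')\<close>.\<close>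

context
  fixes n :: nat and A B A' B' :: "nat set set" and \<beta> :: "nat set \<Rightarrow> nat set"
  assumes A: "A \<in> matchings n" and B: "B \<in> matchings n"
    and A': "A' \<in> matchings n" and B': "B' \<in> matchings n"
    and \<beta>: "bij_betw \<beta> (components n A B) (components n A' B')"
    and card_\<beta>: "\<And>C. C \<in> components n A B \<Longrightarrow> card (\<beta> C) = card C"
begin

definition walk_pos :: "nat \<Rightarrow> nat" where
  "walk_pos y = (SOME i. alt_walk A B (Min (comp_of (A \<union> B) y)) i = y)"

definition transport :: "nat \<Rightarrow> nat" where
  "transport y = (if y < 2 * n then alt_walk A' B' (Min (\<beta> (comp_of (A \<union> B) y))) (walk_pos y) else y)"

lemma component_of_vertex:
  assumes y: "y < 2 * n"
  shows "comp_of (A \<union> B) y \<in> components n A B"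
    "alt_walk A B (Min (comp_of (A \<union> B) y)) (walk_pos y) = y"
proof -
  show C: "comp_of (A \<union> B) y \<in> components n A B" unfolding components_def[OF A B] using y by blast
  have "y \<in> range (alt_walk A B (Min (comp_of (A \<union> B) y)))"
    using component_base_spec(3)[OF A B C] comp_of_self[OF A B y] by simp
  then obtain i where "y = alt_walk A B (Min (comp_of (A \<union> B) y)) i" by blast
  then show "alt_walk A B (Min (comp_of (A \<union> B) y)) (walk_pos y) = y"
    unfolding walk_pos_def by (intro someI) (rule sym)
qed

lemma transport_alt_walk:
  assumes C: "C \<in> components n A B"
  shows "transport (alt_walk A B (Min C) j) = alt_walk A' B' (Min (\<beta> C)) j"
proof -
  let ?y = "alt_walk A B (Min C) j"
  note b = component_base_spec[OF A B C]
  have C': "\<beta> C \<in> components n A' B'" using \<beta> C by (auto simp: bij_betw_def)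
  note b' = component_base_spec[OF A' B' C']
  have y: "?y < 2 * n" by (rule alt_walk_less[OF A B b(1)])
  have "?y \<in> C" using b(3) by auto
  then have cy: "comp_of (A \<union> B) ?y = C" using comp_of_eq[OF A B, of ?y "Min C"] b(2) by simp
  have "alt_walk A B (Min C) (walk_pos ?y) = ?y" using component_of_vertex(2)[OF y] cy by simp
  then have "walk_pos ?y mod card C = j mod card C" using alt_walk_eq_iff[OF A B b(1)] b(4) by simp
  then have "alt_walk A' B' (Min (\<beta> C)) (walk_pos ?y) = alt_walk A' B' (Min (\<beta> C)) j"
    using alt_walk_eq_iff[OF A' B' b'(1)] b'(4) card_\<beta>[OF C] by simp
  then show ?thesis unfolding transport_def using y cy by simp
qed

lemma transport_partner:
  assumes x: "x < 2 * n"
  shows "transport (partner A x) = partner A' (transport x) \<and> transport (partner B x) = partner B' (transport x)"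
proof -
  let ?C = "comp_of (A \<union> B) x" and ?i = "walk_pos x"
  have C: "?C \<in> components n A B" and xw: "alt_walk A B (Min ?C) ?i = x" using component_of_vertex[OF x] by auto
  note b = component_base_spec[OF A B C]
  have C': "\<beta> ?C \<in> components n A' B'" using \<beta> C by (auto simp: bij_betw_def)
  note b' = component_base_spec[OF A' B' C']
  have hp: "half_period A' B' (Min (\<beta> ?C)) = half_period A B (Min ?C)" using b(4) b'(4) card_\<beta>[OF C] by simp
  have step: "transport (alt_partner A B k x) = alt_partner A' B' k (transport x)" if "k = ?i \<or> k = Suc ?i" for k
    using that
  proof
    assume k: "k = ?i"
    show ?thesis using transport_alt_walk[OF C, of "Suc ?i"] transport_alt_walk[OF C, of ?i] xw k by simp
  next
    assume k: "k = Suc ?i"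
    show ?thesis
      using transport_alt_walk[OF C, of "?i + 2 * half_period A B (Min ?C) - 1"] transport_alt_walk[OF C, of ?i] xw k
        alt_walk_other_partner[OF A B b(1), of ?i] alt_walk_other_partner[OF A' B' b'(1), of ?i] hp by simp
  qed
  then show ?thesis
    using step[of ?i] step[of "Suc ?i"] unfolding alt_partner_def by (cases "even ?i") auto
qed

lemma transport_in_component:
  assumes y: "y < 2 * n"
  shows "\<beta> (comp_of (A \<union> B) y) \<in> components n A' B'" "transport y \<in> \<beta> (comp_of (A \<union> B) y)"
proof -
  show C': "\<beta> (comp_of (A \<union> B) y) \<in> components n A' B'"
    using bij_betwE[OF \<beta>] component_of_vertex(1)[OF y] by blast
  have "transport y = alt_walk A' B' (Min (\<beta> (comp_of (A \<union> B) y))) (walk_pos y)"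
    unfolding transport_def using y by simp
  then show "transport y \<in> \<beta> (comp_of (A \<union> B) y)"
    by (subst component_base_spec(3)[OF A' B' C']) simp
qed

lemma transport_permutes: "transport permutes {0..<2 * n}"
proof (rule permutes_lessI)
  show "transport y < 2 * n" if y: "y < 2 * n" for y
    using transport_in_component[OF y] Union_components[OF A' B'] by fastforce
  show "inj_on transport {0..<2 * n}"
  proof (rule inj_onI)
    fix y1 y2 assume y: "y1 \<in> {0..<2 * n}" "y2 \<in> {0..<2 * n}" and eq: "transport y1 = transport y2"
    let ?C = "comp_of (A \<union> B) y1"
    have y1: "y1 < 2 * n" using y by simp
    have C: "?C \<in> components n A B" using component_of_vertex(1)[OF y1] .
    have "\<beta> ?C = \<beta> (comp_of (A \<union> B) y2)"
      using components_disjoint[OF A' B'] transport_in_component y eq by (metis atLeastLessThan_iff disjoint_iff)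
    then have CC: "comp_of (A \<union> B) y2 = ?C"
      using \<beta> C component_of_vertex(1) y unfolding bij_betw_def inj_on_def by auto
    note b = component_base_spec[OF A B C] and b' = component_base_spec[OF A' B' transport_in_component(1)[OF y1]]
    have "alt_walk A' B' (Min (\<beta> ?C)) (walk_pos y1) = alt_walk A' B' (Min (\<beta> ?C)) (walk_pos y2)"
      using eq y CC unfolding transport_def by simp
    then have "walk_pos y1 mod card ?C = walk_pos y2 mod card ?C"
      using alt_walk_eq_iff[OF A' B' b'(1)] b'(4) card_\<beta>[OF C] y by simp
    then have "alt_walk A B (Min ?C) (walk_pos y1) = alt_walk A B (Min ?C) (walk_pos y2)"
      using alt_walk_eq_iff[OF A B b(1)] b(4) by simp
    moreover have "alt_walk A B (Min ?C) (walk_pos y2) = y2" using component_of_vertex(2)[of y2] y CC by simp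
    ultimately show "y1 = y2" using component_of_vertex(2)[OF y1] by simp
  qed
qed (simp add: transport_def)

end

theorem relabel_pair_transitive:
  assumes A: "A \<in> matchings n" and B: "B \<in> matchings n"
    and A': "A' \<in> matchings n" and B': "B' \<in> matchings n"
    and d: "dmatch n A B = dmatch n A' B'"
  shows "\<exists>g. g permutes {0..<2 * n} \<and> relabel g A = A' \<and> relabel g B = B'"
proof -
  have "image_mset card (mset_set (components n A B)) = image_mset card (mset_set (components n A' B'))"
    using d dmatch_components[OF A B] dmatch_components[OF A' B'] by simp
  then obtain \<beta> where \<beta>: "bij_betw \<beta> (components n A B) (components n A' B')"
    and card_\<beta>: "\<forall>C\<in>components n A B. card (\<beta> C) = card C"
    using image_mset_eq_bij_betw[OF finite_components[OF A B] finite_components[OF A' B']] by blast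
  have "\<And>C. C \<in> components n A B \<Longrightarrow> card (\<beta> C) = card C" using card_\<beta> by blast
  note g = transport_permutes[OF A B A' B' \<beta> this] transport_partner[OF A B A' B' \<beta> this]
  have "relabel (transport n A B A' B' \<beta>) A = A'" "relabel (transport n A B A' B' \<beta>) B = B'"
    using relabel_eqI[OF A A' g(1)] relabel_eqI[OF B B' g(1)] g(2) by auto
  then show ?thesis using g(1) by blast
qed

lemma half_period_self:
  assumes A: "A \<in> matchings n" and v: "v < 2 * n"
  shows "half_period A A v = 1"
  unfolding half_period_def[OF A A]
proof (rule Least_equality)
  show "0 < (1::nat) \<and> alt_walk A A v (2 * 1) = v"
    using partner_partner[OF A] by (simp add: numeral_2_eq_2 alt_partner_def)
qed simp

lemma dmatch_self:
  assumes A: "A \<in> matchings n"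
  shows "dmatch n A A = replicate_mset n 2"
proof -
  let ?Cs = "components n A A"
  have c2: "card C = 2" if "C \<in> ?Cs" for C
    using card_components[OF A A that] half_period_self[OF A] by auto
  have "image_mset card (mset_set ?Cs) = image_mset (\<lambda>_. 2) (mset_set ?Cs)"
    by (rule image_mset_cong) (use c2 finite_components[OF A A] in simp)
  also have "\<dots> = replicate_mset (card ?Cs) 2" by (simp add: image_mset_const_eq)
  finally have d: "dmatch n A A = replicate_mset (card ?Cs) 2" using dmatch_components[OF A A] by simp
  have "(\<Sum>C\<in>?Cs. card C) = 2 * card ?Cs" using c2 by simp
  then have "card ?Cs = n" using sum_card_components[OF A A] by simp
  then show ?thesis using d by simp
qed

lemma I_match_in_matchings: "I_match n \<in> matchings n"
  unfolding matchings_def I_match_def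
proof (intro CollectI conjI ballI allI impI)
  fix e assume "e \<in> {{i, n + i} |i. i < n}"
  then obtain i where "e = {i, n + i}" "i < n" by blast
  then show "\<exists>i j. e = {i, j} \<and> i \<noteq> j \<and> i < 2 * n \<and> j < 2 * n"
    by (intro exI[of _ i] exI[of _ "n + i"]) auto
next
  fix x :: nat assume x: "x < 2 * n"
  define i where "i = (if x < n then x else x - n)"
  have i: "i < n" "x \<in> {i, n + i}" unfolding i_def using x by auto
  show "\<exists>!e. e \<in> {{i, n + i} |i. i < n} \<and> x \<in> e"
  proof (rule ex1I[where a = "{i, n + i}"])
    show "{i, n + i} \<in> {{i, n + i} |i. i < n} \<and> x \<in> {i, n + i}" using i by blast
  next
    fix e assume "e \<in> {{i, n + i} |i. i < n} \<and> x \<in> e"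
    then obtain j where j: "e = {j, n + j}" "j < n" "x \<in> {j, n + j}" by blast
    then have "j = i" unfolding i_def by auto
    then show "e = {i, n + i}" using j by simp
  qed
qed

lemma relabel_to_I_match:
  assumes A: "A \<in> matchings n"
  shows "\<exists>g. g permutes {0..<2 * n} \<and> relabel g A = I_match n"
proof -
  have "dmatch n A A = dmatch n (I_match n) (I_match n)" using dmatch_self[OF A] dmatch_self[OF I_match_in_matchings] by simp
  then show ?thesis using relabel_pair_transitive[OF A A I_match_in_matchings I_match_in_matchings] by blast
qed

lemma funpow_conj:
  assumes k: "k permutes S"
  shows "((k \<circ> s \<circ> inv k) ^^ j) (k x) = k ((s ^^ j) x)"
proof (induction j)
  case 0 then show ?case by simp
next
  case (Suc j)
  then show ?case using permutes_inverses(2)[OF k] by simp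
qed

lemma orbit_conj:
  assumes k: "k permutes S"
  shows "orbit_of (k \<circ> s \<circ> inv k) (k x) = k ` orbit_of s x"
  unfolding orbit_of_def using funpow_conj[OF k] by auto

lemma cycle_type_conj:
  assumes k: "k permutes {0..<m}"
  shows "cycle_type m (k \<circ> s \<circ> inv k) = cycle_type m s"
proof -
  let ?O = "{orbit_of s x | x. x < m}"
  let ?O' = "{orbit_of (k \<circ> s \<circ> inv k) y | y. y < m}"
  have eq: "?O' = (\<lambda>X. k ` X) ` ?O"
  proof
    show "?O' \<subseteq> (\<lambda>X. k ` X) ` ?O"
    proof
      fix X assume "X \<in> ?O'"
      then obtain y where y: "y < m" "X = orbit_of (k \<circ> s \<circ> inv k) y" by blast
      define x where "x = inv k y"
      have x: "x < m" "k x = y" unfolding x_def using permutes_less[OF permutes_inv[OF k] y(1)] permutes_inverses(1)[OF k] by auto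
      have "X = k ` orbit_of s x" using y x orbit_conj[OF k] by metis
      then show "X \<in> (\<lambda>X. k ` X) ` ?O" using x by blast
    qed
    show "(\<lambda>X. k ` X) ` ?O \<subseteq> ?O'"
    proof
      fix X assume "X \<in> (\<lambda>X. k ` X) ` ?O"
      then obtain x where x: "x < m" "X = k ` orbit_of s x" by blast
      then have "X = orbit_of (k \<circ> s \<circ> inv k) (k x)" using orbit_conj[OF k] by metis
      then show "X \<in> ?O'" using permutes_less[OF k x(1)] by blast
    qed
  qed
  have ik: "inj k" by (rule permutes_inj[OF k])
  have inj: "inj_on (\<lambda>X. k ` X) ?O" using ik by (auto simp: inj_on_def inj_image_eq_iff)
  have "cycle_type m (k \<circ> s \<circ> inv k) = image_mset card (mset_set ((\<lambda>X. k ` X) ` ?O))"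
    unfolding cycle_type_def eq ..
  also have "\<dots> = image_mset card (image_mset (\<lambda>X. k ` X) (mset_set ?O))"
    using image_mset_mset_set[OF inj] by simp
  also have "\<dots> = image_mset (\<lambda>X. card (k ` X)) (mset_set ?O)"
    by (simp add: image_mset.compositionality comp_def)
  also have "\<dots> = image_mset card (mset_set ?O)"
    using card_image[OF inj_on_subset[OF ik]] by simp
  also have "\<dots> = cycle_type m s" unfolding cycle_type_def ..
  finally show ?thesis .
qed

lemma perms_of_type_conj:
  assumes s: "s \<in> perms_of_type m mu" and k: "k permutes {0..<m}"
  shows "k \<circ> s \<circ> inv k \<in> perms_of_type m mu"
proof -
  have sp: "s permutes {0..<m}" using s unfolding perms_of_type_def by simp
  have "k \<circ> s \<circ> inv k permutes {0..<m}"
    using permutes_compose[OF permutes_inv[OF k] permutes_compose[OF sp k]] by (simp add: comp_assoc)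
  then show ?thesis using s cycle_type_conj[OF k, of s] unfolding perms_of_type_def by simp
qed

lemma finite_perms_of_type: "finite (perms_of_type m mu)"
proof -
  have "perms_of_type m mu \<subseteq> {s. s permutes {0..<m}}" unfolding perms_of_type_def by auto
  then show ?thesis using finite_permutations[of "{0..<m}"] finite_subset by blast
qed

lemma perms_of_type_permutes: "s \<in> perms_of_type m mu \<Longrightarrow> s permutes {0..<m}"
  unfolding perms_of_type_def by simp

lemma bij_betw_conj_perms_of_type:
  assumes k: "k permutes {0..<m}"
  shows "bij_betw (\<lambda>s. k \<circ> s \<circ> inv k) (perms_of_type m mu) (perms_of_type m mu)"
proof (rule bij_betw_byWitness[where f' = "\<lambda>s. inv k \<circ> s \<circ> k"])
  have i1: "inv k \<circ> (k \<circ> s \<circ> inv k) \<circ> k = s" for s using permutes_inverses[OF k] by (simp add: fun_eq_iff)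
  have i2: "k \<circ> (inv k \<circ> s \<circ> k) \<circ> inv k = s" for s using permutes_inverses[OF k] by (simp add: fun_eq_iff)
  show "\<forall>a\<in>perms_of_type m mu. inv k \<circ> (k \<circ> a \<circ> inv k) \<circ> k = a" using i1 by simp
  show "\<forall>a'\<in>perms_of_type m mu. k \<circ> (inv k \<circ> a' \<circ> k) \<circ> inv k = a'" using i2 by simp
  show "(\<lambda>s. k \<circ> s \<circ> inv k) ` perms_of_type m mu \<subseteq> perms_of_type m mu" using perms_of_type_conj[OF _ k] by auto
  have "inv k \<circ> s \<circ> k = inv k \<circ> s \<circ> inv (inv k)" for s using permutes_inv_inv[OF k] by simp
  then show "(\<lambda>s. inv k \<circ> s \<circ> k) ` perms_of_type m mu \<subseteq> perms_of_type m mu"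
    using perms_of_type_conj[OF _ permutes_inv[OF k]] by auto
qed

lemma card_perms_relabel_conj:
  assumes h: "h permutes {0..<2 * n}"
  shows "card {s \<in> perms_of_type (2 * n) mu. relabel s A = B} =
         card {s \<in> perms_of_type (2 * n) mu. relabel s (relabel h A) = relabel h B}"
proof -
  have "relabel (h \<circ> s \<circ> inv h) (relabel h A) = relabel h B \<longleftrightarrow> relabel s A = B" for s
  proof -
    have "relabel (h \<circ> s \<circ> inv h) (relabel h A) = relabel h (relabel s A)"
      using permutes_inv_o(2)[OF h] by (simp add: relabel_relabel comp_assoc)
    then show ?thesis using relabel_inv_relabel[OF h] by metis
  qed
  then have "bij_betw (\<lambda>s. h \<circ> s \<circ> inv h) {s \<in> perms_of_type (2 * n) mu. relabel s A = B}
      {s \<in> perms_of_type (2 * n) mu. relabel s (relabel h A) = relabel h B}"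
    by (intro bij_betw_Collect[OF bij_betw_conj_perms_of_type[OF h]])
  then show ?thesis by (rule bij_betw_same_card)
qed

lemma card_perms_relabel_eq_m_count:
  assumes A: "A \<in> matchings n" and B: "B \<in> matchings n" and d: "dmatch n A B = double tau"
  shows "card {s \<in> perms_of_type (2 * n) mu. relabel s A = B} = m_count n mu tau"
proof -
  define A0 where "A0 = (SOME A. A \<in> matchings n \<and> dmatch n (I_match n) A = double tau)"
  obtain g where g: "g permutes {0..<2 * n}" "relabel g A = I_match n" using relabel_to_I_match[OF A] by blast
  have "relabel g B \<in> matchings n \<and> dmatch n (I_match n) (relabel g B) = double tau"
    using dmatch_relabel[OF A B g(1)] g d relabel_in_matchings[OF B g(1)] by simp
  then have A0: "A0 \<in> matchings n" "dmatch n (I_match n) A0 = double tau"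
    unfolding A0_def by (metis (mono_tags, lifting) someI_ex)+
  obtain h where h: "h permutes {0..<2 * n}" "relabel h A = I_match n" "relabel h B = A0"
    using relabel_pair_transitive[OF A B I_match_in_matchings A0(1)] d A0(2) by auto
  have "card {s \<in> perms_of_type (2 * n) mu. relabel s A = B} = card {s \<in> perms_of_type (2 * n) mu. relabel s (I_match n) = A0}"
    using card_perms_relabel_conj[OF h(1), of mu A B] h by simp
  also have "\<dots> = m_count n mu tau" unfolding m_count_def A0_def[symmetric] relabel_def Let_def by simp
  finally show ?thesis .
qed

lemma double_inj: "double tau = double tau' \<Longrightarrow> tau = tau'"
proof -
  have h: "image_mset (\<lambda>x. x div 2) (double t) = t" for t
    unfolding double_def by (simp add: image_mset.compositionality comp_def)
  assume "double tau = double tau'"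
  then show ?thesis using h[of tau] h[of tau'] by metis
qed

lemma size_le_sum_mset: "\<forall>x\<in>#t. 0 < x \<Longrightarrow> size t \<le> sum_mset (t :: nat multiset)"
  by (induction t) auto

lemma elem_le_sum_mset: "x \<in># t \<Longrightarrow> x \<le> sum_mset (t :: nat multiset)"
  using sum_mset.remove[of x t] by simp

lemma finite_partitions: "finite {tau. is_partition n tau}"
proof -
  have "{tau. is_partition n tau} \<subseteq> mset ` {xs. set xs \<subseteq> {0..n} \<and> length xs \<le> n}"
  proof
    fix tau assume "tau \<in> {tau. is_partition n tau}"
    then have t: "\<forall>x\<in>#tau. 0 < x" "sum_mset tau = n" unfolding is_partition_def by auto
    let ?xs = "sorted_list_of_multiset tau"
    have "set ?xs \<subseteq> {0..n}" using elem_le_sum_mset[of _ tau] t(2) by auto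
    moreover have "length ?xs \<le> n" using size_le_sum_mset[OF t(1)] t(2) by (metis mset_sorted_list_of_multiset size_mset)
    ultimately show "tau \<in> mset ` {xs. set xs \<subseteq> {0..n} \<and> length xs \<le> n}"
      by (metis (mono_tags, lifting) image_eqI mem_Collect_eq mset_sorted_list_of_multiset)
  qed
  moreover have "finite {xs. set xs \<subseteq> {0..n} \<and> length xs \<le> n}" by (rule finite_lists_length_le) simp
  ultimately show ?thesis using finite_subset by blast
qed

subsection \<open>The class sums acting on matchings\<close>

definition class_sum_M :: "nat \<Rightarrow> nat multiset \<Rightarrow> (nat set set \<Rightarrow> complex) \<Rightarrow> (nat set set \<Rightarrow> complex)" where
  "class_sum_M n mu g = (\<lambda>B. \<Sum>s\<in>perms_of_type (2 * n) mu. act_M s g B)"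

lemma act_M_eq_sum_relabel:
  assumes g: "in_CM n g" and s: "s permutes {0..<2 * n}"
  shows "act_M s g B = (\<Sum>A\<in>matchings n. if relabel s A = B then g A else 0)"
proof (cases "B \<in> matchings n")
  case False
  then have "relabel (inv s) B \<notin> matchings n" using relabel_in_matchings_iff[OF permutes_inv[OF s]] by simp
  moreover have "relabel s A \<noteq> B" if "A \<in> matchings n" for A using relabel_in_matchings[OF that s] False by auto
  ultimately show ?thesis using g unfolding act_M_eq_relabel in_CM_def by simp
next
  case True
  have "(\<Sum>A\<in>matchings n. if relabel s A = B then g A else 0) =
      (\<Sum>A\<in>matchings n. if A = relabel (inv s) B then g A else 0)"
    using relabel_relabel_inv[OF s] relabel_inv_relabel[OF s] by (intro sum.cong) auto
  also have "\<dots> = g (relabel (inv s) B)"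
    using relabel_in_matchings_iff[OF permutes_inv[OF s]] True finite_matchings[of n] by simp
  finally show ?thesis unfolding act_M_eq_relabel by simp
qed

lemma class_sum_M_eq_card_sum:
  assumes g: "in_CM n g"
  shows "class_sum_M n mu g B =
    (\<Sum>A\<in>matchings n. of_nat (card {s \<in> perms_of_type (2 * n) mu. relabel s A = B}) * g A)"
proof -
  let ?P = "perms_of_type (2 * n) mu"
  have "class_sum_M n mu g B = (\<Sum>s\<in>?P. \<Sum>A\<in>matchings n. if relabel s A = B then g A else 0)"
    unfolding class_sum_M_def using act_M_eq_sum_relabel[OF g perms_of_type_permutes] by simp
  also have "\<dots> = (\<Sum>A\<in>matchings n. \<Sum>s\<in>?P. if relabel s A = B then g A else 0)" by (rule sum.swap)
  also have "\<dots> = (\<Sum>A\<in>matchings n. of_nat (card {s \<in> ?P. relabel s A = B}) * g A)"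
    using finite_perms_of_type by (simp add: sum.If_cases Int_def conj_commute)
  finally show ?thesis .
qed

text \<open>This is where \<open>m(\<mu>, 2\<tau>)\<close> enters: the number of permutations of type \<open>\<mu>\<close> sending
  \<open>A\<close> to \<open>B\<close> depends only on \<open>d(A, B)\<close>.\<close>

lemma class_sum_M_eq_N_op_sum:
  assumes g: "in_CM n g"
  shows "class_sum_M n mu g = (\<lambda>B. \<Sum>tau\<in>{tau. is_partition n tau}. of_nat (m_count n mu tau) * N_op n tau g B)"
proof
  fix B
  let ?P = "perms_of_type (2 * n) mu" and ?M = "matchings n" and ?Par = "{tau. is_partition n tau}"
  show "class_sum_M n mu g B = (\<Sum>tau\<in>?Par. of_nat (m_count n mu tau) * N_op n tau g B)"
  proof (cases "B \<in> ?M")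
    case False
    have "card {s \<in> ?P. relabel s A = B} = 0" if "A \<in> ?M" for A
      using relabel_in_matchings[OF that perms_of_type_permutes] False by (auto simp: card_eq_0_iff)
    then show ?thesis unfolding class_sum_M_eq_card_sum[OF g] N_op_def using False by simp
  next
    case True
    have "of_nat (card {s \<in> ?P. relabel s A = B}) * g A =
        (\<Sum>tau\<in>?Par. if dmatch n A B = double tau then of_nat (m_count n mu tau) * g A else 0)"
      if A: "A \<in> ?M" for A
    proof -
      obtain tau0 where t0: "is_partition n tau0" "dmatch n A B = double tau0"
        using dmatch_double_partition[OF A True] by blast
      have "(\<Sum>tau\<in>?Par. if dmatch n A B = double tau then of_nat (m_count n mu tau) * g A else 0)
          = (\<Sum>tau\<in>?Par. if tau = tau0 then of_nat (m_count n mu tau) * g A else 0)"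
        using t0(2) double_inj by (intro sum.cong) auto
      also have "\<dots> = of_nat (card {s \<in> ?P. relabel s A = B}) * g A"
        using t0 finite_partitions[of n] card_perms_relabel_eq_m_count[OF A True t0(2)] by simp
      finally show ?thesis by simp
    qed
    then have "class_sum_M n mu g B =
        (\<Sum>A\<in>?M. \<Sum>tau\<in>?Par. if dmatch n A B = double tau then of_nat (m_count n mu tau) * g A else 0)"
      unfolding class_sum_M_eq_card_sum[OF g] by simp
    also have "\<dots> = (\<Sum>tau\<in>?Par. \<Sum>A\<in>?M. if dmatch n A B = double tau then of_nat (m_count n mu tau) * g A else 0)"
      by (rule sum.swap)
    also have "\<dots> = (\<Sum>tau\<in>?Par. of_nat (m_count n mu tau) * N_op n tau g B)"
      unfolding N_op_def using True finite_matchings[of n]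
      by (simp add: sum.If_cases Int_def sum_distrib_left conj_commute)
    finally show ?thesis .
  qed
qed

subsection \<open>Invariant operators on matchings commute\<close>

definition inner_M :: "nat \<Rightarrow> (nat set set \<Rightarrow> complex) \<Rightarrow> (nat set set \<Rightarrow> complex) \<Rightarrow> complex" where
  "inner_M n x y = (\<Sum>B\<in>matchings n. x B * cnj (y B))"

definition delta_M :: "nat set set \<Rightarrow> nat set set \<Rightarrow> complex" where
  "delta_M B0 = (\<lambda>B. if B = B0 then 1 else 0)"

lemma act_M_comp:
  assumes s: "s permutes {0..<2 * n}" and s': "s' permutes {0..<2 * n}"
  shows "act_M s (act_M s' g) = act_M (s \<circ> s') g"
proof -
  have "inv (s \<circ> s') = inv s' \<circ> inv s"
    by (rule o_inv_distrib) (use permutes_bij s s' in auto)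
  then show ?thesis unfolding act_M_eq_relabel relabel_relabel by simp
qed

lemma act_M_delta_M:
  assumes s: "s permutes {0..<2 * n}"
  shows "act_M s (delta_M B0) = delta_M (relabel s B0)"
proof
  fix B
  have "relabel (inv s) B = B0 \<longleftrightarrow> B = relabel s B0" using relabel_relabel_inv[OF s] relabel_inv_relabel[OF s] by metis
  then show "act_M s (delta_M B0) B = delta_M (relabel s B0) B" unfolding act_M_eq_relabel delta_M_def by simp
qed

lemma inner_M_act_M:
  assumes k: "k permutes {0..<2 * n}"
  shows "inner_M n (act_M k x) (act_M k y) = inner_M n x y"
  unfolding inner_M_def act_M_eq_relabel using sum_matchings_relabel[OF permutes_inv[OF k], of "\<lambda>B. x B * cnj (y B)"] by simp

lemma delta_M_in_CM: "B0 \<in> matchings n \<Longrightarrow> in_CM n (delta_M B0)"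
  unfolding in_CM_def delta_M_def by auto

lemma inner_M_delta_M: "B0 \<in> matchings n \<Longrightarrow> inner_M n (delta_M B0) y = cnj (y B0)"
proof -
  assume B0: "B0 \<in> matchings n"
  have "inner_M n (delta_M B0) y = (\<Sum>B\<in>matchings n. if B = B0 then cnj (y B) else 0)"
    unfolding inner_M_def delta_M_def by (rule sum.cong) auto
  also have "\<dots> = cnj (y B0)" using B0 finite_matchings[of n] by simp
  finally show ?thesis .
qed

lemma inner_M_lincomb: "inner_M n (\<lambda>B. a * x B + b * y B) z = a * inner_M n x z + b * inner_M n y z"
  unfolding inner_M_def by (simp add: sum.distrib sum_distrib_left algebra_simps)

lemma inner_M_sum: "finite I \<Longrightarrow> inner_M n (\<lambda>B. \<Sum>i\<in>I. c i * u i B) z = (\<Sum>i\<in>I. c i * inner_M n (u i) z)"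
  unfolding inner_M_def by (simp add: sum_distrib_left sum_distrib_right sum.swap[of _ I] mult_ac)

lemma inner_M_cnj: "inner_M n y x = cnj (inner_M n x y)"
  unfolding inner_M_def by (simp add: mult.commute)

lemma inner_M_self: "inner_M n x x = of_real (\<Sum>B\<in>matchings n. (cmod (x B))\<^sup>2)"
proof -
  have "inner_M n x x = (\<Sum>B\<in>matchings n. of_real ((cmod (x B))\<^sup>2))"
    unfolding inner_M_def using complex_norm_square by (intro sum.cong) auto
  then show ?thesis by simp
qed

definition invariant_kernel :: "nat \<Rightarrow> (nat set set \<Rightarrow> nat set set \<Rightarrow> complex) \<Rightarrow> bool" where
  "invariant_kernel n K \<longleftrightarrow> (\<forall>k. k permutes {0..<2 * n} \<longrightarrow>
     (\<forall>A\<in>matchings n. \<forall>B\<in>matchings n. K (relabel k A) (relabel k B) = K A B))"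

lemma invariant_kernel_sym:
  assumes K: "invariant_kernel n K" and A: "A \<in> matchings n" and B: "B \<in> matchings n"
  shows "K A B = K B A"
proof -
  have "dmatch n A B = dmatch n B A" unfolding dmatch_def by (simp add: Un_commute)
  then obtain k where k: "k permutes {0..<2 * n}" "relabel k A = B" "relabel k B = A"
    using relabel_pair_transitive[OF A B B A] by blast
  then show ?thesis using K A B unfolding invariant_kernel_def by metis
qed

text \<open>Gelfand's trick: since \<open>(A, B)\<close> and \<open>(B, A)\<close> lie in the same orbit, invariant kernels
  are symmetric, and a product of invariant kernels is again invariant; so
  \<open>K\<^sub>1 K\<^sub>2 = (K\<^sub>1 K\<^sub>2)\<^sup>T = K\<^sub>2\<^sup>T K\<^sub>1\<^sup>T = K\<^sub>2 K\<^sub>1\<close>.\<close>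

lemma invariant_kernels_commute:
  assumes K1: "invariant_kernel n K1" and K2: "invariant_kernel n K2" and A: "A \<in> matchings n" and B: "B \<in> matchings n"
  shows "(\<Sum>C\<in>matchings n. K1 A C * K2 C B) = (\<Sum>C\<in>matchings n. K2 A C * K1 C B)"
proof -
  define P where "P X Y = (\<Sum>C\<in>matchings n. K2 X C * K1 C Y)" for X Y
  have PK: "invariant_kernel n P" unfolding invariant_kernel_def
  proof (intro allI impI ballI)
    fix k X Y assume k: "k permutes {0..<2 * n}" and X: "X \<in> matchings n" and Y: "Y \<in> matchings n"
    have "P (relabel k X) (relabel k Y) = (\<Sum>C\<in>matchings n. K2 (relabel k X) (relabel k C) * K1 (relabel k C) (relabel k Y))"
      unfolding P_def by (rule sum_matchings_relabel[OF k, symmetric])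
    also have "\<dots> = P X Y" unfolding P_def
      using K1 K2 k X Y unfolding invariant_kernel_def by (intro sum.cong) auto
    finally show "P (relabel k X) (relabel k Y) = P X Y" .
  qed
  have "(\<Sum>C\<in>matchings n. K1 A C * K2 C B) = (\<Sum>C\<in>matchings n. K2 B C * K1 C A)"
    using invariant_kernel_sym[OF K1 A] invariant_kernel_sym[OF K2 _ B] by (intro sum.cong) (auto simp: mult.commute)
  also have "\<dots> = P B A" unfolding P_def ..
  also have "\<dots> = P A B" by (rule invariant_kernel_sym[OF PK B A])
  finally show ?thesis unfolding P_def .
qed

definition invariant_operator :: "nat \<Rightarrow> ((nat set set \<Rightarrow> complex) \<Rightarrow> (nat set set \<Rightarrow> complex)) \<Rightarrow> bool" where
  "invariant_operator n F \<longleftrightarrow> (\<forall>x. in_CM n x \<longrightarrow> in_CM n (F x) \<and> F x = (\<lambda>A. \<Sum>B\<in>matchings n. x B * F (delta_M B) A)) \<and>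
     (\<forall>k x. k permutes {0..<2 * n} \<longrightarrow> in_CM n x \<longrightarrow> F (act_M k x) = act_M k (F x))"

lemma invariant_operator_kernel:
  assumes F: "invariant_operator n F"
  shows "invariant_kernel n (\<lambda>A B. F (delta_M B) A)"
  unfolding invariant_kernel_def
proof (intro allI impI ballI)
  fix k A B assume k: "k permutes {0..<2 * n}" and A: "A \<in> matchings n" and B: "B \<in> matchings n"
  have "F (delta_M (relabel k B)) = F (act_M k (delta_M B))" using act_M_delta_M[OF k] by simp
  also have "\<dots> = act_M k (F (delta_M B))" using F k delta_M_in_CM[OF B] unfolding invariant_operator_def by blast
  finally show "F (delta_M (relabel k B)) (relabel k A) = F (delta_M B) A" unfolding act_M_eq_relabel using relabel_inv_relabel[OF k] by simp
qed

lemma invariant_operators_commute: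
  assumes F1: "invariant_operator n F1" and F2: "invariant_operator n F2" and x: "in_CM n x"
  shows "F1 (F2 x) = F2 (F1 x)"
proof
  fix A
  let ?M = "matchings n"
  let ?K1 = "\<lambda>A B. F1 (delta_M B) A" and ?K2 = "\<lambda>A B. F2 (delta_M B) A"
  have r1: "F1 y = (\<lambda>A. \<Sum>B\<in>?M. y B * ?K1 A B)" "in_CM n (F1 y)" if "in_CM n y" for y
    using F1 that unfolding invariant_operator_def by blast+
  have r2: "F2 y = (\<lambda>A. \<Sum>B\<in>?M. y B * ?K2 A B)" "in_CM n (F2 y)" if "in_CM n y" for y
    using F2 that unfolding invariant_operator_def by blast+
  show "F1 (F2 x) A = F2 (F1 x) A"
  proof (cases "A \<in> ?M")
    case False
    then show ?thesis using r1(2)[OF r2(2)[OF x]] r2(2)[OF r1(2)[OF x]] unfolding in_CM_def by simp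
  next
    case True
    have e1: "F1 (F2 x) = (\<lambda>A. \<Sum>C\<in>?M. F2 x C * ?K1 A C)" by (rule r1(1)[OF r2(2)[OF x]])
    have e2: "F2 x = (\<lambda>C. \<Sum>B\<in>?M. x B * ?K2 C B)" by (rule r2(1)[OF x])
    have e3: "F2 (F1 x) = (\<lambda>A. \<Sum>C\<in>?M. F1 x C * ?K2 A C)" by (rule r2(1)[OF r1(2)[OF x]])
    have e4: "F1 x = (\<lambda>C. \<Sum>B\<in>?M. x B * ?K1 C B)" by (rule r1(1)[OF x])
    have "F1 (F2 x) A = (\<Sum>C\<in>?M. (\<Sum>B\<in>?M. x B * ?K2 C B) * ?K1 A C)"
      unfolding e1 by (subst e2) (rule refl)
    also have "\<dots> = (\<Sum>C\<in>?M. \<Sum>B\<in>?M. x B * (?K1 A C * ?K2 C B))"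
      by (rule sum.cong[OF refl]) (simp add: sum_distrib_left sum_distrib_right mult_ac)
    also have "\<dots> = (\<Sum>B\<in>?M. \<Sum>C\<in>?M. x B * (?K1 A C * ?K2 C B))" by (rule sum.swap)
    also have "\<dots> = (\<Sum>B\<in>?M. x B * (\<Sum>C\<in>?M. ?K1 A C * ?K2 C B))"
      by (simp add: sum_distrib_left)
    also have "\<dots> = (\<Sum>B\<in>?M. x B * (\<Sum>C\<in>?M. ?K2 A C * ?K1 C B))"
      using invariant_kernels_commute[OF invariant_operator_kernel[OF F1] invariant_operator_kernel[OF F2] True] by (intro sum.cong) auto
    also have "\<dots> = (\<Sum>B\<in>?M. \<Sum>C\<in>?M. x B * (?K2 A C * ?K1 C B))"
      by (simp add: sum_distrib_left)
    also have "\<dots> = (\<Sum>C\<in>?M. \<Sum>B\<in>?M. x B * (?K2 A C * ?K1 C B))" by (rule sum.swap)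
    also have "\<dots> = (\<Sum>C\<in>?M. (\<Sum>B\<in>?M. x B * ?K1 C B) * ?K2 A C)"
      by (rule sum.cong[OF refl]) (simp add: sum_distrib_left sum_distrib_right mult_ac)
    also have "\<dots> = F2 (F1 x) A"
      unfolding e3 by (subst e4) (rule refl)
    finally show ?thesis .
  qed
qed

subsection \<open>Multiplicity one\<close>

definition sym_group :: "nat \<Rightarrow> (nat \<Rightarrow> nat) set" where
  "sym_group n = {g. g permutes {0..<2 * n}}"

lemma finite_sym_group: "finite (sym_group n)"
  unfolding sym_group_def using finite_permutations[of "{0..<2 * n}"] by simp

text \<open>For an equivariant \<open>f\<close> with \<open>f e\<^sub>t = w\<close>, \<open>pullback n nu t w\<close> is (up to a positive factor)
  the adjoint of \<open>f\<close> with respect to the standard inner product on \<open>\<complex>[M\<^sub>2\<^sub>n]\<close>.\<close>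

definition pullback :: "nat \<Rightarrow> nat multiset \<Rightarrow> (nat \<Rightarrow> nat \<times> nat) \<Rightarrow> (nat set set \<Rightarrow> complex) \<Rightarrow>
    (nat set set \<Rightarrow> complex) \<Rightarrow> ((nat \<Rightarrow> nat) \<Rightarrow> complex)" where
  "pullback n nu t w x = (\<lambda>T. \<Sum>g\<in>sym_group n. inner_M n x (act_M g w) * act_tab g (polytabloid nu t) T)"

lemma in_CM_eq_0: "in_CM n x \<Longrightarrow> (\<forall>B\<in>matchings n. x B = 0) \<Longrightarrow> x = (\<lambda>B. 0)"
  unfolding in_CM_def by auto

lemma equivariant_into_CMD:
  assumes "equivariant_into_CM n nu f"
  shows "\<And>v. v \<in> specht nu \<Longrightarrow> in_CM n (f v)" "linear_on (specht nu) f"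
    "\<And>s v. s permutes {0..<2 * n} \<Longrightarrow> v \<in> specht nu \<Longrightarrow> f (act_tab s v) = act_M s (f v)"
  using assms unfolding equivariant_into_CM_def linear_on_def by auto

context
  fixes n :: nat and nu :: "nat multiset" and t0 :: "nat \<Rightarrow> nat \<times> nat"
  assumes nm: "sum_mset nu = 2 * n" and t0: "t0 \<in> tableaux nu"
begin

lemma act_tab_polytabloid_in_specht: "g \<in> sym_group n \<Longrightarrow> act_tab g (polytabloid nu t0) \<in> specht nu"
  unfolding sym_group_def using act_tab_specht[of g nu "polytabloid nu t0"] polytabloid_in_specht[OF t0] nm by simp

lemma pullback_in_specht: "pullback n nu t0 w x \<in> specht nu"
  unfolding pullback_def by (rule lincomb_closed_sum[OF lincomb_closed_specht finite_sym_group]) (use act_tab_polytabloid_in_specht in blast)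

lemma pullback_lincomb: "pullback n nu t0 w (\<lambda>B. a * x B + b * y B) = (\<lambda>T. a * pullback n nu t0 w x T + b * pullback n nu t0 w y T)"
  unfolding pullback_def inner_M_lincomb by (simp add: sum.distrib sum_distrib_left algebra_simps)

lemma pullback_scale: "pullback n nu t0 w (\<lambda>B. a * x B) = (\<lambda>T. a * pullback n nu t0 w x T)"
  unfolding pullback_def inner_M_def by (simp add: sum_distrib_left algebra_simps)

lemma pullback_act:
  assumes k: "k permutes {0..<2 * n}"
  shows "pullback n nu t0 w (act_M k x) = act_tab k (pullback n nu t0 w x)"
proof
  fix T
  let ?e = "polytabloid nu t0"
  have ik: "inv k permutes {0..<2 * n}" by (rule permutes_inv[OF k])
  have "pullback n nu t0 w (act_M k x) T = (\<Sum>g\<in>sym_group n. inner_M n x (act_M (inv k \<circ> g) w) * act_tab g ?e T)"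
    unfolding pullback_def
  proof (rule sum.cong[OF refl])
    fix g assume g: "g \<in> sym_group n"
    have gp: "g permutes {0..<2 * n}" using g unfolding sym_group_def by simp
    have "act_M g w = act_M k (act_M (inv k \<circ> g) w)"
      using act_M_comp[OF k permutes_compose[OF gp ik]] permutes_inv_o(1)[OF k] by (simp add: comp_assoc[symmetric])
    then show "inner_M n (act_M k x) (act_M g w) * act_tab g ?e T = inner_M n x (act_M (inv k \<circ> g) w) * act_tab g ?e T"
      using inner_M_act_M[OF k] by simp
  qed
  also have "\<dots> = (\<Sum>g\<in>sym_group n. inner_M n x (act_M g w) * act_tab (k \<circ> g) ?e T)"
  proof (rule sum.reindex_bij_witness[where i = "\<lambda>g. k \<circ> g" and j = "\<lambda>g. inv k \<circ> g"])
    fix g :: "nat \<Rightarrow> nat"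
    show "k \<circ> (inv k \<circ> g) = g" using permutes_inv_o(1)[OF k] by (simp add: comp_assoc[symmetric])
    show "inv k \<circ> (k \<circ> g) = g" using permutes_inv_o(2)[OF k] by (simp add: comp_assoc[symmetric])
  next
    fix g assume "g \<in> sym_group n"
    then show "inv k \<circ> g \<in> sym_group n" "k \<circ> g \<in> sym_group n" unfolding sym_group_def
      using permutes_compose[OF _ ik] permutes_compose[OF _ k] by auto
  qed (use permutes_inv_o(1)[OF k] in \<open>simp add: comp_assoc[symmetric]\<close>)
  also have "\<dots> = act_tab k (pullback n nu t0 w x) T"
    unfolding pullback_def act_tab_def by (simp add: comp_assoc)
  finally show "pullback n nu t0 w (act_M k x) T = act_tab k (pullback n nu t0 w x) T" .
qed

lemma pullback_delta_M:
  assumes x: "in_CM n x"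
  shows "pullback n nu t0 w x = (\<lambda>T. \<Sum>B\<in>matchings n. x B * pullback n nu t0 w (delta_M B) T)"
proof
  fix T
  let ?e = "polytabloid nu t0"
  have "pullback n nu t0 w x T = (\<Sum>g\<in>sym_group n. (\<Sum>B\<in>matchings n. x B * cnj (act_M g w B)) * act_tab g ?e T)"
    unfolding pullback_def inner_M_def ..
  also have "\<dots> = (\<Sum>B\<in>matchings n. x B * (\<Sum>g\<in>sym_group n. cnj (act_M g w B) * act_tab g ?e T))"
    by (simp add: sum_distrib_left sum_distrib_right sum.swap[of _ "sym_group n"] mult_ac)
  also have "\<dots> = (\<Sum>B\<in>matchings n. x B * pullback n nu t0 w (delta_M B) T)"
    unfolding pullback_def using inner_M_delta_M by (intro sum.cong) auto
  finally show "pullback n nu t0 w x T = (\<Sum>B\<in>matchings n. x B * pullback n nu t0 w (delta_M B) T)" .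
qed

lemma pullback_comp_scalar:
  assumes f: "equivariant_into_CM n nu f"
  shows "\<exists>a. \<forall>v\<in>specht nu. pullback n nu t0 w (f v) = (\<lambda>T. a * v T)"
proof (rule specht_endomorphism_scalar)
  note fp = equivariant_into_CMD[OF f]
  show "\<And>v. v \<in> specht nu \<Longrightarrow> pullback n nu t0 w (f v) \<in> specht nu" by (rule pullback_in_specht)
  show "linear_on (specht nu) (\<lambda>v. pullback n nu t0 w (f v))"
    unfolding linear_on_def using linear_onD[OF fp(2)] pullback_lincomb by simp
  show "\<And>s v. s permutes {0..<sum_mset nu} \<Longrightarrow> v \<in> specht nu \<Longrightarrow>
      pullback n nu t0 w (f (act_tab s v)) = act_tab s (pullback n nu t0 w (f v))"
    using fp(3) pullback_act nm by simp
qed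

lemma invariant_operator_comp_pullback:
  assumes f: "equivariant_into_CM n nu f"
  shows "invariant_operator n (\<lambda>x. f (pullback n nu t0 w x))"
  unfolding invariant_operator_def
proof (intro conjI allI impI)
  note fp = equivariant_into_CMD[OF f]
  fix x assume x: "in_CM n x"
  show "in_CM n (f (pullback n nu t0 w x))" by (rule fp(1)[OF pullback_in_specht])
  have "\<forall>B\<in>matchings n. pullback n nu t0 w (delta_M B) \<in> specht nu" using pullback_in_specht by blast
  then have "f (\<lambda>T. \<Sum>B\<in>matchings n. x B * pullback n nu t0 w (delta_M B) T) = (\<lambda>A. \<Sum>B\<in>matchings n. x B * f (pullback n nu t0 w (delta_M B)) A)"
    using linear_on_sum[OF lincomb_closed_specht fp(2) finite_matchings[of n], of "\<lambda>B. pullback n nu t0 w (delta_M B)" x] by blast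
  then show "f (pullback n nu t0 w x) = (\<lambda>A. \<Sum>B\<in>matchings n. x B * f (pullback n nu t0 w (delta_M B)) A)"
    using pullback_delta_M[OF x] by simp
next
  note fp = equivariant_into_CMD[OF f]
  fix k x assume k: "k permutes {0..<2 * n}" and x: "in_CM n x"
  show "f (pullback n nu t0 w (act_M k x)) = act_M k (f (pullback n nu t0 w x))"
    using pullback_act[OF k] fp(3)[OF k pullback_in_specht] by simp
qed

lemma equivariant_pullback:
  assumes f: "equivariant_into_CM n nu f"
  shows "f (pullback n nu t0 (f (polytabloid nu t0)) x) =
    (\<lambda>A. \<Sum>g\<in>sym_group n. inner_M n x (act_M g (f (polytabloid nu t0))) * act_M g (f (polytabloid nu t0)) A)"
proof -
  note fp = equivariant_into_CMD[OF f]
  have e: "polytabloid nu t0 \<in> specht nu" by (rule polytabloid_in_specht[OF t0])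
  have acts: "\<forall>g\<in>sym_group n. act_tab g (polytabloid nu t0) \<in> specht nu"
    using act_tab_polytabloid_in_specht by blast
  have "f (pullback n nu t0 (f (polytabloid nu t0)) x) = (\<lambda>A. \<Sum>g\<in>sym_group n.
      inner_M n x (act_M g (f (polytabloid nu t0))) * f (act_tab g (polytabloid nu t0)) A)"
    unfolding pullback_def
    using linear_on_sum[OF lincomb_closed_specht fp(2) finite_sym_group acts,
        of "\<lambda>g. inner_M n x (act_M g (f (polytabloid nu t0)))"] by blast
  then show ?thesis using fp(3)[OF _ e] unfolding sym_group_def by simp
qed

text \<open>\<open>\<langle>f (pullback w w), w\<rangle> = \<Sum>\<^sub>g |\<langle>w, g w\<rangle>|\<^sup>2\<close>, and the term for \<open>g = id\<close> is \<open>|\<langle>w, w\<rangle>|\<^sup>2\<close>.\<close>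

lemma equivariant_pullback_self_nonzero:
  assumes f: "equivariant_into_CM n nu f" and nz: "f (polytabloid nu t0) \<noteq> (\<lambda>B. 0)"
  shows "f (pullback n nu t0 (f (polytabloid nu t0)) (f (polytabloid nu t0))) \<noteq> (\<lambda>B. 0)"
proof
  define w where "w = f (polytabloid nu t0)"
  have wCM: "in_CM n w" unfolding w_def by (rule equivariant_into_CMD(1)[OF f polytabloid_in_specht[OF t0]])
  let ?a = "\<lambda>g. inner_M n w (act_M g w)"
  assume "f (pullback n nu t0 (f (polytabloid nu t0)) (f (polytabloid nu t0))) = (\<lambda>B. 0)"
  then have "inner_M n (\<lambda>A. \<Sum>g\<in>sym_group n. ?a g * act_M g w A) w = 0"
    using equivariant_pullback[OF f] unfolding w_def by (simp add: inner_M_def)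
  then have "(\<Sum>g\<in>sym_group n. complex_of_real ((cmod (?a g))\<^sup>2)) = 0"
    unfolding inner_M_sum[OF finite_sym_group]
    using inner_M_cnj[of n "act_M _ w" w] complex_norm_square by (simp add: mult.commute)
  then have "complex_of_real (\<Sum>g\<in>sym_group n. (cmod (?a g))\<^sup>2) = 0" by (simp only: of_real_sum)
  then have "(\<Sum>g\<in>sym_group n. (cmod (?a g))\<^sup>2) = 0" by (simp only: of_real_eq_0_iff)
  then have "\<forall>g\<in>sym_group n. (cmod (?a g))\<^sup>2 = 0"
    using sum_nonneg_eq_0_iff[OF finite_sym_group[of n], of "\<lambda>g. (cmod (?a g))\<^sup>2"] by simp
  moreover have "id \<in> sym_group n" unfolding sym_group_def by (simp add: permutes_id)
  ultimately have "inner_M n w w = 0" using relabel_id by (force simp: act_M_eq_relabel)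
  then have "(\<Sum>B\<in>matchings n. (cmod (w B))\<^sup>2) = 0" unfolding inner_M_self by (simp only: of_real_eq_0_iff)
  then have "\<forall>B\<in>matchings n. w B = 0"
    using sum_nonneg_eq_0_iff[OF finite_matchings[of n], of "\<lambda>B. (cmod (w B))\<^sup>2"] by simp
  then show False using in_CM_eq_0[OF wCM] nz unfolding w_def by simp
qed

text \<open>Multiplicity one: with \<open>h = pullback (f\<^sub>1 e\<^sub>t)\<close>, both \<open>h \<circ> f\<^sub>i\<close> are scalars on the Specht
  module, and the invariant operators \<open>f\<^sub>1 \<circ> h\<close> and \<open>f\<^sub>2 \<circ> h\<close> commute.\<close>

lemma equivariant_into_CM_proportional_on_polytabloid:
  assumes f1: "equivariant_into_CM n nu f1" and f2: "equivariant_into_CM n nu f2"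
    and nz: "f1 (polytabloid nu t0) \<noteq> (\<lambda>B. 0)"
  shows "\<exists>c. f2 (polytabloid nu t0) = (\<lambda>B. c * f1 (polytabloid nu t0) B)"
proof -
  let ?e = "polytabloid nu t0"
  have e: "?e \<in> specht nu" by (rule polytabloid_in_specht[OF t0])
  define w where "w = f1 ?e"
  define h where "h = pullback n nu t0 w"
  note p1 = equivariant_into_CMD[OF f1] and p2 = equivariant_into_CMD[OF f2]
  obtain a1 where a1: "\<forall>v\<in>specht nu. h (f1 v) = (\<lambda>T. a1 * v T)"
    using pullback_comp_scalar[OF f1] unfolding h_def by blast
  obtain a2 where a2: "\<forall>v\<in>specht nu. h (f2 v) = (\<lambda>T. a2 * v T)"
    using pullback_comp_scalar[OF f2] unfolding h_def by blast
  have comm: "f1 (h (f2 (h w))) = f2 (h (f1 (h w)))"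
    using invariant_operators_commute[OF invariant_operator_comp_pullback[OF f1]
        invariant_operator_comp_pullback[OF f2] p1(1)[OF e]] unfolding h_def w_def .
  have hw: "h w = (\<lambda>T. a1 * ?e T)" using a1 e unfolding w_def by blast
  have f1hw: "f1 (h w) = (\<lambda>B. a1 * w B)" unfolding hw unfolding w_def by (rule linear_on_scale[OF p1(2) e])
  have sm: "h (\<lambda>B. c * x B) = (\<lambda>T. c * h x T)" for c x unfolding h_def by (rule pullback_scale)
  have "f1 (h (f2 (h w))) = f1 (h (\<lambda>B. a1 * f2 ?e B))" unfolding hw using linear_on_scale[OF p2(2) e] by simp
  also have "\<dots> = f1 (\<lambda>T. a1 * (a2 * ?e T))" unfolding sm using a2 e by simp
  also have "\<dots> = (\<lambda>B. (a1 * a2) * w B)"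
    unfolding w_def using linear_on_scale[OF p1(2) e, of "a1 * a2"] by (simp add: mult.assoc)
  finally have "f1 (h (f2 (h w))) = (\<lambda>B. (a1 * a2) * w B)" .
  moreover have "f2 (h (f1 (h w))) = f2 (\<lambda>T. a1 * (a1 * ?e T))" unfolding f1hw sm using a1 e unfolding w_def by simp
  then have "f2 (h (f1 (h w))) = (\<lambda>B. (a1 * a1) * f2 ?e B)"
    using linear_on_scale[OF p2(2) e, of "a1 * a1"] by (simp add: mult.assoc)
  moreover have "a1 \<noteq> 0"
    using f1hw equivariant_pullback_self_nonzero[OF f1 nz] unfolding h_def w_def by auto
  ultimately have "f2 ?e = (\<lambda>B. (a2 / a1) * w B)" using comm by (auto simp: fun_eq_iff field_simps)
  then show ?thesis unfolding w_def by blast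
qed

lemma equivariant_into_CM_proportional:
  assumes f1: "equivariant_into_CM n nu f1" and f2: "equivariant_into_CM n nu f2"
    and c: "f2 (polytabloid nu t0) = (\<lambda>B. c * f1 (polytabloid nu t0) B)"
    and v: "v \<in> specht nu"
  shows "f2 v = (\<lambda>B. c * f1 v B)"
  using equivariant_into_CMD(3)[OF f1] equivariant_into_CMD(3)[OF f2] nm
  by (intro specht_maps_proportional[OF t0 equivariant_into_CMD(2)[OF f2] equivariant_into_CMD(2)[OF f1]
        _ _ _ c v, of act_M]) (simp_all add: act_M_def)

end

subsection \<open>A nonzero equivariant map into the matchings\<close>

lemma rows_double: "rows (double lam) = map (\<lambda>x. 2 * x) (rows lam)"
proof -
  let ?xs = "sorted_list_of_multiset lam"
  have lam: "lam = mset ?xs" by simp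
  have delta_M: "double lam = mset (map (\<lambda>x. 2 * x) ?xs)" unfolding double_def by (subst lam) simp
  have "sorted_list_of_multiset (double lam) = sort (map (\<lambda>x. 2 * x) ?xs)"
    unfolding delta_M by (rule sorted_list_of_multiset_mset)
  also have "\<dots> = map (\<lambda>x. 2 * x) ?xs"
  proof (rule sorted_sort_id)
    have "sorted ?xs" by simp
    then show "sorted (map (\<lambda>x. 2 * x) ?xs)" unfolding sorted_map
      by (rule sorted_wrt_mono_rel[rotated]) simp
  qed
  finally show ?thesis unfolding rows_def by (simp add: rev_map)
qed

lemma row_len_double: "row_len (double lam) i = 2 * row_len lam i"
  unfolding row_len_def rows_double by simp

lemma sum_double: "sum_mset (double lam) = 2 * sum_mset lam"
  unfolding double_def by (induction lam) auto

definition pair_map :: "nat \<Rightarrow> nat multiset \<Rightarrow> (nat \<Rightarrow> nat \<times> nat) \<Rightarrow> ((nat \<Rightarrow> nat) \<Rightarrow> complex) \<Rightarrow> (nat set set \<Rightarrow> complex)" where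
  "pair_map n nu t v = (\<lambda>B. if B \<in> matchings n then
     (\<Sum>g\<in>{g \<in> sym_group n. relabel g (I_match n) = B}. v (tabloid_of nu t id \<circ> inv g)) else 0)"

lemma sum_relabel_I_act_tab:
  assumes k: "k permutes {0..<2 * n}"
  shows "(\<Sum>g\<in>{g \<in> sym_group n. relabel g (I_match n) = B}. act_tab k v (R \<circ> inv g)) =
    (\<Sum>g\<in>{g \<in> sym_group n. relabel g (I_match n) = relabel (inv k) B}. v (R \<circ> inv g))"
proof (rule sum.reindex_bij_witness[where j = "\<lambda>g. inv k \<circ> g" and i = "\<lambda>g. k \<circ> g"])
  have ik: "inv k permutes {0..<2 * n}" by (rule permutes_inv[OF k])
  fix g :: "nat \<Rightarrow> nat"
  show "k \<circ> (inv k \<circ> g) = g" "inv k \<circ> (k \<circ> g) = g"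
    using permutes_inv_o[OF k] by (simp_all add: comp_assoc[symmetric])
  {
    assume g: "g \<in> {g \<in> sym_group n. relabel g (I_match n) = B}"
    have gp: "g permutes {0..<2 * n}" using g unfolding sym_group_def by simp
    show "inv k \<circ> g \<in> {g \<in> sym_group n. relabel g (I_match n) = relabel (inv k) B}"
      using g permutes_compose[OF gp ik] unfolding sym_group_def by (simp add: relabel_relabel[symmetric])
    have "inv (inv k \<circ> g) = inv g \<circ> k"
      using o_inv_distrib[of "inv k" g] permutes_bij[OF gp] permutes_bij[OF ik] permutes_inv_inv[OF k] by simp
    then show "v (R \<circ> inv (inv k \<circ> g)) = act_tab k v (R \<circ> inv g)"
      unfolding act_tab_def by (simp add: comp_assoc)
  }
  assume g: "g \<in> {g \<in> sym_group n. relabel g (I_match n) = relabel (inv k) B}"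
  have gp: "g permutes {0..<2 * n}" using g unfolding sym_group_def by simp
  show "k \<circ> g \<in> {g \<in> sym_group n. relabel g (I_match n) = B}"
    using g permutes_compose[OF gp k] relabel_relabel_inv[OF k] unfolding sym_group_def
    by (simp add: relabel_relabel[symmetric])
qed

lemma pair_map_equivariant:
  assumes nm: "sum_mset nu = 2 * n"
  shows "equivariant_into_CM n nu (pair_map n nu t)"
  unfolding equivariant_into_CM_def
proof (intro conjI ballI allI impI)
  fix u assume "u \<in> specht nu"
  show "in_CM n (pair_map n nu t u)" unfolding in_CM_def pair_map_def by simp
next
  fix u v a b
  show "pair_map n nu t (\<lambda>T. a * u T + b * v T) = (\<lambda>B. a * pair_map n nu t u B + b * pair_map n nu t v B)"
    unfolding pair_map_def by (auto simp: sum.distrib sum_distrib_left)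
next
  fix k v assume k: "k permutes {0..<2 * n}"
  have "relabel (inv k) B \<in> matchings n \<longleftrightarrow> B \<in> matchings n" for B
    by (rule relabel_in_matchings_iff[OF permutes_inv[OF k]])
  then show "pair_map n nu t (act_tab k v) = act_M k (pair_map n nu t v)"
    unfolding pair_map_def act_M_eq_relabel using sum_relabel_I_act_tab[OF k] by (auto simp: fun_eq_iff)
qed

text \<open>Such a permutation is \<open>r \<circ> (q \<circ> r \<circ> q)\<close>, where \<open>r\<close> is its restriction to \<open>{0..<n}\<close> and
  \<open>q\<close> swaps the two halves; hence it is even.\<close>

lemma sign_doubled_perm:
  fixes n :: nat
  assumes pp: "p permutes {0..<2 * n}" and pn: "\<And>i. i < n \<Longrightarrow> p i < n \<and> p (n + i) = n + p i"
  shows "sign p = 1"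
proof -
  define r where "r x = (if x < n then p x else x)" for x
  define q where "q x = (if x < n then x + n else if x < 2 * n then x - n else x)" for x
  have "inj_on r {0..<n}" using permutes_inj[OF pp] unfolding r_def inj_on_def by (auto simp: inj_eq)
  then have rp: "r permutes {0..<n}" by (rule permutes_lessI) (use pn in \<open>auto simp: r_def\<close>)
  have "bij_betw q {0..<2 * n} {0..<2 * n}"
    by (rule bij_betw_byWitness[where f' = q]) (auto simp: q_def)
  then have qp: "q permutes {0..<2 * n}" by (rule bij_imp_permutes) (simp add: q_def)
  have pr: "permutation r" and pq: "permutation q"
    using permutes_less_permutation[OF rp] permutes_less_permutation[OF qp] .
  have decomp: "p = r \<circ> (q \<circ> r \<circ> q)"
  proof
    fix x show "p x = (r \<circ> (q \<circ> r \<circ> q)) x"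
    proof (cases "n \<le> x \<and> x < 2 * n")
      case True
      then have "x - n < n" "p x = n + p (x - n)" using pn[of "x - n"] by auto
      then show ?thesis using True pn unfolding r_def q_def by simp
    next
      case False
      then show ?thesis using permutes_not_in[OF pp, of x] pn unfolding r_def q_def by auto
    qed
  qed
  have "sign (q \<circ> r \<circ> q) = sign r"
    using sign_compose[OF permutation_compose[OF pq pr] pq] sign_compose[OF pq pr]
    by (simp add: mult.commute mult.left_commute)
  then have "sign p = sign r * sign r"
    using decomp sign_compose[OF pr permutation_compose[OF permutation_compose[OF pq pr] pq]] by simp
  then show ?thesis by simp
qed

context
  fixes n :: nat and lam :: "nat multiset" and b :: "nat \<Rightarrow> nat \<times> nat"
  assumes lamn: "sum_mset lam = n" and b: "bij_betw b {0..<n} (cells lam)"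
begin

definition paired_tableau :: "nat \<Rightarrow> nat \<times> nat" where
  "paired_tableau x = (if x < n then (fst (b x), 2 * snd (b x)) else (fst (b (x - n)), 2 * snd (b (x - n)) + 1))"

lemma cell_enum_col_less: "x < n \<Longrightarrow> snd (b x) < row_len lam (fst (b x))"
proof -
  assume "x < n"
  then have "b x \<in> cells lam" using b unfolding bij_betw_def by auto
  then show ?thesis unfolding mem_cells_iff' .
qed

lemma inj_on_paired_tableau: "inj_on paired_tableau {0..<2 * n}"
proof (rule inj_onI)
  fix x y assume x: "x \<in> {0..<2 * n}" and y: "y \<in> {0..<2 * n}" and e: "paired_tableau x = paired_tableau y"
  have binj: "b u = b v \<Longrightarrow> u < n \<Longrightarrow> v < n \<Longrightarrow> u = v" for u v
    using b unfolding bij_betw_def inj_on_def by auto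
  have ev: "u < n \<Longrightarrow> even (snd (paired_tableau u))" and od: "\<not> u < n \<Longrightarrow> odd (snd (paired_tableau u))" for u
    unfolding paired_tableau_def by simp_all
  show "x = y"
  proof (cases "x < n"; cases "y < n")
    assume xy: "x < n" "y < n"
    then have "b x = b y" using e unfolding paired_tableau_def by (simp add: prod_eq_iff)
    then show ?thesis using binj xy by blast
  next
    assume "x < n" "\<not> y < n" then show ?thesis using e ev[of x] od[of y] by simp
  next
    assume "\<not> x < n" "y < n" then show ?thesis using e ev[of y] od[of x] by simp
  next
    assume xy: "\<not> x < n" "\<not> y < n"
    then have "b (x - n) = b (y - n)" using e unfolding paired_tableau_def by (simp add: prod_eq_iff)
    moreover have "x - n < n" "y - n < n" using x y xy by auto
    ultimately have "x - n = y - n" using binj by blast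
    then show ?thesis using xy by simp
  qed
qed

lemma paired_tableau_image: "paired_tableau ` {0..<2 * n} = cells (double lam)"
proof
  show "paired_tableau ` {0..<2 * n} \<subseteq> cells (double lam)"
  proof
    fix c assume "c \<in> paired_tableau ` {0..<2 * n}"
    then obtain x where x: "x < 2 * n" "c = paired_tableau x" by auto
    show "c \<in> cells (double lam)"
    proof (cases "x < n")
      case True then show ?thesis using x cell_enum_col_less[OF True] unfolding paired_tableau_def mem_cells_iff' row_len_double by simp
    next
      case False then have "x - n < n" using x by simp
      then have "snd (b (x - n)) < row_len lam (fst (b (x - n)))" by (rule cell_enum_col_less)
      then show ?thesis using x False unfolding paired_tableau_def mem_cells_iff' row_len_double by simp
    qed
  qed
  show "cells (double lam) \<subseteq> paired_tableau ` {0..<2 * n}"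
  proof
    fix c assume c: "c \<in> cells (double lam)"
    obtain i k where ik: "c = (i, k)" by (cases c)
    have k: "k < 2 * row_len lam i" using c ik unfolding mem_cells_iff' row_len_double by simp
    have "(i, k div 2) \<in> cells lam" unfolding mem_cells_iff' using k by simp
    then have "(i, k div 2) \<in> b ` {0..<n}" using b unfolding bij_betw_def by simp
    then obtain x where x: "x < n" "b x = (i, k div 2)" by (metis atLeastLessThan_iff imageE)
    show "c \<in> paired_tableau ` {0..<2 * n}"
    proof (cases "even k")
      case True
      then have "paired_tableau x = c" using x ik unfolding paired_tableau_def by simp
      then show ?thesis using x by force
    next
      case False
      then have "paired_tableau (x + n) = c" using x ik unfolding paired_tableau_def by simp
      then show ?thesis using x by force
    qed
  qed
qed

lemma paired_tableau_in_tableaux: "paired_tableau \<in> tableaux (double lam)"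
  using inj_on_paired_tableau paired_tableau_image sum_double[of lam] lamn
  unfolding tableaux_def by (simp add: bij_betw_def)

lemma paired_tableau_even: "x < n \<Longrightarrow> even (snd (paired_tableau x))"
  unfolding paired_tableau_def by simp

lemma paired_tableau_odd: "n \<le> x \<Longrightarrow> odd (snd (paired_tableau x))"
  unfolding paired_tableau_def by simp

lemma paired_tableau_partner:
  "i < n \<Longrightarrow> paired_tableau (n + i) = (fst (paired_tableau i), snd (paired_tableau i) + 1)"
  unfolding paired_tableau_def by simp

text \<open>\<open>paired_tableau\<close> puts the two ends of each edge of \<open>I\<close> side by side in one row, in the
  columns \<open>2j\<close> and \<open>2j + 1\<close>. A column permutation whose tabloid is that of a relabelling fixing
  \<open>I\<close> must therefore move both columns of such a pair in the same way.\<close>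

lemma sign_column_perm_fixing_I:
  assumes p: "p \<in> column_group (double lam) paired_tableau"
    and sI: "relabel \<sigma> (I_match n) = I_match n"
    and eq: "\<And>x. x < 2 * n \<Longrightarrow> fst (paired_tableau (\<sigma> x)) = fst (paired_tableau (p x))"
  shows "sign p = 1"
proof -
  have m: "sum_mset (double lam) = 2 * n" using sum_double lamn by simp
  have pp: "p permutes {0..<2 * n}" using column_group_permutes[OF p] m by simp
  have col: "snd (paired_tableau (p x)) = snd (paired_tableau x)" if "x < 2 * n" for x using column_group_same_column[OF p] that m by simp
  have tinj: "x = y" if "x < 2 * n" "y < 2 * n" "paired_tableau x = paired_tableau y" for x y
    using tableau_inj[OF paired_tableau_in_tableaux] that m by simp
  have rowpair: "fst (paired_tableau (\<sigma> i)) = fst (paired_tableau (\<sigma> (n + i)))" if i: "i < n" for i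
  proof -
    have "{i, n + i} \<in> I_match n" unfolding I_match_def using i by blast
    then have "\<sigma> ` {i, n + i} \<in> relabel \<sigma> (I_match n)" unfolding relabel_def by blast
    then have "{\<sigma> i, \<sigma> (n + i)} \<in> I_match n" using sI by simp
    then obtain j where j: "j < n" "{\<sigma> i, \<sigma> (n + i)} = {j, n + j}" unfolding I_match_def by blast
    have fj: "fst (paired_tableau (n + j)) = fst (paired_tableau j)" using paired_tableau_partner[OF j(1)] by simp
    from j(2) have "(\<sigma> i = j \<and> \<sigma> (n + i) = n + j) \<or> (\<sigma> i = n + j \<and> \<sigma> (n + i) = j)"
      by (auto simp: doubleton_eq_iff)
    then show ?thesis using fj by auto
  qed
  have pn: "p i < n \<and> p (n + i) = n + p i" if i: "i < n" for i
  proof -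
    have "even (snd (paired_tableau (p i)))" using col[of i] i paired_tableau_even[OF i] by simp
    then have pi: "p i < n" using paired_tableau_odd[of "p i"] by (cases "p i < n") auto
    have ni: "n + i < 2 * n" using i by simp
    have "paired_tableau (n + p i) = (fst (paired_tableau (p i)), snd (paired_tableau (p i)) + 1)" by (rule paired_tableau_partner[OF pi])
    also have "fst (paired_tableau (p i)) = fst (paired_tableau (p (n + i)))" using eq[of i] eq[OF ni] rowpair[OF i] i by simp
    also have "snd (paired_tableau (p i)) + 1 = snd (paired_tableau (p (n + i)))" using col[of i] col[OF ni] i paired_tableau_partner[OF i] by simp
    finally have "paired_tableau (n + p i) = paired_tableau (p (n + i))" by simp
    then have "n + p i = p (n + i)" using tinj[of "n + p i" "p (n + i)"] pi permutes_less[OF pp ni] by simp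
    then show ?thesis using pi by simp
  qed
  show ?thesis using sign_doubled_perm[OF pp] pn by blast
qed

lemma polytabloid_paired_tableau_relabel:
  assumes h: "h permutes {0..<2 * n}" and hI: "relabel h (I_match n) = I_match n"
  shows "polytabloid (double lam) paired_tableau (tabloid_of (double lam) paired_tableau id \<circ> inv h) =
    of_nat (card {p \<in> column_group (double lam) paired_tableau.
      tabloid_of (double lam) paired_tableau id \<circ> inv h = tabloid_of (double lam) paired_tableau p})"
proof -
  let ?nu = "double lam" and ?R = "tabloid_of (double lam) paired_tableau id"
  have m: "sum_mset ?nu = 2 * n" using sum_double lamn by simp
  have ih: "inv h permutes {0..<2 * n}" by (rule permutes_inv[OF h])
  have sI: "relabel (inv h) (I_match n) = I_match n" using hI relabel_inv_relabel[OF h, of "I_match n"] by simp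
  have "sign p = 1" if p: "p \<in> column_group ?nu paired_tableau" and e: "?R \<circ> inv h = tabloid_of ?nu paired_tableau p" for p
  proof (rule sign_column_perm_fixing_I[OF p sI])
    fix x assume x: "x < 2 * n"
    have "(?R \<circ> inv h) x = tabloid_of ?nu paired_tableau p x" using e by simp
    then show "fst (paired_tableau (inv h x)) = fst (paired_tableau (p x))"
      unfolding tabloid_of_def using x permutes_less[OF ih x] m by simp
  qed
  then have "polytabloid ?nu paired_tableau (?R \<circ> inv h) =
      (\<Sum>p\<in>column_group ?nu paired_tableau. if ?R \<circ> inv h = tabloid_of ?nu paired_tableau p then 1 else 0)"
    unfolding polytabloid_def by (intro sum.cong) auto
  then show ?thesis by (simp add: sum.If_cases[OF finite_column_group] Int_def)
qed

lemma pair_map_polytabloid_nonzero: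
  "pair_map n (double lam) paired_tableau (polytabloid (double lam) paired_tableau) (I_match n) \<noteq> 0"
proof -
  let ?nu = "double lam" and ?R = "tabloid_of (double lam) paired_tableau id"
  let ?S = "{g \<in> sym_group n. relabel g (I_match n) = I_match n}"
  define cnt where "cnt h = card {p \<in> column_group ?nu paired_tableau. ?R \<circ> inv h = tabloid_of ?nu paired_tableau p}" for h
  have "pair_map n ?nu paired_tableau (polytabloid ?nu paired_tableau) (I_match n) =
      (\<Sum>h\<in>?S. polytabloid ?nu paired_tableau (?R \<circ> inv h))"
    unfolding pair_map_def using I_match_in_matchings by simp
  also have "\<dots> = of_nat (\<Sum>h\<in>?S. cnt h)"
    using polytabloid_paired_tableau_relabel unfolding cnt_def sym_group_def by simp
  finally have eq: "pair_map n ?nu paired_tableau (polytabloid ?nu paired_tableau) (I_match n) = of_nat (\<Sum>h\<in>?S. cnt h)" .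
  have "id \<in> {p \<in> column_group ?nu paired_tableau. ?R \<circ> inv id = tabloid_of ?nu paired_tableau p}"
    using column_group_id by simp
  then have "0 < cnt id" unfolding cnt_def using finite_column_group[of ?nu paired_tableau] by (auto simp: card_gt_0_iff)
  moreover have "id \<in> ?S" unfolding sym_group_def using relabel_id by (simp add: permutes_id)
  ultimately have "0 < (\<Sum>h\<in>?S. cnt h)" using finite_sym_group[of n] by (auto intro: sum_pos2)
  then show ?thesis unfolding eq of_nat_eq_0_iff by simp
qed

end

lemma ex_equivariant_into_CM_nonzero_at_I:
  assumes lamn: "sum_mset lam = n"
  obtains t f where "t \<in> tableaux (double lam)" "equivariant_into_CM n (double lam) f"
    "f (polytabloid (double lam) t) (I_match n) \<noteq> 0"
proof -
  obtain b where b: "bij_betw b {0..<n} (cells lam)"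
    using ex_bij_betw_nat_finite[OF finite_cells, of lam] card_cells[of lam] lamn by auto
  have "sum_mset (double lam) = 2 * n" using sum_double lamn by simp
  then show ?thesis
    using that paired_tableau_in_tableaux[OF lamn b] pair_map_equivariant pair_map_polytabloid_nonzero[OF lamn b]
    by blast
qed

lemma the_scalar_eq:
  fixes c :: complex
  assumes F: "\<forall>v\<in>S. F v = (\<lambda>x. c * v x)" and v0: "w \<in> S" and x0: "w z \<noteq> 0"
  shows "(THE c. \<forall>v\<in>S. F v = (\<lambda>x. c * v x)) = c"
proof (rule the_equality)
  show "\<forall>v\<in>S. F v = (\<lambda>x. c * v x)" by (rule F)
  fix c' assume c': "\<forall>v\<in>S. F v = (\<lambda>x. c' * v x)"
  have "c' * w z = c * w z" using F c' v0 by metis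
  then show "c' = c" using x0 by simp
qed

lemma class_sum_tab_scalar:
  assumes m: "sum_mset nu = m"
  shows "\<exists>c. \<forall>v\<in>specht nu. class_sum_tab m mu v = (\<lambda>T. c * v T)"
proof (rule specht_endomorphism_scalar)
  let ?P = "perms_of_type m mu"
  have cs: "class_sum_tab m mu v = (\<lambda>T. \<Sum>s\<in>?P. 1 * act_tab s v T)" for v
    unfolding class_sum_tab_def by simp
  show "\<And>v. v \<in> specht nu \<Longrightarrow> class_sum_tab m mu v \<in> specht nu"
    unfolding cs by (rule lincomb_closed_sum[OF lincomb_closed_specht finite_perms_of_type]) (use act_tab_specht perms_of_type_permutes m in blast)
  show "linear_on (specht nu) (class_sum_tab m mu)"
    unfolding linear_on_def class_sum_tab_def act_tab_def by (simp add: sum.distrib sum_distrib_left)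
  fix k v assume k: "k permutes {0..<sum_mset nu}" and v: "v \<in> specht nu"
  have k': "k permutes {0..<m}" using k m by simp
  show "class_sum_tab m mu (act_tab k v) = act_tab k (class_sum_tab m mu v)"
  proof
    fix T
    have "act_tab k (class_sum_tab m mu v) T = (\<Sum>s\<in>?P. v (T \<circ> k \<circ> s))"
      unfolding class_sum_tab_def act_tab_def by (simp add: comp_assoc)
    also have "\<dots> = (\<Sum>s\<in>?P. v (T \<circ> (k \<circ> s \<circ> inv k) \<circ> k))"
    proof (rule sum.cong[OF refl])
      fix s
      have "k \<circ> s \<circ> inv k \<circ> k = k \<circ> s" using permutes_inv_o(2)[OF k'] by (simp add: comp_assoc)
      then show "v (T \<circ> k \<circ> s) = v (T \<circ> (k \<circ> s \<circ> inv k) \<circ> k)" by (simp add: comp_assoc)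
    qed
    also have "\<dots> = (\<Sum>s\<in>?P. v (T \<circ> s \<circ> k))"
      using sum.reindex_bij_betw[OF bij_betw_conj_perms_of_type[OF k'], of "\<lambda>s. v (T \<circ> s \<circ> k)"] by simp
    also have "\<dots> = class_sum_tab m mu (act_tab k v) T"
      unfolding class_sum_tab_def act_tab_def by (simp add: comp_assoc)
    finally show "class_sum_tab m mu (act_tab k v) T = act_tab k (class_sum_tab m mu v) T" by simp
  qed
qed

lemma N_op_act_M:
  assumes k: "k permutes {0..<2 * n}"
  shows "N_op n tau (act_M k g) = act_M k (N_op n tau g)"
proof
  fix B
  have ik: "inv k permutes {0..<2 * n}" by (rule permutes_inv[OF k])
  show "N_op n tau (act_M k g) B = act_M k (N_op n tau g) B"
  proof (cases "B \<in> matchings n")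
    case False
    then have "relabel (inv k) B \<notin> matchings n" using relabel_in_matchings_iff[OF ik] by simp
    then show ?thesis using False unfolding N_op_def act_M_eq_relabel by simp
  next
    case True
    then have Bk: "relabel (inv k) B \<in> matchings n" using relabel_in_matchings_iff[OF ik] by simp
    have "(\<Sum>A\<in>{A \<in> matchings n. dmatch n A B = double tau}. g (relabel (inv k) A)) =
          (\<Sum>A\<in>{A \<in> matchings n. dmatch n A (relabel (inv k) B) = double tau}. g A)"
    proof (rule sum.reindex_bij_witness[where j = "relabel (inv k)" and i = "relabel k"])
      fix A
      show "relabel k (relabel (inv k) A) = A" by (rule relabel_relabel_inv[OF k])
      show "relabel (inv k) (relabel k A) = A" by (rule relabel_inv_relabel[OF k])
    next
      fix A assume A: "A \<in> {A \<in> matchings n. dmatch n A B = double tau}"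
      then show "relabel (inv k) A \<in> {A \<in> matchings n. dmatch n A (relabel (inv k) B) = double tau}"
        using relabel_in_matchings[OF _ ik] dmatch_relabel[OF _ True ik, of A] by simp
    next
      fix A assume A: "A \<in> {A \<in> matchings n. dmatch n A (relabel (inv k) B) = double tau}"
      have "dmatch n (relabel k A) (relabel k (relabel (inv k) B)) = dmatch n A (relabel (inv k) B)"
        using A dmatch_relabel[OF _ Bk k, of A] by simp
      then show "relabel k A \<in> {A \<in> matchings n. dmatch n A B = double tau}"
        using A relabel_in_matchings[OF _ k] relabel_relabel_inv[OF k] by simp
    qed simp
    then show ?thesis using True Bk unfolding N_op_def act_M_eq_relabel by simp
  qed
qed

lemma N_op_lincomb: "N_op n tau (\<lambda>B. a * g B + b * h B) = (\<lambda>B. a * N_op n tau g B + b * N_op n tau h B)"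
  unfolding N_op_def by (auto simp: sum.distrib sum_distrib_left)

lemma N_op_scale: "N_op n tau (\<lambda>B. a * g B) = (\<lambda>B. a * N_op n tau g B)"
  unfolding N_op_def by (auto simp: sum_distrib_left)

lemma equivariant_into_CM_N_op:
  assumes f: "equivariant_into_CM n nu f"
  shows "equivariant_into_CM n nu (\<lambda>v. N_op n tau (f v))"
  unfolding equivariant_into_CM_def
proof (intro conjI ballI allI impI)
  fix u assume "u \<in> specht nu"
  show "in_CM n (N_op n tau (f u))" unfolding in_CM_def N_op_def by simp
next
  fix u v a b assume u: "u \<in> specht nu" and v: "v \<in> specht nu"
  have "f (\<lambda>T. a * u T + b * v T) = (\<lambda>B. a * f u B + b * f v B)"
    using f u v unfolding equivariant_into_CM_def by blast
  then show "N_op n tau (f (\<lambda>T. a * u T + b * v T)) = (\<lambda>B. a * N_op n tau (f u) B + b * N_op n tau (f v) B)"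
    by (simp add: N_op_lincomb)
next
  fix s u assume s: "s permutes {0..<2 * n}" and u: "u \<in> specht nu"
  have "f (act_tab s u) = act_M s (f u)" using f s u unfolding equivariant_into_CM_def by blast
  then show "N_op n tau (f (act_tab s u)) = act_M s (N_op n tau (f u))" by (simp add: N_op_act_M[OF s])
qed

lemma phi_hat_eqI:
  assumes "\<forall>v\<in>specht nu. class_sum_tab (sum_mset nu) rho v = (\<lambda>T. c * v T)"
  shows "phi_hat nu rho = c"
proof -
  obtain t where t: "t \<in> tableaux nu" using ex_tableau by blast
  have "polytabloid nu t (tabloid_of nu t id) \<noteq> 0"
    using polytabloid_tabloid_of[OF t column_group_id] by simp
  then show ?thesis
    unfolding phi_hat_def by (rule the_scalar_eq[OF assms polytabloid_in_specht[OF t]])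
qed

lemma class_sum_M_equivariant:
  assumes f: "equivariant_into_CM n nu f" and nm: "sum_mset nu = 2 * n" and v: "v \<in> specht nu"
  shows "class_sum_M n mu (f v) = f (class_sum_tab (2 * n) mu v)"
proof -
  let ?P = "perms_of_type (2 * n) mu"
  note fp = equivariant_into_CMD[OF f]
  have acts: "\<forall>s\<in>?P. act_tab s v \<in> specht nu"
    using act_tab_specht[OF _ v] perms_of_type_permutes nm by simp
  have "f (\<lambda>T. \<Sum>s\<in>?P. 1 * act_tab s v T) = (\<lambda>B. \<Sum>s\<in>?P. 1 * f (act_tab s v) B)"
    using linear_on_sum[OF lincomb_closed_specht fp(2) finite_perms_of_type acts, of "\<lambda>_. 1"] by blast
  then show ?thesis
    using fp(3)[OF perms_of_type_permutes v] unfolding class_sum_M_def class_sum_tab_def by simp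
qed

text \<open>By multiplicity one every equivariant map into \<open>\<complex>[M\<^sub>2\<^sub>n]\<close> is a multiple of \<open>f\<close>, so
  \<open>N\<^sub>2\<^sub>\<tau>\<close> acts on all of \<open>V_in_CM n lam\<close> by its eigenvalue on \<open>f e\<^sub>t\<close>.\<close>

lemma theta_hat_eq:
  assumes f: "equivariant_into_CM n (double lam) f" and nm: "sum_mset lam = n"
    and t: "t \<in> tableaux (double lam)" and nz: "f (polytabloid (double lam) t) B0 \<noteq> 0"
  shows "N_op n tau (f (polytabloid (double lam) t)) =
    (\<lambda>B. theta_hat n lam tau * f (polytabloid (double lam) t) B)"
proof -
  let ?nu = "double lam" and ?e = "polytabloid (double lam) t"
  have m: "sum_mset ?nu = 2 * n" using sum_double nm by simp
  have nz': "f ?e \<noteq> (\<lambda>B. 0)" using nz by auto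
  have fN: "equivariant_into_CM n ?nu (\<lambda>v. N_op n tau (f v))" by (rule equivariant_into_CM_N_op[OF f])
  obtain th where th: "N_op n tau (f ?e) = (\<lambda>B. th * f ?e B)"
    using equivariant_into_CM_proportional_on_polytabloid[OF m t f fN nz'] by blast
  have "\<forall>u\<in>V_in_CM n lam. N_op n tau u = (\<lambda>B. th * u B)"
  proof
    fix u assume "u \<in> V_in_CM n lam"
    then obtain g v where g: "equivariant_into_CM n ?nu g" and v: "v \<in> specht ?nu" and u: "u = g v"
      unfolding V_in_CM_def by blast
    obtain c where c: "g ?e = (\<lambda>B. c * f ?e B)"
      using equivariant_into_CM_proportional_on_polytabloid[OF m t f g nz'] by blast
    show "N_op n tau u = (\<lambda>B. th * u B)"
      unfolding u equivariant_into_CM_proportional[OF m t f g c v] N_op_scale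
        equivariant_into_CM_proportional[OF m t f fN th v] by (simp add: mult_ac)
  qed
  moreover have "f ?e \<in> V_in_CM n lam" unfolding V_in_CM_def using f polytabloid_in_specht[OF t] by blast
  ultimately have "theta_hat n lam tau = th" unfolding theta_hat_def using nz by (rule the_scalar_eq)
  then show ?thesis using th by simp
qed

theorem lemma3p2:
  fixes n :: nat and mu lam :: "nat multiset"
  assumes "1 \<le> n" and "is_partition (2 * n) mu" and "is_partition n lam"
  shows "phi_hat (double lam) mu =
           (\<Sum>tau\<in>{tau. is_partition n tau}. of_nat (m_count n mu tau) * theta_hat n lam tau)"
proof -
  have lamn: "sum_mset lam = n" using assms(3) unfolding is_partition_def by simp
  have m: "sum_mset (double lam) = 2 * n" using sum_double lamn by simp
  obtain t f where t: "t \<in> tableaux (double lam)" and f: "equivariant_into_CM n (double lam) f"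
    and nz: "f (polytabloid (double lam) t) (I_match n) \<noteq> 0"
    using ex_equivariant_into_CM_nonzero_at_I[OF lamn] by blast
  let ?e = "polytabloid (double lam) t"
  let ?rhs = "\<Sum>tau\<in>{tau. is_partition n tau}. of_nat (m_count n mu tau) * theta_hat n lam tau"
  have e: "?e \<in> specht (double lam)" by (rule polytabloid_in_specht[OF t])
  obtain c where c: "\<forall>v\<in>specht (double lam). class_sum_tab (2 * n) mu v = (\<lambda>T. c * v T)"
    using class_sum_tab_scalar[OF m] by blast
  have "(\<lambda>B. c * f ?e B) = class_sum_M n mu (f ?e)"
    using class_sum_M_equivariant[OF f m e] c e linear_on_scale[OF equivariant_into_CMD(2)[OF f] e] by simp
  also have "\<dots> = (\<lambda>B. ?rhs * f ?e B)"
    unfolding class_sum_M_eq_N_op_sum[OF equivariant_into_CMD(1)[OF f e]] theta_hat_eq[OF f lamn t nz]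
    by (simp add: sum_distrib_left mult_ac)
  finally have "c = ?rhs" using nz by (metis mult_cancel_right)
  then show ?thesis using phi_hat_eqI[of "double lam" mu c] c m by simp
qed

end
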